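(* Let $G$ be a finitely generated sofic group, $\mathcal A$ a finite set, and let $\mathcal P(\mathcal A^G)$ and $\mathcal P_e(\mathcal A^G)$ denote the sets of periodic, respectively periodic ergodic, measures in $\mathrm{Prob}(\mathcal A^G,G)$. Let $\pi:G\to Q$ be a surjective group homomorphism and $\Phi^\pi:\mathcal A^Q\to\mathcal A^G$, $\Phi^\pi(\omega)=\omega\circ\pi$. (i) If $Q$ is PA, then $\Phi^\pi_*(\mathrm{Prob}(\mathcal A^Q,Q))\subseteq\overline{\mathcal P(\mathcal A^G)}$ (weak* closure); in particular every $G$-process $(G,\mathcal A,\mu)$ with $\mu\in\Phi^\pi_*(\mathrm{Prob}(\mathcal A^Q,Q))$ admits a sofic model. (ii) If $Q$ is EPA, then $\Phi^\pi_*(\mathrm{Prob}(\mathcal A^Q,Q))\subseteq\overline{\mathcal P_e(\mathcal A^G)}$; in particular every such $G$-process admits an ergodically sofic model. If moreover $\ker\pi=R(G)$ (so $Q\cong G/R(G)$), then the inclusions in (i) and (ii) are equalities.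
   Context: $G$ acts on $\mathcal A^G$ (product of discrete spaces) by $(h.\omega)(g)=\omega(gh)$; $\mathrm{Prob}(\mathcal A^G,G)$ is the set of $G$-invariant Borel probability measures; a measure is ergodic if invariant sets have measure 0 or 1, and periodic if it is invariant with finite support. A group $Q$ is PA (resp. EPA) if for every finite set $\mathcal A$, the periodic (resp. periodic ergodic) measures are weak* dense in $\mathrm{Prob}(\mathcal A^Q,Q)$. $R(G)$ is the intersection of all finite-index normal subgroups of $G$. Sofic setting: $G$ has fixed finite symmetric generating set $S$; a sofic approximation is $(V_n,\sigma_n)$ with $V_n$ finite, $\sigma_n:G\to\mathrm{Sym}(V_n)$, $|\{v:\sigma_n^g\sigma_n^h(v)=\sigma_n^{gh}(v)\}|/|V_n|\to1$ for all $g,h$, $|\{v:\sigma_n^g(v)\ne v\}|/|V_n|\to1$ for $g\ne e$. For $\rho\in\mathcal A^{V_n}$, $\Pi^{\sigma_n}_v(\rho)=(\rho(\sigma_n^g(v)))_{g}$, $P_\rho^{\sigma_n}=\frac1{|V_n|}\sum_v\delta_{\Pi_v^{\sigma_n}(\rho)}$. $(V_n,\sigma_n,\mu_n)$, $\mu_n\in\mathrm{Prob}(\mathcal A^{V_n})$, is a sofic model for $(G,\mathcal A,\mu)$ if for every weak* neighbourhood $\mathcal O$ of $\mu$, $|\{v:(\Pi_v^{\sigma_n})_*\mu_n\in\mathcal O\}|/|V_n|\to1$; it is an ergodically sofic model if in addition $\mu_n(\{\rho:P_\rho^{\sigma_n}\in\mathcal O\})\to1$ for every such $\mathcal O$. 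*)

theory Defs
  imports "HOL-Probability.Probability" "HOL-Algebra.Algebra"
begin

text \<open>A^G as a measurable space: product sigma algebra of discrete spaces (for a
countable group G this coincides with the Borel sigma algebra of the product topology).\<close>
definition shift_space :: "('g, 'b) monoid_scheme \<Rightarrow> 'a set \<Rightarrow> ('g \<Rightarrow> 'a) measure" where
  "shift_space G A = PiM (carrier G) (\<lambda>_. count_space A)"

definition shift_top :: "('g, 'b) monoid_scheme \<Rightarrow> 'a set \<Rightarrow> ('g \<Rightarrow> 'a) topology" where
  "shift_top G A = product_topology (\<lambda>_. discrete_topology A) (carrier G)"

definition shift :: "('g, 'b) monoid_scheme \<Rightarrow> 'g \<Rightarrow> ('g \<Rightarrow> 'a) \<Rightarrow> ('g \<Rightarrow> 'a)" where
  "shift G h \<omega> = (\<lambda>g\<in>carrier G. \<omega> (g \<otimes>\<^bsub>G\<^esub> h))"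

definition Prob_meas :: "('g, 'b) monoid_scheme \<Rightarrow> 'a set \<Rightarrow> ('g \<Rightarrow> 'a) measure set" where
  "Prob_meas G A = {\<mu>. prob_space \<mu> \<and> sets \<mu> = sets (shift_space G A)}"

definition InvProb :: "('g, 'b) monoid_scheme \<Rightarrow> 'a set \<Rightarrow> ('g \<Rightarrow> 'a) measure set" where
  "InvProb G A = {\<mu> \<in> Prob_meas G A.
     \<forall>h\<in>carrier G. distr \<mu> (shift_space G A) (shift G h) = \<mu>}"

definition msupport :: "('g, 'b) monoid_scheme \<Rightarrow> 'a set \<Rightarrow> ('g \<Rightarrow> 'a) measure \<Rightarrow> ('g \<Rightarrow> 'a) set" where
  "msupport G A \<mu> = {\<omega> \<in> topspace (shift_top G A).
     \<forall>U. openin (shift_top G A) U \<and> \<omega> \<in> U \<longrightarrow> emeasure \<mu> U > 0}"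

definition periodic_meas :: "('g, 'b) monoid_scheme \<Rightarrow> 'a set \<Rightarrow> ('g \<Rightarrow> 'a) measure set" where
  "periodic_meas G A = {\<mu> \<in> InvProb G A. finite (msupport G A \<mu>)}"

definition ergodic_meas :: "('g, 'b) monoid_scheme \<Rightarrow> 'a set \<Rightarrow> ('g \<Rightarrow> 'a) measure set" where
  "ergodic_meas G A = {\<mu> \<in> InvProb G A.
     \<forall>B\<in>sets \<mu>. (\<forall>h\<in>carrier G. {\<omega> \<in> space \<mu>. shift G h \<omega> \<in> B} = B)
        \<longrightarrow> measure \<mu> B = 0 \<or> measure \<mu> B = 1}"

definition wstar_basic ::
  "('g, 'b) monoid_scheme \<Rightarrow> 'a set \<Rightarrow> ('g \<Rightarrow> 'a) measure \<Rightarrow> (('g \<Rightarrow> 'a) \<Rightarrow> real) set \<Rightarrow> real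
     \<Rightarrow> ('g \<Rightarrow> 'a) measure set" where
  "wstar_basic G A \<mu> F \<epsilon> = {\<nu> \<in> Prob_meas G A.
     \<forall>f\<in>F. \<bar>integral\<^sup>L \<nu> f - integral\<^sup>L \<mu> f\<bar> < \<epsilon>}"

definition wstar_nbhd ::
  "('g, 'b) monoid_scheme \<Rightarrow> 'a set \<Rightarrow> ('g \<Rightarrow> 'a) measure \<Rightarrow> ('g \<Rightarrow> 'a) measure set \<Rightarrow> bool" where
  "wstar_nbhd G A \<mu> U \<longleftrightarrow> (\<exists>F \<epsilon>. finite F \<and> \<epsilon> > 0 \<and>
     (\<forall>f\<in>F. continuous_map (shift_top G A) euclideanreal f) \<and>
     wstar_basic G A \<mu> F \<epsilon> \<subseteq> U)"

definition wstar_closure ::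
  "('g, 'b) monoid_scheme \<Rightarrow> 'a set \<Rightarrow> ('g \<Rightarrow> 'a) measure set \<Rightarrow> ('g \<Rightarrow> 'a) measure set" where
  "wstar_closure G A S = {\<mu> \<in> Prob_meas G A. \<forall>U. wstar_nbhd G A \<mu> U \<longrightarrow> U \<inter> S \<noteq> {}}"

text \<open>Finite alphabets are taken as finite sets of naturals (every finite set is in
bijection with one of these).\<close>
definition PA :: "('q, 'b) monoid_scheme \<Rightarrow> bool" where
  "PA Q \<longleftrightarrow> (\<forall>A :: nat set. finite A \<longrightarrow>
     InvProb Q A \<subseteq> wstar_closure Q A (periodic_meas Q A))"

definition EPA :: "('q, 'b) monoid_scheme \<Rightarrow> bool" where
  "EPA Q \<longleftrightarrow> (\<forall>A :: nat set. finite A \<longrightarrow>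
     InvProb Q A \<subseteq> wstar_closure Q A (periodic_meas Q A \<inter> ergodic_meas Q A))"

definition residual :: "('g, 'b) monoid_scheme \<Rightarrow> 'g set" where
  "residual G = carrier G \<inter> \<Inter>{N. normal N G \<and> finite (rcosets\<^bsub>G\<^esub> N)}"

definition fin_gen :: "('g, 'b) monoid_scheme \<Rightarrow> bool" where
  "fin_gen G \<longleftrightarrow> (\<exists>S. finite S \<and> S \<subseteq> carrier G \<and> generate G S = carrier G)"

definition sofic_approx ::
  "('g, 'b) monoid_scheme \<Rightarrow> (nat \<Rightarrow> nat set) \<Rightarrow> (nat \<Rightarrow> 'g \<Rightarrow> nat \<Rightarrow> nat) \<Rightarrow> bool" where
  "sofic_approx G V \<sigma> \<longleftrightarrow>
     (\<forall>n. finite (V n) \<and> (\<forall>g\<in>carrier G. bij_betw (\<sigma> n g) (V n) (V n))) \<and>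
     (\<forall>g\<in>carrier G. \<forall>h\<in>carrier G.
        (\<lambda>n. real (card {v \<in> V n. \<sigma> n g (\<sigma> n h v) = \<sigma> n (g \<otimes>\<^bsub>G\<^esub> h) v}) / real (card (V n)))
          \<longlonglongrightarrow> 1) \<and>
     (\<forall>g\<in>carrier G. g \<noteq> \<one>\<^bsub>G\<^esub> \<longrightarrow>
        (\<lambda>n. real (card {v \<in> V n. \<sigma> n g v \<noteq> v}) / real (card (V n))) \<longlonglongrightarrow> 1)"

definition sofic :: "('g, 'b) monoid_scheme \<Rightarrow> bool" where
  "sofic G \<longleftrightarrow> (\<exists>V \<sigma>. sofic_approx G V \<sigma>)"

definition Pi_at :: "('g, 'b) monoid_scheme \<Rightarrow> ('g \<Rightarrow> nat \<Rightarrow> nat) \<Rightarrow> nat \<Rightarrow> (nat \<Rightarrow> 'a) \<Rightarrow> ('g \<Rightarrow> 'a)" where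
  "Pi_at G s v \<rho> = (\<lambda>g\<in>carrier G. \<rho> (s g v))"

definition empirical ::
  "('g, 'b) monoid_scheme \<Rightarrow> 'a set \<Rightarrow> nat set \<Rightarrow> ('g \<Rightarrow> nat \<Rightarrow> nat) \<Rightarrow> (nat \<Rightarrow> 'a) \<Rightarrow> ('g \<Rightarrow> 'a) measure" where
  "empirical G A W s \<rho> = distr (uniform_measure (count_space W) W) (shift_space G A) (\<lambda>v. Pi_at G s v \<rho>)"

definition sofic_model ::
  "('g, 'b) monoid_scheme \<Rightarrow> 'a set \<Rightarrow> (nat \<Rightarrow> nat set) \<Rightarrow> (nat \<Rightarrow> 'g \<Rightarrow> nat \<Rightarrow> nat)
     \<Rightarrow> (nat \<Rightarrow> (nat \<Rightarrow> 'a) measure) \<Rightarrow> ('g \<Rightarrow> 'a) measure \<Rightarrow> bool" where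
  "sofic_model G A V \<sigma> M \<mu> \<longleftrightarrow> sofic_approx G V \<sigma> \<and>
     (\<forall>n. prob_space (M n) \<and> sets (M n) = sets (PiM (V n) (\<lambda>_. count_space A))) \<and>
     (\<forall>U. wstar_nbhd G A \<mu> U \<longrightarrow>
        (\<lambda>n. real (card {v \<in> V n. distr (M n) (shift_space G A) (Pi_at G (\<sigma> n) v) \<in> U})
               / real (card (V n))) \<longlonglongrightarrow> 1)"

definition ergodic_sofic_model ::
  "('g, 'b) monoid_scheme \<Rightarrow> 'a set \<Rightarrow> (nat \<Rightarrow> nat set) \<Rightarrow> (nat \<Rightarrow> 'g \<Rightarrow> nat \<Rightarrow> nat)
     \<Rightarrow> (nat \<Rightarrow> (nat \<Rightarrow> 'a) measure) \<Rightarrow> ('g \<Rightarrow> 'a) measure \<Rightarrow> bool" where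
  "ergodic_sofic_model G A V \<sigma> M \<mu> \<longleftrightarrow> sofic_model G A V \<sigma> M \<mu> \<and>
     (\<forall>U. wstar_nbhd G A \<mu> U \<longrightarrow>
        (\<lambda>n. measure (M n) {\<rho> \<in> space (M n). empirical G A (V n) (\<sigma> n) \<rho> \<in> U}) \<longlonglongrightarrow> 1)"

definition has_sofic_model :: "('g, 'b) monoid_scheme \<Rightarrow> 'a set \<Rightarrow> ('g \<Rightarrow> 'a) measure \<Rightarrow> bool" where
  "has_sofic_model G A \<mu> \<longleftrightarrow> (\<exists>V \<sigma> M. sofic_model G A V \<sigma> M \<mu>)"

definition has_ergodic_sofic_model :: "('g, 'b) monoid_scheme \<Rightarrow> 'a set \<Rightarrow> ('g \<Rightarrow> 'a) measure \<Rightarrow> bool" where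
  "has_ergodic_sofic_model G A \<mu> \<longleftrightarrow> (\<exists>V \<sigma> M. ergodic_sofic_model G A V \<sigma> M \<mu>)"

definition Phi :: "('g, 'b) monoid_scheme \<Rightarrow> ('g \<Rightarrow> 'q) \<Rightarrow> ('q \<Rightarrow> 'a) \<Rightarrow> ('g \<Rightarrow> 'a)" where
  "Phi G \<pi> \<omega> = (\<lambda>g\<in>carrier G. \<omega> (\<pi> g))"

definition Phi_push ::
  "('g, 'b) monoid_scheme \<Rightarrow> 'a set \<Rightarrow> ('g \<Rightarrow> 'q) \<Rightarrow> ('q \<Rightarrow> 'a) measure \<Rightarrow> ('g \<Rightarrow> 'a) measure" where
  "Phi_push G A \<pi> \<mu> = distr \<mu> (shift_space G A) (Phi G \<pi>)"

end

theory Submission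
  imports Defs
begin

text \<open>
  Pulling back along the surjection \<open>\<pi>\<close> is weak* continuous and maps \<open>Q\<close>-invariant,
  periodic and ergodic measures to \<open>G\<close>-invariant, periodic and ergodic ones; so if periodic
  (ergodic) measures are dense for \<open>Q\<close>, every pulled-back measure is a limit of periodic
  (ergodic) \<open>G\<close>-measures.

  A periodic measure \<open>\<nu>\<close> lives on a finite support \<open>S\<close> on which \<open>G\<close> acts through the finite
  group \<open>W\<close> of induced permutations. Multiplying a sofic approximation by the left action
  of \<open>G\<close> on \<open>W\<close> gives sofic approximations on which \<open>\<nu>\<close> is exactly the local law, and for
  ergodic \<open>\<nu>\<close> exactly the empirical law of almost every lifted configuration. Since the weak*
  topology is first countable, a limit \<open>\<mu>\<close> of periodic measures is a limit of a sequence
  \<open>\<nu>\<^sub>k\<close>, and the corresponding approximations form an (ergodically) sofic model of \<open>\<mu>\<close>.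

  For the reverse inclusions: the stabilizer of the support of a periodic measure is a
  normal subgroup of finite index, so it contains \<open>R(G)\<close>. Hence periodic measures, and by
  closedness their limits, are carried by \<open>R(G)\<close>-invariant configurations, which descend to
  \<open>G/R(G) = Q\<close>.
\<close>

section \<open>Cylinders and the product topology on \<open>A^G\<close>\<close>

definition cylinder :: "('g,'b) monoid_scheme \<Rightarrow> 'a set \<Rightarrow> 'g set \<Rightarrow> ('g \<Rightarrow> 'a) \<Rightarrow> ('g \<Rightarrow> 'a) set" where
  "cylinder G A J y = {\<omega> \<in> PiE (carrier G) (\<lambda>_. A). \<forall>j\<in>J. \<omega> j = y j}"

definition determined_by :: "('g,'b) monoid_scheme \<Rightarrow> 'a set \<Rightarrow> 'g set \<Rightarrow> ('g \<Rightarrow> 'a) set \<Rightarrow> bool" where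
  "determined_by G A J E \<longleftrightarrow> E \<subseteq> PiE (carrier G) (\<lambda>_. A) \<and>
     (\<forall>\<omega>\<in>E. \<forall>\<omega>'\<in>PiE (carrier G) (\<lambda>_. A). (\<forall>j\<in>J. \<omega> j = \<omega>' j) \<longrightarrow> \<omega>' \<in> E)"

definition depends_on :: "('g,'b) monoid_scheme \<Rightarrow> 'a set \<Rightarrow> 'g set \<Rightarrow> (('g \<Rightarrow> 'a) \<Rightarrow> 'c) \<Rightarrow> bool" where
  "depends_on G A J f \<longleftrightarrow> (\<forall>\<omega>\<in>PiE (carrier G) (\<lambda>_. A). \<forall>\<omega>'\<in>PiE (carrier G) (\<lambda>_. A).
      (\<forall>j\<in>J. \<omega> j = \<omega>' j) \<longrightarrow> f \<omega> = f \<omega>')"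

lemma space_shift_space[simp]: "space (shift_space G A) = PiE (carrier G) (\<lambda>_. A)"
  by (simp add: shift_space_def space_PiM)

lemma topspace_shift_top[simp]: "topspace (shift_top G A) = PiE (carrier G) (\<lambda>_. A)"
  by (simp add: shift_top_def topspace_product_topology)

lemma space_eq_shift_space:
  assumes "sets \<nu> = sets (shift_space G A)"
  shows "space \<nu> = PiE (carrier G) (\<lambda>_. A)"
  using sets_eq_imp_space_eq[OF assms] by simp

lemma measurable_from_sets:
  assumes "sets \<mu> = sets M" "f \<in> measurable M N"
  shows "f \<in> measurable \<mu> N"
  using measurable_cong_sets[of \<mu> M N N] assms by simp

lemma Prob_meas_alphabet_nonempty:
  assumes "monoid G" and "\<mu> \<in> Prob_meas G A"
  shows "A \<noteq> {}"
proof
  assume "A = {}"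
  then have "space \<mu> = {}"
    using assms space_eq_shift_space[of \<mu> G A] monoid.one_closed[OF assms(1)]
    by (auto simp: Prob_meas_def PiE_eq_empty_iff)
  then show False using assms(2) prob_space.not_empty by (auto simp: Prob_meas_def)
qed

lemma cylinder_subset: "cylinder G A J y \<subseteq> PiE (carrier G) (\<lambda>_. A)"
  by (auto simp: cylinder_def)

lemma cylinder_determined_by: "determined_by G A J (cylinder G A J y)"
  unfolding determined_by_def cylinder_def by auto

lemma coordinate_fiber_sets:
  assumes "j \<in> carrier G"
  shows "{\<omega> \<in> PiE (carrier G) (\<lambda>_. A). \<omega> j = c} \<in> sets (shift_space G A)"
proof -
  have m: "(\<lambda>\<omega>. \<omega> j) \<in> measurable (shift_space G A) (count_space A)"
    unfolding shift_space_def using assms by (rule measurable_component_singleton)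
  have "(\<lambda>\<omega>. \<omega> j) -` ({c} \<inter> A) \<inter> space (shift_space G A) \<in> sets (shift_space G A)"
    by (rule measurable_sets[OF m]) auto
  moreover have "(\<lambda>\<omega>. \<omega> j) -` ({c} \<inter> A) \<inter> space (shift_space G A)
       = {\<omega> \<in> PiE (carrier G) (\<lambda>_. A). \<omega> j = c}"
    using assms by auto
  ultimately show ?thesis by simp
qed

lemma cylinder_sets:
  assumes "countable J" "J \<subseteq> carrier G"
  shows "cylinder G A J y \<in> sets (shift_space G A)"
proof (cases "J = {}")
  case True
  then have "cylinder G A J y = space (shift_space G A)" by (auto simp: cylinder_def)
  then show ?thesis by (metis sets.top)
next
  case False
  have "cylinder G A J y = (\<Inter>j\<in>J. {\<omega> \<in> PiE (carrier G) (\<lambda>_. A). \<omega> j = y j})"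
    using False by (auto simp: cylinder_def)
  also have "\<dots> \<in> sets (shift_space G A)"
    using assms False by (intro sets.countable_INT') (force intro: coordinate_fiber_sets)+
  finally show ?thesis .
qed

lemma openin_determined_by:
  assumes "finite J" "J \<subseteq> carrier G" "determined_by G A J E"
  shows "openin (shift_top G A) E"
  unfolding shift_top_def openin_product_topology_alt
proof
  fix x assume x: "x \<in> E"
  then have xA: "x \<in> PiE (carrier G) (\<lambda>_. A)" using assms(3) by (auto simp: determined_by_def)
  define U where "U = (\<lambda>i. if i \<in> J then {x i} else A)"
  have "finite {i \<in> carrier G. U i \<noteq> topspace (discrete_topology A)}"
    by (rule finite_subset[OF _ assms(1)]) (auto simp: U_def)
  moreover have "\<forall>i\<in>carrier G. openin (discrete_topology A) (U i)"
    using xA by (auto simp: U_def openin_discrete_topology)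
  moreover have "x \<in> PiE (carrier G) U" using xA by (auto simp: U_def PiE_iff)
  moreover have "PiE (carrier G) U \<subseteq> E"
  proof
    fix \<omega> assume w: "\<omega> \<in> PiE (carrier G) U"
    have wA: "\<omega> \<in> PiE (carrier G) (\<lambda>_. A)"
      using w xA assms(2) by (auto simp: U_def PiE_iff split: if_splits)
    have "\<forall>j\<in>J. x j = \<omega> j"
    proof
      fix j assume j: "j \<in> J"
      then have "\<omega> j \<in> U j" using w assms(2) by (auto simp: PiE_iff)
      then show "x j = \<omega> j" using j by (simp add: U_def)
    qed
    then show "\<omega> \<in> E" using assms(3) x wA unfolding determined_by_def by blast
  qed
  ultimately show "\<exists>U. finite {i \<in> carrier G. U i \<noteq> topspace (discrete_topology A)} \<and>
            (\<forall>i\<in>carrier G. openin (discrete_topology A) (U i)) \<and> x \<in> PiE (carrier G) U \<and> PiE (carrier G) U \<subseteq> E"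
    by blast
qed

lemma openin_cylinder:
  assumes "finite J" "J \<subseteq> carrier G"
  shows "openin (shift_top G A) (cylinder G A J y)"
  using assms cylinder_determined_by by (rule openin_determined_by)

lemma continuous_map_depends_on:
  assumes "finite J" "J \<subseteq> carrier G" "depends_on G A J f"
  shows "continuous_map (shift_top G A) euclideanreal f"
  unfolding continuous_map_def
proof (intro conjI allI impI)
  show "f \<in> topspace (shift_top G A) \<rightarrow> topspace euclideanreal" by simp
  fix U :: "real set"
  have "determined_by G A J {x \<in> topspace (shift_top G A). f x \<in> U}"
    unfolding determined_by_def
  proof (intro conjI ballI impI)
    fix \<omega> \<omega>' assume w: "\<omega> \<in> {x \<in> topspace (shift_top G A). f x \<in> U}"
      and w': "\<omega>' \<in> PiE (carrier G) (\<lambda>_. A)" and agree: "\<forall>j\<in>J. \<omega> j = \<omega>' j"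
    have "\<omega> \<in> PiE (carrier G) (\<lambda>_. A)" using w by simp
    then have "f \<omega> = f \<omega>'" using assms(3) w' agree unfolding depends_on_def by blast
    then show "\<omega>' \<in> {x \<in> topspace (shift_top G A). f x \<in> U}" using w w' by simp
  qed auto
  then show "openin (shift_top G A) {x \<in> topspace (shift_top G A). f x \<in> U}"
    using assms(1,2) by (rule openin_determined_by[rotated 2])
qed

lemma continuous_map_indicator_determined_by:
  assumes "finite J" "J \<subseteq> carrier G" "determined_by G A J E"
  shows "continuous_map (shift_top G A) euclideanreal (indicator E :: _ \<Rightarrow> real)"
proof (rule continuous_map_depends_on[OF assms(1,2)])
  show "depends_on G A J (indicator E :: _ \<Rightarrow> real)"
    unfolding depends_on_def
  proof (intro ballI impI)
    fix \<omega> \<omega>' assume w: "\<omega> \<in> PiE (carrier G) (\<lambda>_. A)" "\<omega>' \<in> PiE (carrier G) (\<lambda>_. A)"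
      and agree: "\<forall>j\<in>J. \<omega> j = \<omega>' j"
    then have "\<forall>j\<in>J. \<omega>' j = \<omega> j" by simp
    then have "\<omega> \<in> E \<longleftrightarrow> \<omega>' \<in> E" using assms(3) w agree unfolding determined_by_def by blast
    then show "(indicator E \<omega> :: real) = indicator E \<omega>'" by (simp add: indicator_def)
  qed
qed

lemma cylinder_subset_openin:
  assumes "openin (shift_top G A) U" "x \<in> U"
  shows "\<exists>K. finite K \<and> K \<subseteq> carrier G \<and> cylinder G A K x \<subseteq> U"
proof -
  from assms obtain V where V: "finite {i \<in> carrier G. V i \<noteq> topspace (discrete_topology A)}"
    "\<forall>i\<in>carrier G. openin (discrete_topology A) (V i)" "x \<in> PiE (carrier G) V" "PiE (carrier G) V \<subseteq> U"
    unfolding shift_top_def openin_product_topology_alt by blast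
  define K where "K = {i \<in> carrier G. V i \<noteq> A}"
  have "cylinder G A K x \<subseteq> PiE (carrier G) V"
  proof
    fix \<omega> assume w: "\<omega> \<in> cylinder G A K x"
    show "\<omega> \<in> PiE (carrier G) V"
    proof (rule PiE_I)
      fix i assume i: "i \<in> carrier G"
      show "\<omega> i \<in> V i"
      proof (cases "i \<in> K")
        case True then show ?thesis using w V(3) i by (auto simp: cylinder_def PiE_iff)
      next
        case False then show ?thesis using w i by (auto simp: cylinder_def K_def PiE_iff)
      qed
    next
      fix i assume "i \<notin> carrier G" then show "\<omega> i = undefined" using w by (auto simp: cylinder_def PiE_iff extensional_def)
    qed
  qed
  then show ?thesis using V by (intro exI[of _ K]) (auto simp: K_def)
qed

lemma cylinder_separates_finite:
  assumes "finite F" "F \<subseteq> PiE (carrier G) (\<lambda>_. A)" "\<omega> \<in> PiE (carrier G) (\<lambda>_. A)"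
  obtains K where "finite K" "K \<subseteq> carrier G" "\<And>x. x \<in> F \<Longrightarrow> x \<in> cylinder G A K \<omega> \<Longrightarrow> x = \<omega>"
proof -
  have "\<forall>x\<in>F - {\<omega>}. \<exists>g. g \<in> carrier G \<and> x g \<noteq> \<omega> g"
  proof
    fix x assume x: "x \<in> F - {\<omega>}"
    then have "x \<in> PiE (carrier G) (\<lambda>_. A)" using assms(2) by blast
    then show "\<exists>g. g \<in> carrier G \<and> x g \<noteq> \<omega> g" using x PiE_ext[OF _ assms(3)] by blast
  qed
  then obtain gs where gs: "\<And>x. x \<in> F - {\<omega>} \<Longrightarrow> gs x \<in> carrier G \<and> x (gs x) \<noteq> \<omega> (gs x)"
    by metis
  show ?thesis
  proof (rule that)
    show "finite (gs ` (F - {\<omega>}))" using assms(1) by simp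
    show "gs ` (F - {\<omega>}) \<subseteq> carrier G" using gs by blast
    fix x assume x: "x \<in> F" and c: "x \<in> cylinder G A (gs ` (F - {\<omega>})) \<omega>"
    show "x = \<omega>"
    proof (rule ccontr)
      assume "x \<noteq> \<omega>"
      then have "x \<in> F - {\<omega>}" using x by blast
      then show False using gs c unfolding cylinder_def by blast
    qed
  qed
qed

definition cylinders :: "('g,'b) monoid_scheme \<Rightarrow> 'a set \<Rightarrow> ('g \<Rightarrow> 'a) set set" where
  "cylinders G A = (\<lambda>(K,y). cylinder G A K y) ` (SIGMA K:{K. finite K \<and> K \<subseteq> carrier G}. PiE K (\<lambda>_. A))"

lemma countable_cylinders:
  assumes "countable (carrier G)" "countable A"
  shows "countable (cylinders G A)"
  unfolding cylinders_def
  using assms by (intro countable_image countable_SIGMA countable_Collect_finite_subset countable_PiE) auto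

lemma cylinder_in_cylinders:
  assumes "finite K" "K \<subseteq> carrier G" "x \<in> PiE (carrier G) (\<lambda>_. A)"
  shows "cylinder G A K x \<in> cylinders G A"
proof -
  have "cylinder G A K x = cylinder G A K (restrict x K)" by (auto simp: cylinder_def)
  moreover have "restrict x K \<in> PiE K (\<lambda>_. A)" using assms by auto
  ultimately show ?thesis using assms unfolding cylinders_def
    by (intro image_eqI[where x="(K, restrict x K)"]) auto
qed

lemma cylinders_sets: "C \<in> cylinders G A \<Longrightarrow> C \<in> sets (shift_space G A)"
  unfolding cylinders_def by (auto intro!: cylinder_sets countable_finite)

lemma openin_sets_shift_space:
  assumes "countable (carrier G)" "countable A" "openin (shift_top G A) U"
  shows "U \<in> sets (shift_space G A)"
proof -
  define F where "F = {C \<in> cylinders G A. C \<subseteq> U}"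
  have "U = \<Union>F"
  proof
    show "U \<subseteq> \<Union>F"
    proof
      fix x assume x: "x \<in> U"
      then have xA: "x \<in> PiE (carrier G) (\<lambda>_. A)" using openin_subset[OF assms(3)] by auto
      obtain K where K: "finite K" "K \<subseteq> carrier G" "cylinder G A K x \<subseteq> U"
        using cylinder_subset_openin[OF assms(3) x] by blast
      have "cylinder G A K x \<in> F" using K cylinder_in_cylinders[OF K(1,2) xA] by (auto simp: F_def)
      moreover have "x \<in> cylinder G A K x" using xA by (auto simp: cylinder_def)
      ultimately show "x \<in> \<Union>F" by blast
    qed
  qed (auto simp: F_def)
  also have "\<dots> \<in> sets (shift_space G A)"
    using countable_cylinders[OF assms(1,2)] cylinders_sets
    by (intro sets.countable_Union) (auto simp: F_def intro: countable_subset)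
  finally show ?thesis .
qed

lemma continuous_map_borel_measurable:
  assumes "countable (carrier G)" "countable A" "continuous_map (shift_top G A) euclideanreal f"
  shows "f \<in> borel_measurable (shift_space G A)"
proof (rule borel_measurableI)
  fix S :: "real set" assume "open S"
  then have "openin (shift_top G A) {x \<in> topspace (shift_top G A). f x \<in> S}"
    using assms(3) by (intro openin_continuous_map_preimage) auto
  then have "{x \<in> topspace (shift_top G A). f x \<in> S} \<in> sets (shift_space G A)"
    using assms by (intro openin_sets_shift_space) auto
  moreover have "f -` S \<inter> space (shift_space G A) = {x \<in> topspace (shift_top G A). f x \<in> S}"
    by auto
  ultimately show "f -` S \<inter> space (shift_space G A) \<in> sets (shift_space G A)" by simp
qed

lemma compact_space_shift_top: "finite A \<Longrightarrow> compact_space (shift_top G A)"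
  by (simp add: shift_top_def compact_space_product_topology compact_space_discrete_topology)

lemma continuous_map_almost_depends_on:
  assumes "finite A" "continuous_map (shift_top G A) euclideanreal f" "\<delta> > 0"
  shows "\<exists>J. finite J \<and> J \<subseteq> carrier G \<and> (\<forall>\<omega>\<in>PiE (carrier G) (\<lambda>_. A). \<forall>\<omega>'\<in>PiE (carrier G) (\<lambda>_. A).
            (\<forall>j\<in>J. \<omega> j = \<omega>' j) \<longrightarrow> \<bar>f \<omega> - f \<omega>'\<bar> < \<delta>)"
proof -
  let ?X = "PiE (carrier G) (\<lambda>_. A)"
  have "\<forall>x\<in>?X. \<exists>K. finite K \<and> K \<subseteq> carrier G \<and> cylinder G A K x \<subseteq> {\<omega> \<in> topspace (shift_top G A). f \<omega> \<in> ball (f x) (\<delta>/2)}"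
  proof
    fix x assume x: "x \<in> ?X"
    have "openin (shift_top G A) {\<omega> \<in> topspace (shift_top G A). f \<omega> \<in> ball (f x) (\<delta>/2)}"
      using assms(2) by (intro openin_continuous_map_preimage) auto
    moreover have "x \<in> {\<omega> \<in> topspace (shift_top G A). f \<omega> \<in> ball (f x) (\<delta>/2)}"
      using x assms(3) by auto
    ultimately show "\<exists>K. finite K \<and> K \<subseteq> carrier G \<and> cylinder G A K x \<subseteq> {\<omega> \<in> topspace (shift_top G A). f \<omega> \<in> ball (f x) (\<delta>/2)}"
      by (rule cylinder_subset_openin)
  qed
  from bchoice[OF this] obtain K where K0: "\<forall>x\<in>?X. finite (K x) \<and> K x \<subseteq> carrier G \<and>
       cylinder G A (K x) x \<subseteq> {\<omega> \<in> topspace (shift_top G A). f \<omega> \<in> ball (f x) (\<delta>/2)}"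
    by blast
  have K: "\<And>x. x \<in> ?X \<Longrightarrow> finite (K x) \<and> K x \<subseteq> carrier G \<and>
       cylinder G A (K x) x \<subseteq> {\<omega> \<in> topspace (shift_top G A). f \<omega> \<in> ball (f x) (\<delta>/2)}"
    using K0 by blast
  have "compactin (shift_top G A) (topspace (shift_top G A))"
    using compact_space_shift_top[OF assms(1)] by (simp add: compact_space_def)
  moreover have "\<forall>U\<in>(\<lambda>x. cylinder G A (K x) x) ` ?X. openin (shift_top G A) U"
    using K by (auto intro!: openin_cylinder)
  moreover have "topspace (shift_top G A) \<subseteq> \<Union>((\<lambda>x. cylinder G A (K x) x) ` ?X)"
    by (auto simp: cylinder_def)
  ultimately obtain F where F: "finite F" "F \<subseteq> (\<lambda>x. cylinder G A (K x) x) ` ?X" "topspace (shift_top G A) \<subseteq> \<Union>F"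
    unfolding compactin_def by (elim conjE allE[where x="(\<lambda>x. cylinder G A (K x) x) ` ?X"]) blast
  then obtain X0 where X0: "X0 \<subseteq> ?X" "finite X0" "F = (\<lambda>x. cylinder G A (K x) x) ` X0"
    using finite_subset_image[OF F(1,2)] by blast
  define J where "J = \<Union>(K ` X0)"
  have "finite J" unfolding J_def using X0 K by (intro finite_UN_I) auto
  moreover have "J \<subseteq> carrier G"
  proof (unfold J_def, rule UN_least)
    fix x assume "x \<in> X0" then show "K x \<subseteq> carrier G" using K X0(1) by blast
  qed
  moreover have "\<forall>\<omega>\<in>?X. \<forall>\<omega>'\<in>?X. (\<forall>j\<in>J. \<omega> j = \<omega>' j) \<longrightarrow> \<bar>f \<omega> - f \<omega>'\<bar> < \<delta>"
  proof (intro ballI impI)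
    fix \<omega> \<omega>' assume w: "\<omega> \<in> ?X" "\<omega>' \<in> ?X" and agree: "\<forall>j\<in>J. \<omega> j = \<omega>' j"
    obtain x where x: "x \<in> X0" "\<omega> \<in> cylinder G A (K x) x" using F(3) X0(3) w(1) by auto
    have "\<omega>' \<in> cylinder G A (K x) x" using x w agree unfolding J_def cylinder_def by auto
    then have 1: "dist (f x) (f \<omega>') < \<delta>/2" using K[of x] x X0 by auto
    have 2: "dist (f x) (f \<omega>) < \<delta>/2" using K[of x] x X0 by auto
    show "\<bar>f \<omega> - f \<omega>'\<bar> < \<delta>" using 1 2 unfolding dist_real_def by linarith
  qed
  ultimately show ?thesis by blast
qed

section \<open>Integration against cylinders and weak* convergence\<close>

definition pad_outside :: "('g,'b) monoid_scheme \<Rightarrow> 'a \<Rightarrow> 'g set \<Rightarrow> ('g \<Rightarrow> 'a) \<Rightarrow> ('g \<Rightarrow> 'a)" where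
  "pad_outside G a0 J \<omega> = (\<lambda>i\<in>carrier G. if i \<in> J then \<omega> i else a0)"

lemma pad_outside_in: "a0 \<in> A \<Longrightarrow> (\<forall>j\<in>J \<inter> carrier G. \<omega> j \<in> A) \<Longrightarrow> pad_outside G a0 J \<omega> \<in> PiE (carrier G) (\<lambda>_. A)"
  by (auto simp: pad_outside_def)

lemma pad_outside_restrict: "pad_outside G a0 J (restrict \<omega> J) = pad_outside G a0 J \<omega>"
  by (auto simp: pad_outside_def fun_eq_iff)

lemma pad_outside_idem: "J \<subseteq> carrier G \<Longrightarrow> pad_outside G a0 J (pad_outside G a0 J \<omega>) = pad_outside G a0 J \<omega>"
  by (auto simp: pad_outside_def fun_eq_iff)

lemma depends_on_pad_outside:
  fixes G :: "('g,'b) monoid_scheme" and A :: "'a set"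
  shows "depends_on G A J (\<lambda>\<omega>. f (pad_outside G a0 J \<omega>))"
proof (unfold depends_on_def, intro ballI impI)
  fix \<omega> \<omega>' :: "'g \<Rightarrow> 'a" assume "\<forall>j\<in>J. \<omega> j = \<omega>' j"
  then have "pad_outside G a0 J \<omega> = pad_outside G a0 J \<omega>'" by (auto simp: pad_outside_def fun_eq_iff)
  then show "f (pad_outside G a0 J \<omega>) = f (pad_outside G a0 J \<omega>')" by simp
qed

lemma indicator_cylinder:
  assumes "\<omega> \<in> PiE (carrier G) (\<lambda>_. A)" "y \<in> PiE J (\<lambda>_. A)" "J \<subseteq> carrier G"
  shows "indicator (cylinder G A J y) \<omega> = (if y = restrict \<omega> J then 1 else (0::real))"
proof -
  have "\<omega> \<in> cylinder G A J y \<longleftrightarrow> y = restrict \<omega> J"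
  proof
    assume "\<omega> \<in> cylinder G A J y"
    then show "y = restrict \<omega> J" using assms(2) by (auto simp: cylinder_def fun_eq_iff PiE_iff extensional_def)
  next
    assume "y = restrict \<omega> J"
    then show "\<omega> \<in> cylinder G A J y" using assms(1) by (auto simp: cylinder_def)
  qed
  then show ?thesis by (simp add: indicator_def)
qed

lemma integral_depends_on:
  assumes "prob_space \<nu>" "sets \<nu> = sets (shift_space G A)" "finite A" "finite J" "J \<subseteq> carrier G"
    "depends_on G A J g" "a0 \<in> A"
  shows "integral\<^sup>L \<nu> g = (\<Sum>y\<in>PiE J (\<lambda>_. A). g (pad_outside G a0 J y) * measure \<nu> (cylinder G A J y))"
proof -
  let ?P = "PiE J (\<lambda>_. A)"
  have finP: "finite ?P" using assms(3,4) by (simp add: finite_PiE)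
  have sp: "space \<nu> = PiE (carrier G) (\<lambda>_. A)" by (rule space_eq_shift_space[OF assms(2)])
  have eq: "g \<omega> = (\<Sum>y\<in>?P. g (pad_outside G a0 J y) * indicator (cylinder G A J y) \<omega>)"
    if w: "\<omega> \<in> PiE (carrier G) (\<lambda>_. A)" for \<omega>
  proof -
    have "(\<Sum>y\<in>?P. g (pad_outside G a0 J y) * indicator (cylinder G A J y) \<omega>)
        = (\<Sum>y\<in>?P. if y = restrict \<omega> J then g (pad_outside G a0 J y) else 0)"
      using w assms(5) by (intro sum.cong refl) (simp add: indicator_cylinder)
    also have "\<dots> = g (pad_outside G a0 J (restrict \<omega> J))"
    proof -
      have "restrict \<omega> J \<in> ?P" using w assms(5) by auto
      then show ?thesis using finP by (simp add: sum.delta)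
    qed
    also have "g (pad_outside G a0 J (restrict \<omega> J)) = g \<omega>"
    proof -
      have e: "pad_outside G a0 J \<omega> \<in> PiE (carrier G) (\<lambda>_. A)" using w assms(7) by (intro pad_outside_in) auto
      have ag: "\<forall>j\<in>J. pad_outside G a0 J \<omega> j = \<omega> j" using assms(5) by (auto simp: pad_outside_def)
      have "g (pad_outside G a0 J \<omega>) = g \<omega>" using assms(6) e w ag unfolding depends_on_def by blast
      then show ?thesis by (simp add: pad_outside_restrict)
    qed
    finally show ?thesis by simp
  qed
  have cs: "cylinder G A J y \<in> sets \<nu>" for y
    using assms(2,4,5) by (simp add: cylinder_sets countable_finite)
  have fin: "emeasure \<nu> (cylinder G A J y) < \<infinity>" for y
    using finite_measure.emeasure_finite[of \<nu>] assms(1) by (simp add: less_top prob_space_def)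
  have "integral\<^sup>L \<nu> g = integral\<^sup>L \<nu> (\<lambda>\<omega>. \<Sum>y\<in>?P. g (pad_outside G a0 J y) * indicator (cylinder G A J y) \<omega>)"
    by (rule Bochner_Integration.integral_cong) (simp_all add: sp eq)
  also have "\<dots> = (\<Sum>y\<in>?P. integral\<^sup>L \<nu> (\<lambda>\<omega>. g (pad_outside G a0 J y) * indicator (cylinder G A J y) \<omega>))"
    by (rule Bochner_Integration.integral_sum) (intro integrable_mult_right integrable_real_indicator cs fin)
  also have "\<dots> = (\<Sum>y\<in>?P. g (pad_outside G a0 J y) * measure \<nu> (cylinder G A J y))"
  proof (rule sum.cong[OF refl])
    fix y
    have "cylinder G A J y \<inter> space \<nu> = cylinder G A J y" using sp cylinder_subset by blast
    then show "integral\<^sup>L \<nu> (\<lambda>\<omega>. g (pad_outside G a0 J y) * indicator (cylinder G A J y) \<omega>) =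
          g (pad_outside G a0 J y) * measure \<nu> (cylinder G A J y)"
      by (simp add: integral_mult_right_zero integral_indicator)
  qed
  finally show ?thesis .
qed

lemma bounded_continuous_map_shift_top:
  assumes "finite A" and "continuous_map (shift_top G A) euclideanreal f"
  obtains B where "\<And>\<omega>. \<omega> \<in> PiE (carrier G) (\<lambda>_. A) \<Longrightarrow> \<bar>f \<omega>\<bar> \<le> B"
proof -
  have "compactin euclideanreal (f ` topspace (shift_top G A))"
    using compact_space_shift_top[OF assms(1)] assms(2) unfolding compact_space_def by (rule image_compactin)
  then have "bounded (f ` PiE (carrier G) (\<lambda>_. A))" by (simp add: compact_imp_bounded)
  then show ?thesis using that by (auto simp: bounded_iff)
qed

lemma integrable_continuous_map_shift_top:
  assumes \<nu>: "prob_space \<nu>" "sets \<nu> = sets (shift_space G A)" and fA: "finite A"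
    and cG: "countable (carrier G)" and f: "continuous_map (shift_top G A) euclideanreal f"
  shows "integrable \<nu> f"
proof -
  obtain B where B: "\<And>\<omega>. \<omega> \<in> PiE (carrier G) (\<lambda>_. A) \<Longrightarrow> \<bar>f \<omega>\<bar> \<le> B"
    using bounded_continuous_map_shift_top[OF fA f] by blast
  have "f \<in> borel_measurable (shift_space G A)"
    by (rule continuous_map_borel_measurable[OF cG countable_finite[OF fA] f])
  then have "f \<in> borel_measurable \<nu>" by (rule measurable_from_sets[OF \<nu>(2)])
  moreover have "finite_measure \<nu>" using \<nu>(1) by (simp add: prob_space_def)
  moreover have "AE \<omega> in \<nu>. norm (f \<omega>) \<le> B"
    using B space_eq_shift_space[OF \<nu>(2)] by (intro AE_I2) simp
  ultimately show ?thesis by (intro finite_measure.integrable_const_bound)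
qed

lemma integral_approx_cylinders:
  assumes \<nu>: "prob_space \<nu>" "sets \<nu> = sets (shift_space G A)" and fA: "finite A"
    and cG: "countable (carrier G)" and f: "continuous_map (shift_top G A) euclideanreal f"
    and J: "finite J" "J \<subseteq> carrier G"
    and close: "\<forall>\<omega>\<in>PiE (carrier G) (\<lambda>_. A). \<forall>\<omega>'\<in>PiE (carrier G) (\<lambda>_. A).
            (\<forall>j\<in>J. \<omega> j = \<omega>' j) \<longrightarrow> \<bar>f \<omega> - f \<omega>'\<bar> < \<delta>"
    and a0: "a0 \<in> A"
  shows "\<bar>integral\<^sup>L \<nu> f - (\<Sum>y\<in>PiE J (\<lambda>_. A). f (pad_outside G a0 J y) * measure \<nu> (cylinder G A J y))\<bar> \<le> \<delta>"
proof -
  define g where "g \<omega> = f (pad_outside G a0 J \<omega>)" for \<omega>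
  have sp: "space \<nu> = PiE (carrier G) (\<lambda>_. A)" by (rule space_eq_shift_space[OF \<nu>(2)])
  have depg: "depends_on G A J g" unfolding g_def by (rule depends_on_pad_outside)
  have "integral\<^sup>L \<nu> g = (\<Sum>y\<in>PiE J (\<lambda>_. A). f (pad_outside G a0 J y) * measure \<nu> (cylinder G A J y))"
    using integral_depends_on[OF \<nu> fA J depg a0] by (simp add: g_def pad_outside_idem[OF J(2)])
  moreover have "\<bar>integral\<^sup>L \<nu> f - integral\<^sup>L \<nu> g\<bar> \<le> \<delta>"
  proof -
    have intf: "integrable \<nu> f" by (rule integrable_continuous_map_shift_top[OF \<nu> fA cG f])
    have intg: "integrable \<nu> g"
      by (rule integrable_continuous_map_shift_top[OF \<nu> fA cG continuous_map_depends_on[OF J depg]])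
    have close_fg: "\<bar>f \<omega> - g \<omega>\<bar> \<le> \<delta>" if "\<omega> \<in> space \<nu>" for \<omega>
    proof -
      have "\<omega> \<in> PiE (carrier G) (\<lambda>_. A)" using that sp by simp
      moreover from this have "pad_outside G a0 J \<omega> \<in> PiE (carrier G) (\<lambda>_. A)"
        using a0 by (intro pad_outside_in) auto
      moreover have "\<forall>j\<in>J. \<omega> j = pad_outside G a0 J \<omega> j" using J(2) by (auto simp: pad_outside_def)
      ultimately have "\<bar>f \<omega> - f (pad_outside G a0 J \<omega>)\<bar> < \<delta>" using close by blast
      then show ?thesis unfolding g_def by simp
    qed
    have "\<bar>integral\<^sup>L \<nu> f - integral\<^sup>L \<nu> g\<bar> = \<bar>integral\<^sup>L \<nu> (\<lambda>x. f x - g x)\<bar>" using intf intg by simp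
    also have "\<dots> \<le> integral\<^sup>L \<nu> (\<lambda>x. \<bar>f x - g x\<bar>)"
      using integral_norm_bound[of \<nu> "\<lambda>x. f x - g x"] by simp
    also have "\<dots> \<le> integral\<^sup>L \<nu> (\<lambda>x. \<delta>)"
    proof (rule integral_mono)
      show "integrable \<nu> (\<lambda>x. \<bar>f x - g x\<bar>)" using intf intg by simp
      show "integrable \<nu> (\<lambda>x. \<delta>)" using \<nu>(1) by (simp add: prob_space_def finite_measure.integrable_const)
    qed (rule close_fg)
    also have "\<dots> = \<delta>" using prob_space.prob_space[OF \<nu>(1)] by simp
    finally show ?thesis .
  qed
  ultimately show ?thesis by simp
qed

lemma integral_tendsto_if_cylinders_tendsto:
  assumes mu: "prob_space \<mu>" "sets \<mu> = sets (shift_space G A)"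
    and nu: "\<And>n. prob_space (\<nu> n)" "\<And>n. sets (\<nu> n) = sets (shift_space G A)"
    and A: "finite A" "A \<noteq> {}" and cG: "countable (carrier G)"
    and f: "continuous_map (shift_top G A) euclideanreal f"
    and conv: "\<And>J y. finite J \<Longrightarrow> J \<subseteq> carrier G \<Longrightarrow> y \<in> PiE J (\<lambda>_. A) \<Longrightarrow>
        (\<lambda>n. measure (\<nu> n) (cylinder G A J y)) \<longlonglongrightarrow> measure \<mu> (cylinder G A J y)"
  shows "(\<lambda>n. integral\<^sup>L (\<nu> n) f) \<longlonglongrightarrow> integral\<^sup>L \<mu> f"
  unfolding tendsto_iff
proof (intro allI impI)
  fix e :: real assume e: "e > 0"
  obtain a0 where a0: "a0 \<in> A" using A(2) by blast
  obtain J where J: "finite J" "J \<subseteq> carrier G" and close: "\<forall>\<omega>\<in>PiE (carrier G) (\<lambda>_. A). \<forall>\<omega>'\<in>PiE (carrier G) (\<lambda>_. A).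
            (\<forall>j\<in>J. \<omega> j = \<omega>' j) \<longrightarrow> \<bar>f \<omega> - f \<omega>'\<bar> < e/3"
    using continuous_map_almost_depends_on[OF A(1) f, of "e/3"] e by auto
  define S where "S = (\<lambda>M. \<Sum>y\<in>PiE J (\<lambda>_. A). f (pad_outside G a0 J y) * measure M (cylinder G A J y))"
  have lim: "(\<lambda>n. S (\<nu> n)) \<longlonglongrightarrow> S \<mu>"
    unfolding S_def using J by (intro tendsto_intros conv) auto
  have e3: "e/3 > 0" using e by simp
  have ev: "eventually (\<lambda>n. dist (S (\<nu> n)) (S \<mu>) < e/3) sequentially"
    using tendsto_iff[THEN iffD1, OF lim, rule_format, OF e3] .
  show "eventually (\<lambda>n. dist (integral\<^sup>L (\<nu> n) f) (integral\<^sup>L \<mu> f) < e) sequentially"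
  proof (rule eventually_mono[OF ev])
    fix n assume d: "dist (S (\<nu> n)) (S \<mu>) < e/3"
    have 1: "\<bar>integral\<^sup>L (\<nu> n) f - S (\<nu> n)\<bar> \<le> e/3"
      unfolding S_def by (rule integral_approx_cylinders[OF nu(1) nu(2) A(1) cG f J close a0])
    have 2: "\<bar>integral\<^sup>L \<mu> f - S \<mu>\<bar> \<le> e/3"
      unfolding S_def by (rule integral_approx_cylinders[OF mu A(1) cG f J close a0])
    show "dist (integral\<^sup>L (\<nu> n) f) (integral\<^sup>L \<mu> f) < e"
      using 1 2 d unfolding dist_real_def by linarith
  qed
qed

lemma eventually_wstar_nbhd_if_cylinders_tendsto:
  assumes mu: "prob_space \<mu>" "sets \<mu> = sets (shift_space G A)"
    and nu: "\<And>n. \<nu> n \<in> Prob_meas G A"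
    and A: "finite A" "A \<noteq> {}" and cG: "countable (carrier G)"
    and conv: "\<And>J y. finite J \<Longrightarrow> J \<subseteq> carrier G \<Longrightarrow> y \<in> PiE J (\<lambda>_. A) \<Longrightarrow>
        (\<lambda>n. measure (\<nu> n) (cylinder G A J y)) \<longlonglongrightarrow> measure \<mu> (cylinder G A J y)"
    and U: "wstar_nbhd G A \<mu> U"
  shows "eventually (\<lambda>n. \<nu> n \<in> U) sequentially"
proof -
  obtain F \<epsilon> where F: "finite F" "\<epsilon> > 0" "\<forall>f\<in>F. continuous_map (shift_top G A) euclideanreal f"
    "wstar_basic G A \<mu> F \<epsilon> \<subseteq> U"
    using U unfolding wstar_nbhd_def by blast
  have nu1: "\<And>n. prob_space (\<nu> n)" and nu2: "\<And>n. sets (\<nu> n) = sets (shift_space G A)"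
    using nu by (auto simp: Prob_meas_def)
  have "eventually (\<lambda>n. \<forall>f\<in>F. \<bar>integral\<^sup>L (\<nu> n) f - integral\<^sup>L \<mu> f\<bar> < \<epsilon>) sequentially"
  proof (rule eventually_ball_finite[OF F(1)], rule ballI)
    fix f assume "f \<in> F"
    then have "(\<lambda>n. integral\<^sup>L (\<nu> n) f) \<longlonglongrightarrow> integral\<^sup>L \<mu> f"
      using F(3) by (intro integral_tendsto_if_cylinders_tendsto[OF mu nu1 nu2 A cG _ conv]) auto
    then show "eventually (\<lambda>n. \<bar>integral\<^sup>L (\<nu> n) f - integral\<^sup>L \<mu> f\<bar> < \<epsilon>) sequentially"
      using F(2) unfolding tendsto_iff dist_real_def by blast
  qed
  then show ?thesis
  proof (rule eventually_mono)
    fix n assume "\<forall>f\<in>F. \<bar>integral\<^sup>L (\<nu> n) f - integral\<^sup>L \<mu> f\<bar> < \<epsilon>"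
    then have "\<nu> n \<in> wstar_basic G A \<mu> F \<epsilon>" using nu[of n] by (simp add: wstar_basic_def)
    then show "\<nu> n \<in> U" using F(4) by blast
  qed
qed

lemma wstar_closure_approx:
  assumes "\<mu> \<in> wstar_closure G A S" "finite F" "\<forall>f\<in>F. continuous_map (shift_top G A) euclideanreal f" "\<epsilon> > 0"
  shows "\<exists>\<nu>\<in>S. \<nu> \<in> Prob_meas G A \<and> (\<forall>f\<in>F. \<bar>integral\<^sup>L \<nu> f - integral\<^sup>L \<mu> f\<bar> < \<epsilon>)"
proof -
  have "wstar_nbhd G A \<mu> (wstar_basic G A \<mu> F \<epsilon>)" unfolding wstar_nbhd_def using assms(2-4) by blast
  then have "wstar_basic G A \<mu> F \<epsilon> \<inter> S \<noteq> {}" using assms(1) unfolding wstar_closure_def by blast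
  then show ?thesis by (auto simp: wstar_basic_def)
qed

lemma wstar_closure_mono: "S \<subseteq> S' \<Longrightarrow> wstar_closure G A S \<subseteq> wstar_closure G A S'"
  unfolding wstar_closure_def by blast

lemma determined_by_sets:
  assumes "finite J" "J \<subseteq> carrier G" "determined_by G A J E" "countable (carrier G)" "countable A"
  shows "E \<in> sets (shift_space G A)"
  by (rule openin_sets_shift_space[OF assms(4,5) openin_determined_by[OF assms(1-3)]])

lemma integral_indicator_shift_space:
  assumes "sets \<nu> = sets (shift_space G A)" "E \<subseteq> PiE (carrier G) (\<lambda>_. A)"
  shows "integral\<^sup>L \<nu> (indicator E :: _ \<Rightarrow> real) = measure \<nu> E"
proof -
  have "E \<inter> space \<nu> = E" using assms space_eq_shift_space[OF assms(1)] by auto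
  then show ?thesis by (simp add: integral_indicator)
qed

lemma wstar_closure_measure_eq:
  assumes cl: "\<mu> \<in> wstar_closure G A S" and J: "finite J" "J \<subseteq> carrier G"
    and E: "determined_by G A J E" "determined_by G A J E'"
    and hyp: "\<And>\<nu>. \<nu> \<in> S \<Longrightarrow> \<nu> \<in> Prob_meas G A \<Longrightarrow> measure \<nu> E = measure \<nu> E'"
  shows "measure \<mu> E = measure \<mu> E'"
proof (rule ccontr)
  assume ne: "measure \<mu> E \<noteq> measure \<mu> E'"
  define \<epsilon> where "\<epsilon> = \<bar>measure \<mu> E - measure \<mu> E'\<bar> / 2"
  have \<epsilon>: "\<epsilon> > 0" using ne by (simp add: \<epsilon>_def)
  have EX: "E \<subseteq> PiE (carrier G) (\<lambda>_. A)" "E' \<subseteq> PiE (carrier G) (\<lambda>_. A)" using E by (auto simp: determined_by_def)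
  have mP: "\<mu> \<in> Prob_meas G A" using cl by (simp add: wstar_closure_def)
  then have ms: "sets \<mu> = sets (shift_space G A)" by (simp add: Prob_meas_def)
  let ?F = "{indicator E :: _ \<Rightarrow> real, indicator E'}"
  have "finite ?F" by simp
  moreover have "\<forall>f\<in>?F. continuous_map (shift_top G A) euclideanreal f"
    using continuous_map_indicator_determined_by[OF J E(1)] continuous_map_indicator_determined_by[OF J E(2)] by auto
  ultimately obtain \<nu> where nu: "\<nu> \<in> S" "\<nu> \<in> Prob_meas G A"
    "\<forall>f\<in>?F. \<bar>integral\<^sup>L \<nu> f - integral\<^sup>L \<mu> f\<bar> < \<epsilon>"
    using wstar_closure_approx[OF cl _ _ \<epsilon>] by blast
  have sets_nu: "sets \<nu> = sets (shift_space G A)" using nu(2) by (simp add: Prob_meas_def)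
  have 1: "\<bar>measure \<nu> E - measure \<mu> E\<bar> < \<epsilon>"
  proof -
    have "\<bar>integral\<^sup>L \<nu> (indicator E :: _ \<Rightarrow> real) - integral\<^sup>L \<mu> (indicator E)\<bar> < \<epsilon>" using nu(3) by blast
    then show ?thesis unfolding integral_indicator_shift_space[OF sets_nu EX(1)] integral_indicator_shift_space[OF ms EX(1)] .
  qed
  have 2: "\<bar>measure \<nu> E' - measure \<mu> E'\<bar> < \<epsilon>"
  proof -
    have "\<bar>integral\<^sup>L \<nu> (indicator E' :: _ \<Rightarrow> real) - integral\<^sup>L \<mu> (indicator E')\<bar> < \<epsilon>" using nu(3) by blast
    then show ?thesis unfolding integral_indicator_shift_space[OF sets_nu EX(2)] integral_indicator_shift_space[OF ms EX(2)] .
  qed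
  have 3: "measure \<nu> E = measure \<nu> E'" by (rule hyp[OF nu(1,2)])
  show False using 1 2 3 \<epsilon>_def unfolding abs_real_def by (auto split: if_splits)
qed

lemma AE_in_msupport:
  assumes "countable (carrier G)" "countable A" "sets \<nu> = sets (shift_space G A)"
  shows "AE \<omega> in \<nu>. \<omega> \<in> msupport G A \<nu>"
proof -
  define NF where "NF = {C \<in> cylinders G A. C \<in> null_sets \<nu>}"
  have cNF: "countable NF" using countable_cylinders[OF assms(1,2)] unfolding NF_def
    by (rule countable_subset[rotated]) auto
  have "\<Union>NF \<in> null_sets \<nu>" using null_sets_UN'[OF cNF, of "\<lambda>C. C" \<nu>] by (simp add: NF_def)
  moreover have "{x \<in> space \<nu>. \<not> x \<in> msupport G A \<nu>} \<subseteq> \<Union>NF"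
  proof
    fix x assume x: "x \<in> {x \<in> space \<nu>. \<not> x \<in> msupport G A \<nu>}"
    have sp: "space \<nu> = PiE (carrier G) (\<lambda>_. A)" by (rule space_eq_shift_space[OF assms(3)])
    then have xX: "x \<in> PiE (carrier G) (\<lambda>_. A)" using x by simp
    then obtain U where U: "openin (shift_top G A) U" "x \<in> U" "\<not> emeasure \<nu> U > 0"
      using x unfolding msupport_def by auto
    then have U0: "emeasure \<nu> U = 0" by (simp add: not_gr_zero)
    have Us: "U \<in> sets \<nu>" using openin_sets_shift_space[OF assms(1,2) U(1)] assms(3) by simp
    obtain K where K: "finite K" "K \<subseteq> carrier G" "cylinder G A K x \<subseteq> U"
      using cylinder_subset_openin[OF U(1,2)] by blast
    have Cs: "cylinder G A K x \<in> sets \<nu>" using assms(3) K by (simp add: cylinder_sets countable_finite)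
    have "emeasure \<nu> (cylinder G A K x) \<le> emeasure \<nu> U" by (rule emeasure_mono[OF K(3) Us])
    then have "emeasure \<nu> (cylinder G A K x) = 0" using U0 by simp
    then have "cylinder G A K x \<in> null_sets \<nu>" using Cs by (rule null_setsI)
    moreover have "cylinder G A K x \<in> cylinders G A" by (rule cylinder_in_cylinders[OF K(1,2) xX])
    moreover have "x \<in> cylinder G A K x" using xX by (simp add: cylinder_def)
    ultimately show "x \<in> \<Union>NF" unfolding NF_def by blast
  qed
  ultimately show ?thesis by (rule AE_I')
qed

lemma shift_in_PiE:
  assumes "group G" "h \<in> carrier G" "\<omega> \<in> PiE (carrier G) (\<lambda>_. A)"
  shows "shift G h \<omega> \<in> PiE (carrier G) (\<lambda>_. A)"
  using assms by (auto simp: shift_def group.is_monoid monoid.m_closed)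

lemma shift_mult:
  assumes "group G" "g \<in> carrier G" "h \<in> carrier G"
  shows "shift G g (shift G h \<omega>) = shift G (g \<otimes>\<^bsub>G\<^esub> h) \<omega>"
  using assms by (auto simp: shift_def fun_eq_iff group.is_monoid monoid.m_closed monoid.m_assoc)

lemma shift_one:
  assumes "group G" "\<omega> \<in> PiE (carrier G) (\<lambda>_. A)"
  shows "shift G \<one>\<^bsub>G\<^esub> \<omega> = \<omega>"
  using assms by (auto simp: shift_def fun_eq_iff group.is_monoid monoid.r_one PiE_iff extensional_def)

lemma shift_inv_left:
  assumes "group G" "h \<in> carrier G" "\<omega> \<in> PiE (carrier G) (\<lambda>_. A)"
  shows "shift G (inv\<^bsub>G\<^esub> h) (shift G h \<omega>) = \<omega>"
  using assms by (simp add: shift_mult group.l_inv shift_one)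

lemma shift_inv_right:
  assumes "group G" "h \<in> carrier G" "\<omega> \<in> PiE (carrier G) (\<lambda>_. A)"
  shows "shift G h (shift G (inv\<^bsub>G\<^esub> h) \<omega>) = \<omega>"
  using assms by (simp add: shift_mult group.r_inv shift_one)

lemma shift_measurable:
  assumes "group G" "h \<in> carrier G"
  shows "shift G h \<in> measurable (shift_space G A) (shift_space G A)"
proof -
  have "(\<lambda>\<omega>. \<lambda>g\<in>carrier G. \<omega> (g \<otimes>\<^bsub>G\<^esub> h)) \<in> measurable (shift_space G A) (shift_space G A)"
    unfolding shift_space_def
    using assms by (intro measurable_restrict measurable_component_singleton)
      (auto simp: group.is_monoid monoid.m_closed)
  then show ?thesis by (simp add: shift_def[abs_def])
qed

lemma shift_continuous:
  assumes "group G" "h \<in> carrier G"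
  shows "continuous_map (shift_top G A) (shift_top G A) (shift G h)"
  unfolding shift_top_def continuous_map_componentwise
proof (intro conjI ballI)
  show "shift G h ` topspace (product_topology (\<lambda>_. discrete_topology A) (carrier G)) \<subseteq> extensional (carrier G)"
    by (auto simp: shift_def)
  fix k assume k: "k \<in> carrier G"
  have kh: "k \<otimes>\<^bsub>G\<^esub> h \<in> carrier G" using assms k by (simp add: group.is_monoid monoid.m_closed)
  have eq: "(\<lambda>x. shift G h x k) = (\<lambda>x. x (k \<otimes>\<^bsub>G\<^esub> h))" using k by (simp add: shift_def fun_eq_iff)
  show "continuous_map (product_topology (\<lambda>_. discrete_topology A) (carrier G)) (discrete_topology A) (\<lambda>x. shift G h x k)"
    unfolding eq by (rule continuous_map_product_projection[OF kh])
qed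

lemma shift_vimage_orbit:
  assumes G: "group G" and w: "\<omega> \<in> PiE (carrier G) (\<lambda>_. A)" and h: "h \<in> carrier G"
  shows "{x \<in> PiE (carrier G) (\<lambda>_. A). shift G h x \<in> (\<lambda>g. shift G g \<omega>) ` carrier G}
    = (\<lambda>g. shift G g \<omega>) ` carrier G"
proof
  have ih: "inv\<^bsub>G\<^esub> h \<in> carrier G" using G h by (simp add: group.inv_closed)
  show "{x \<in> PiE (carrier G) (\<lambda>_. A). shift G h x \<in> (\<lambda>g. shift G g \<omega>) ` carrier G}
      \<subseteq> (\<lambda>g. shift G g \<omega>) ` carrier G"
  proof clarify
    fix x g assume x: "x \<in> PiE (carrier G) (\<lambda>_. A)" and g: "g \<in> carrier G" "shift G h x = shift G g \<omega>"
    have "x = shift G (inv\<^bsub>G\<^esub> h) (shift G h x)" using shift_inv_left[OF G h x] by simp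
    also have "\<dots> = shift G (inv\<^bsub>G\<^esub> h \<otimes>\<^bsub>G\<^esub> g) \<omega>" using g shift_mult[OF G ih g(1)] by simp
    finally show "x \<in> (\<lambda>g. shift G g \<omega>) ` carrier G"
      using G ih g(1) by (auto simp: group.is_monoid monoid.m_closed)
  qed
  show "(\<lambda>g. shift G g \<omega>) ` carrier G
      \<subseteq> {x \<in> PiE (carrier G) (\<lambda>_. A). shift G h x \<in> (\<lambda>g. shift G g \<omega>) ` carrier G}"
  proof
    fix x assume "x \<in> (\<lambda>g. shift G g \<omega>) ` carrier G"
    then obtain g where g: "g \<in> carrier G" and x: "x = shift G g \<omega>" by blast
    have "shift G h x = shift G (h \<otimes>\<^bsub>G\<^esub> g) \<omega>" unfolding x by (rule shift_mult[OF G h g])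
    moreover have "h \<otimes>\<^bsub>G\<^esub> g \<in> carrier G" using G h g by (simp add: group.is_monoid monoid.m_closed)
    ultimately have "shift G h x \<in> (\<lambda>g. shift G g \<omega>) ` carrier G" by blast
    then show "x \<in> {x \<in> PiE (carrier G) (\<lambda>_. A). shift G h x \<in> (\<lambda>g. shift G g \<omega>) ` carrier G}"
      using shift_in_PiE[OF G g w] x by simp
  qed
qed

lemma InvProb_emeasure_vimage:
  assumes "group G" "\<mu> \<in> InvProb G A" "h \<in> carrier G" "B \<in> sets (shift_space G A)"
  shows "emeasure \<mu> B = emeasure \<mu> (shift G h -` B \<inter> PiE (carrier G) (\<lambda>_. A))"
proof -
  have s: "sets \<mu> = sets (shift_space G A)" using assms(2) by (simp add: InvProb_def Prob_meas_def)
  have m: "shift G h \<in> measurable \<mu> (shift_space G A)"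
    by (rule measurable_from_sets[OF s shift_measurable[OF assms(1,3)]])
  have "emeasure \<mu> B = emeasure (distr \<mu> (shift_space G A) (shift G h)) B"
    using assms(2,3) by (simp add: InvProb_def)
  also have "\<dots> = emeasure \<mu> (shift G h -` B \<inter> space \<mu>)"
    by (rule emeasure_distr[OF m assms(4)])
  finally show ?thesis using space_eq_shift_space[OF s] by simp
qed

lemma shift_in_msupport:
  assumes "group G" "countable (carrier G)" "countable A" "\<mu> \<in> InvProb G A"
    "\<omega> \<in> msupport G A \<mu>" "h \<in> carrier G"
  shows "shift G h \<omega> \<in> msupport G A \<mu>"
proof -
  have wX: "\<omega> \<in> PiE (carrier G) (\<lambda>_. A)" using assms(5) by (simp add: msupport_def)
  have s: "sets \<mu> = sets (shift_space G A)" using assms(4) by (simp add: InvProb_def Prob_meas_def)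
  show ?thesis unfolding msupport_def
  proof (intro CollectI conjI allI impI)
    show "shift G h \<omega> \<in> topspace (shift_top G A)" using shift_in_PiE[OF assms(1,6) wX] by simp
    fix U assume U: "openin (shift_top G A) U \<and> shift G h \<omega> \<in> U"
    define V where "V = {x \<in> topspace (shift_top G A). shift G h x \<in> U}"
    have "openin (shift_top G A) V" unfolding V_def
      using U shift_continuous[OF assms(1,6)] by (intro openin_continuous_map_preimage) auto
    moreover have "\<omega> \<in> V" using U wX by (simp add: V_def)
    ultimately have "emeasure \<mu> V > 0" using assms(5) unfolding msupport_def by blast
    moreover have "emeasure \<mu> U = emeasure \<mu> V"
    proof -
      have Us: "U \<in> sets (shift_space G A)" using openin_sets_shift_space[OF assms(2,3)] U by blast
      have "emeasure \<mu> U = emeasure \<mu> (shift G h -` U \<inter> PiE (carrier G) (\<lambda>_. A))"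
        by (rule InvProb_emeasure_vimage[OF assms(1,4,6) Us])
      also have "shift G h -` U \<inter> PiE (carrier G) (\<lambda>_. A) = V" by (auto simp: V_def)
      finally show ?thesis .
    qed
    ultimately show "emeasure \<mu> U > 0" by simp
  qed
qed

lemma foldr_mult_closed:
  assumes "monoid G" "set l \<subseteq> carrier G"
  shows "foldr (\<otimes>\<^bsub>G\<^esub>) l \<one>\<^bsub>G\<^esub> \<in> carrier G"
  using assms(2) by (induction l) (auto simp: monoid.m_closed[OF assms(1)] monoid.one_closed[OF assms(1)])

lemma foldr_mult_append:
  assumes "monoid G" "set l1 \<subseteq> carrier G" "set l2 \<subseteq> carrier G"
  shows "foldr (\<otimes>\<^bsub>G\<^esub>) (l1 @ l2) \<one>\<^bsub>G\<^esub> = foldr (\<otimes>\<^bsub>G\<^esub>) l1 \<one>\<^bsub>G\<^esub> \<otimes>\<^bsub>G\<^esub> foldr (\<otimes>\<^bsub>G\<^esub>) l2 \<one>\<^bsub>G\<^esub>"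
  using assms(2)
proof (induction l1)
  case Nil then show ?case using foldr_mult_closed[OF assms(1,3)] by (simp add: monoid.l_one[OF assms(1)])
next
  case (Cons a l1)
  then show ?case using foldr_mult_closed[OF assms(1,3)] foldr_mult_closed[OF assms(1), of l1]
    by (simp add: monoid.m_assoc[OF assms(1)])
qed

lemma countable_carrier_fin_gen:
  assumes "group G" "fin_gen G"
  shows "countable (carrier G)"
proof -
  obtain S where S: "finite S" "S \<subseteq> carrier G" "generate G S = carrier G"
    using assms(2) by (auto simp: fin_gen_def)
  have mon: "monoid G" using assms(1) by (rule group.is_monoid)
  let ?L = "S \<union> (\<lambda>s. inv\<^bsub>G\<^esub> s) ` S"
  have Lc: "?L \<subseteq> carrier G" using S(2) group.inv_closed[OF assms(1)] by auto
  define T where "T = (\<lambda>l. foldr (\<otimes>\<^bsub>G\<^esub>) l \<one>\<^bsub>G\<^esub>) ` lists ?L"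
  have "countable T" unfolding T_def using S(1)
    by (intro countable_image countable_lists countable_finite) auto
  moreover have "generate G S \<subseteq> T"
  proof
    fix x assume "x \<in> generate G S"
    then show "x \<in> T"
    proof (induction rule: generate.induct)
      case one
      have "[] \<in> lists ?L" by simp
      then show ?case unfolding T_def by (rule image_eqI[rotated]) simp
    next
      case (incl h)
      then have "[h] \<in> lists ?L" by simp
      moreover have "h = foldr (\<otimes>\<^bsub>G\<^esub>) [h] \<one>\<^bsub>G\<^esub>" using incl S(2) by (auto simp: monoid.r_one[OF mon])
      ultimately show ?case unfolding T_def by blast
    next
      case (inv h)
      then have "[inv\<^bsub>G\<^esub> h] \<in> lists ?L" by simp
      moreover have "inv\<^bsub>G\<^esub> h = foldr (\<otimes>\<^bsub>G\<^esub>) [inv\<^bsub>G\<^esub> h] \<one>\<^bsub>G\<^esub>"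
        using inv S(2) group.inv_closed[OF assms(1)] by (auto simp: monoid.r_one[OF mon])
      ultimately show ?case unfolding T_def by blast
    next
      case (eng h1 h2)
      then obtain l1 l2 where l: "l1 \<in> lists ?L" "l2 \<in> lists ?L"
        "h1 = foldr (\<otimes>\<^bsub>G\<^esub>) l1 \<one>\<^bsub>G\<^esub>" "h2 = foldr (\<otimes>\<^bsub>G\<^esub>) l2 \<one>\<^bsub>G\<^esub>"
        unfolding T_def by blast
      have "foldr (\<otimes>\<^bsub>G\<^esub>) (l1 @ l2) \<one>\<^bsub>G\<^esub> = h1 \<otimes>\<^bsub>G\<^esub> h2"
        unfolding l(3,4) by (rule foldr_mult_append[OF mon]) (use l Lc in blast)+
      then have "h1 \<otimes>\<^bsub>G\<^esub> h2 = foldr (\<otimes>\<^bsub>G\<^esub>) (l1 @ l2) \<one>\<^bsub>G\<^esub>" by (rule sym)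
      moreover have "l1 @ l2 \<in> lists ?L" using l by simp
      ultimately show ?case unfolding T_def by blast
    qed
  qed
  ultimately show ?thesis using S(3) by (metis countable_subset)
qed

section \<open>Pulling back along a homomorphism\<close>

text \<open>The change of alphabet is needed
  because \<open>PA\<close> and \<open>EPA\<close> only speak about alphabets of natural numbers, so an arbitrary finite
  alphabet is first recoded injectively into \<open>nat\<close>.\<close>

definition pullback :: "('g,'b) monoid_scheme \<Rightarrow> ('g \<Rightarrow> 'q) \<Rightarrow> ('c \<Rightarrow> 'a) \<Rightarrow> ('q \<Rightarrow> 'c) \<Rightarrow> ('g \<Rightarrow> 'a)" where
  "pullback G \<pi> d \<omega> = (\<lambda>g\<in>carrier G. d (\<omega> (\<pi> g)))"

definition pullback_push :: "('g,'b) monoid_scheme \<Rightarrow> 'a set \<Rightarrow> ('g \<Rightarrow> 'q) \<Rightarrow> ('c \<Rightarrow> 'a) \<Rightarrow> ('q \<Rightarrow> 'c) measure \<Rightarrow> ('g \<Rightarrow> 'a) measure" where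
  "pullback_push G A \<pi> d \<nu> = distr \<nu> (shift_space G A) (pullback G \<pi> d)"

locale pullback_hom =
  fixes G :: "('g,'b) monoid_scheme" and Q :: "('q,'e) monoid_scheme" and \<pi> :: "'g \<Rightarrow> 'q"
    and d :: "'c \<Rightarrow> 'a" and A' :: "'c set" and A :: "'a set"
  assumes G: "group G" and Q: "group Q" and hom: "\<pi> \<in> hom G Q" and d: "d \<in> A' \<rightarrow> A"
begin

abbreviation "T \<equiv> pullback G \<pi> d"

lemma hom_closed: "g \<in> carrier G \<Longrightarrow> \<pi> g \<in> carrier Q"
  using hom by (auto simp: hom_def)

lemma pullback_in_PiE: "\<omega> \<in> PiE (carrier Q) (\<lambda>_. A') \<Longrightarrow> T \<omega> \<in> PiE (carrier G) (\<lambda>_. A)"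
  using d hom_closed by (auto simp: pullback_def)

lemma pullback_measurable: "T \<in> measurable (shift_space Q A') (shift_space G A)"
proof -
  have dm: "d \<in> measurable (count_space A') (count_space A)"
    using d by (simp add: measurable_count_space_eq1)
  have "(\<lambda>\<omega>. \<lambda>g\<in>carrier G. d (\<omega> (\<pi> g))) \<in> measurable (PiM (carrier Q) (\<lambda>_. count_space A')) (PiM (carrier G) (\<lambda>_. count_space A))"
  proof (rule measurable_restrict)
    fix g assume g: "g \<in> carrier G"
    show "(\<lambda>\<omega>. d (\<omega> (\<pi> g))) \<in> measurable (PiM (carrier Q) (\<lambda>_. count_space A')) (count_space A)"
      using measurable_compose[OF measurable_component_singleton[OF hom_closed[OF g]] dm] by simp
  qed
  then show ?thesis by (simp add: shift_space_def pullback_def[abs_def])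
qed

lemma pullback_continuous: "continuous_map (shift_top Q A') (shift_top G A) T"
  unfolding shift_top_def continuous_map_componentwise
proof (intro conjI ballI)
  show "T ` topspace (product_topology (\<lambda>_. discrete_topology A') (carrier Q)) \<subseteq> extensional (carrier G)"
    by (auto simp: pullback_def)
  fix g assume g: "g \<in> carrier G"
  have eq: "(\<lambda>x. T x g) = d \<circ> (\<lambda>x. x (\<pi> g))" using g by (simp add: pullback_def fun_eq_iff)
  have dc: "continuous_map (discrete_topology A') (discrete_topology A) d"
    using d by (simp add: continuous_map_from_discrete_topology)
  show "continuous_map (product_topology (\<lambda>_. discrete_topology A') (carrier Q)) (discrete_topology A) (\<lambda>x. T x g)"
    unfolding eq by (rule continuous_map_compose[OF continuous_map_product_projection[OF hom_closed[OF g]] dc])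
qed

lemma shift_pullback:
  assumes "h \<in> carrier G"
  shows "shift G h (T \<omega>) = T (shift Q (\<pi> h) \<omega>)"
proof -
  have "\<And>g. g \<in> carrier G \<Longrightarrow> \<pi> (g \<otimes>\<^bsub>G\<^esub> h) = \<pi> g \<otimes>\<^bsub>Q\<^esub> \<pi> h"
    using hom assms by (simp add: hom_mult)
  moreover have "\<And>g. g \<in> carrier G \<Longrightarrow> g \<otimes>\<^bsub>G\<^esub> h \<in> carrier G"
    using G assms by (simp add: group.is_monoid monoid.m_closed)
  ultimately show ?thesis using hom_closed by (auto simp: shift_def pullback_def fun_eq_iff)
qed

lemma pullback_push_Prob_meas:
  assumes "\<nu> \<in> Prob_meas Q A'"
  shows "pullback_push G A \<pi> d \<nu> \<in> Prob_meas G A"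
proof -
  have s: "sets \<nu> = sets (shift_space Q A')" and p: "prob_space \<nu>" using assms by (auto simp: Prob_meas_def)
  have m: "T \<in> measurable \<nu> (shift_space G A)" by (rule measurable_from_sets[OF s pullback_measurable])
  show ?thesis unfolding Prob_meas_def pullback_push_def
    using prob_space.prob_space_distr[OF p m] by simp
qed

lemma pullback_push_InvProb:
  assumes "\<nu> \<in> InvProb Q A'"
  shows "pullback_push G A \<pi> d \<nu> \<in> InvProb G A"
proof -
  have nP: "\<nu> \<in> Prob_meas Q A'" using assms by (simp add: InvProb_def)
  have s: "sets \<nu> = sets (shift_space Q A')" using nP by (auto simp: Prob_meas_def)
  have m: "T \<in> measurable \<nu> (shift_space G A)" by (rule measurable_from_sets[OF s pullback_measurable])
  have sp: "space \<nu> = PiE (carrier Q) (\<lambda>_. A')" by (rule space_eq_shift_space[OF s])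
  show ?thesis unfolding InvProb_def
  proof (intro CollectI conjI ballI)
    show "pullback_push G A \<pi> d \<nu> \<in> Prob_meas G A" by (rule pullback_push_Prob_meas[OF nP])
    fix h assume h: "h \<in> carrier G"
    have ph: "\<pi> h \<in> carrier Q" using hom_closed[OF h] .
    have ms: "shift Q (\<pi> h) \<in> measurable \<nu> (shift_space Q A')"
      by (rule measurable_from_sets[OF s shift_measurable[OF Q ph]])
    have "distr (pullback_push G A \<pi> d \<nu>) (shift_space G A) (shift G h)
        = distr \<nu> (shift_space G A) (shift G h \<circ> T)"
      unfolding pullback_push_def by (rule distr_distr[OF shift_measurable[OF G h] m])
    also have "\<dots> = distr \<nu> (shift_space G A) (T \<circ> shift Q (\<pi> h))"
      by (rule distr_cong) (simp_all add: shift_pullback[OF h])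
    also have "\<dots> = distr (distr \<nu> (shift_space Q A') (shift Q (\<pi> h))) (shift_space G A) T"
      by (rule distr_distr[OF pullback_measurable ms, symmetric])
    also have "distr \<nu> (shift_space Q A') (shift Q (\<pi> h)) = \<nu>"
      using assms ph by (simp add: InvProb_def)
    finally show "distr (pullback_push G A \<pi> d \<nu>) (shift_space G A) (shift G h) = pullback_push G A \<pi> d \<nu>"
      by (simp add: pullback_push_def)
  qed
qed

lemma pullback_push_periodic:
  assumes cQ: "countable (carrier Q)" and cA: "countable A'" and per: "\<nu> \<in> periodic_meas Q A'"
  shows "pullback_push G A \<pi> d \<nu> \<in> periodic_meas G A"
proof -
  let ?S = "msupport Q A' \<nu>"
  have inv: "\<nu> \<in> InvProb Q A'" and finS: "finite ?S" using per by (auto simp: periodic_meas_def)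
  have s: "sets \<nu> = sets (shift_space Q A')" using inv by (simp add: InvProb_def Prob_meas_def)
  have m: "T \<in> measurable \<nu> (shift_space G A)" by (rule measurable_from_sets[OF s pullback_measurable])
  have TS: "T ` ?S \<subseteq> PiE (carrier G) (\<lambda>_. A)" using pullback_in_PiE by (auto simp: msupport_def)
  have "msupport G A (pullback_push G A \<pi> d \<nu>) \<subseteq> T ` ?S"
  proof
    fix \<omega> assume w: "\<omega> \<in> msupport G A (pullback_push G A \<pi> d \<nu>)"
    then have wX: "\<omega> \<in> PiE (carrier G) (\<lambda>_. A)" by (simp add: msupport_def)
    obtain K where K: "finite K" "K \<subseteq> carrier G"
      and sep: "\<And>x. x \<in> T ` ?S \<Longrightarrow> x \<in> cylinder G A K \<omega> \<Longrightarrow> x = \<omega>"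
      using cylinder_separates_finite[OF finite_imageI[OF finS] TS wX] by blast
    let ?U = "cylinder G A K \<omega>"
    have "\<omega> \<in> ?U" using wX by (simp add: cylinder_def)
    then have pos: "emeasure (pullback_push G A \<pi> d \<nu>) ?U > 0"
      using w openin_cylinder[OF K] unfolding msupport_def by blast
    show "\<omega> \<in> T ` ?S"
    proof (rule ccontr)
      assume nw: "\<omega> \<notin> T ` ?S"
      have "AE x in \<nu>. T x \<notin> ?U"
        by (rule AE_mp[OF AE_in_msupport[OF cQ cA s] AE_I2]) (use nw sep in blast)
      then have "emeasure \<nu> {x \<in> space \<nu>. T x \<in> ?U} = 0" by (rule emeasure_eq_0_AE)
      moreover have "emeasure (pullback_push G A \<pi> d \<nu>) ?U = emeasure \<nu> (T -` ?U \<inter> space \<nu>)"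
        unfolding pullback_push_def using K by (intro emeasure_distr[OF m] cylinder_sets countable_finite)
      ultimately show False using pos by (simp add: Int_commute vimage_def Collect_conj_eq)
    qed
  qed
  then have "finite (msupport G A (pullback_push G A \<pi> d \<nu>))"
    by (rule finite_subset) (simp add: finS)
  then show ?thesis using pullback_push_InvProb[OF inv] by (simp add: periodic_meas_def)
qed

lemma pullback_push_ergodic:
  assumes surj: "\<pi> ` carrier G = carrier Q" and erg: "\<nu> \<in> ergodic_meas Q A'"
  shows "pullback_push G A \<pi> d \<nu> \<in> ergodic_meas G A"
proof -
  have inv: "\<nu> \<in> InvProb Q A'" using erg by (simp add: ergodic_meas_def)
  have nP: "\<nu> \<in> Prob_meas Q A'" using inv by (simp add: InvProb_def)
  have s: "sets \<nu> = sets (shift_space Q A')" using nP by (auto simp: Prob_meas_def)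
  have m: "T \<in> measurable \<nu> (shift_space G A)" by (rule measurable_from_sets[OF s pullback_measurable])
  have sp: "space \<nu> = PiE (carrier Q) (\<lambda>_. A')" by (rule space_eq_shift_space[OF s])
  show ?thesis unfolding ergodic_meas_def
  proof (intro CollectI conjI ballI impI)
    show "pullback_push G A \<pi> d \<nu> \<in> InvProb G A" by (rule pullback_push_InvProb[OF inv])
    fix B assume B: "B \<in> sets (pullback_push G A \<pi> d \<nu>)"
      and Binv: "\<forall>h\<in>carrier G. {\<omega> \<in> space (pullback_push G A \<pi> d \<nu>). shift G h \<omega> \<in> B} = B"
    have Bs: "B \<in> sets (shift_space G A)" using B by (simp add: pullback_push_def)
    have spT: "space (pullback_push G A \<pi> d \<nu>) = PiE (carrier G) (\<lambda>_. A)" by (simp add: pullback_push_def)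
    define B' where "B' = T -` B \<inter> space \<nu>"
    have B's: "B' \<in> sets \<nu>" unfolding B'_def by (rule measurable_sets[OF m Bs])
    have B'inv: "\<forall>q\<in>carrier Q. {\<omega> \<in> space \<nu>. shift Q q \<omega> \<in> B'} = B'"
    proof
      fix q assume q: "q \<in> carrier Q"
      then obtain h where h: "h \<in> carrier G" "q = \<pi> h" using surj by blast
      have "shift Q q \<omega> \<in> B' \<longleftrightarrow> \<omega> \<in> B'" if w: "\<omega> \<in> space \<nu>" for \<omega>
      proof -
        have wX: "\<omega> \<in> PiE (carrier Q) (\<lambda>_. A')" using w sp by simp
        have sX: "shift Q q \<omega> \<in> PiE (carrier Q) (\<lambda>_. A')" by (rule shift_in_PiE[OF Q q wX])
        have TwX: "T \<omega> \<in> PiE (carrier G) (\<lambda>_. A)" by (rule pullback_in_PiE[OF wX])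
        have "shift Q q \<omega> \<in> B' \<longleftrightarrow> T (shift Q q \<omega>) \<in> B" using sX sp by (simp add: B'_def)
        also have "\<dots> \<longleftrightarrow> shift G h (T \<omega>) \<in> B" using h by (simp add: shift_pullback)
        also have "\<dots> \<longleftrightarrow> T \<omega> \<in> {x \<in> space (pullback_push G A \<pi> d \<nu>). shift G h x \<in> B}"
          using TwX spT by simp
        also have "\<dots> \<longleftrightarrow> T \<omega> \<in> B" using Binv h by simp
        also have "\<dots> \<longleftrightarrow> \<omega> \<in> B'" using w by (simp add: B'_def)
        finally show ?thesis .
      qed
      then show "{\<omega> \<in> space \<nu>. shift Q q \<omega> \<in> B'} = B'" using B'_def by auto
    qed
    have "measure \<nu> B' = 0 \<or> measure \<nu> B' = 1"
      using erg B's B'inv unfolding ergodic_meas_def by blast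
    moreover have "measure (pullback_push G A \<pi> d \<nu>) B = measure \<nu> B'"
      unfolding pullback_push_def B'_def by (rule measure_distr[OF m Bs])
    ultimately show "measure (pullback_push G A \<pi> d \<nu>) B = 0 \<or> measure (pullback_push G A \<pi> d \<nu>) B = 1" by simp
  qed
qed

lemma pullback_push_wstar_closure:
  assumes cG: "countable (carrier G)" and fA: "finite A" and cl: "\<mu> \<in> wstar_closure Q A' S"
  shows "pullback_push G A \<pi> d \<mu> \<in> wstar_closure G A (pullback_push G A \<pi> d ` S)"
proof -
  have mP: "\<mu> \<in> Prob_meas Q A'" using cl by (simp add: wstar_closure_def)
  have cA: "countable A" using fA by (rule countable_finite)
  have int_eq: "integral\<^sup>L (pullback_push G A \<pi> d \<nu>) f = integral\<^sup>L \<nu> (f \<circ> T)"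
    if nu: "\<nu> \<in> Prob_meas Q A'" and f: "continuous_map (shift_top G A) euclideanreal f" for \<nu> f
  proof -
    have s: "sets \<nu> = sets (shift_space Q A')" using nu by (auto simp: Prob_meas_def)
    have m: "T \<in> measurable \<nu> (shift_space G A)" by (rule measurable_from_sets[OF s pullback_measurable])
    show ?thesis unfolding pullback_push_def
      using integral_distr[OF m continuous_map_borel_measurable[OF cG cA f]] by (simp add: comp_def)
  qed
  show ?thesis unfolding wstar_closure_def
  proof (intro CollectI conjI allI impI)
    show "pullback_push G A \<pi> d \<mu> \<in> Prob_meas G A" by (rule pullback_push_Prob_meas[OF mP])
    fix U assume U: "wstar_nbhd G A (pullback_push G A \<pi> d \<mu>) U"
    then obtain F \<epsilon> where F: "finite F" "\<epsilon> > 0" "\<forall>f\<in>F. continuous_map (shift_top G A) euclideanreal f"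
      "wstar_basic G A (pullback_push G A \<pi> d \<mu>) F \<epsilon> \<subseteq> U"
      unfolding wstar_nbhd_def by blast
    have "finite ((\<lambda>f. f \<circ> T) ` F)" using F(1) by simp
    moreover have "\<forall>f'\<in>(\<lambda>f. f \<circ> T) ` F. continuous_map (shift_top Q A') euclideanreal f'"
      using F(3) by (auto intro: continuous_map_compose[OF pullback_continuous])
    ultimately obtain \<nu> where nu: "\<nu> \<in> S" "\<nu> \<in> Prob_meas Q A'"
      "\<forall>f'\<in>(\<lambda>f. f \<circ> T) ` F. \<bar>integral\<^sup>L \<nu> f' - integral\<^sup>L \<mu> f'\<bar> < \<epsilon>"
      using wstar_closure_approx[OF cl _ _ F(2)] by blast
    have "pullback_push G A \<pi> d \<nu> \<in> wstar_basic G A (pullback_push G A \<pi> d \<mu>) F \<epsilon>"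
      unfolding wstar_basic_def
    proof (intro CollectI conjI ballI)
      show "pullback_push G A \<pi> d \<nu> \<in> Prob_meas G A" by (rule pullback_push_Prob_meas[OF nu(2)])
      fix f assume f: "f \<in> F"
      then have fc: "continuous_map (shift_top G A) euclideanreal f" using F(3) by blast
      show "\<bar>integral\<^sup>L (pullback_push G A \<pi> d \<nu>) f - integral\<^sup>L (pullback_push G A \<pi> d \<mu>) f\<bar> < \<epsilon>"
        using nu(3) f int_eq[OF nu(2) fc] int_eq[OF mP fc] by auto
    qed
    then show "U \<inter> pullback_push G A \<pi> d ` S \<noteq> {}" using F(4) nu(1) by blast
  qed
qed

end

lemma pullback_push_recode:
  assumes "\<nu> \<in> Prob_meas Q A" "group Q" "group G" "\<pi> \<in> hom G Q"
    "e \<in> A \<rightarrow> A'" "d2 \<in> A' \<rightarrow> A" "\<And>a. a \<in> A \<Longrightarrow> d2 (e a) = a"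
  shows "pullback_push G A \<pi> d2 (pullback_push Q A' (\<lambda>x. x) e \<nu>) = Phi_push G A \<pi> \<nu>"
proof -
  have idhom: "(\<lambda>x. x) \<in> hom Q Q" by (simp add: hom_def)
  interpret t1: pullback_hom Q Q "\<lambda>x. x" e A A' by (rule pullback_hom.intro[OF assms(2) assms(2) idhom assms(5)])
  interpret t2: pullback_hom G Q \<pi> d2 A' A by (rule pullback_hom.intro[OF assms(3) assms(2) assms(4) assms(6)])
  have s: "sets \<nu> = sets (shift_space Q A)" using assms(1) by (auto simp: Prob_meas_def)
  have m1: "pullback Q (\<lambda>x. x) e \<in> measurable \<nu> (shift_space Q A')"
    by (rule measurable_from_sets[OF s t1.pullback_measurable])
  have "pullback_push G A \<pi> d2 (pullback_push Q A' (\<lambda>x. x) e \<nu>) = distr \<nu> (shift_space G A) (pullback G \<pi> d2 \<circ> pullback Q (\<lambda>x. x) e)"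
    unfolding pullback_push_def by (rule distr_distr[OF t2.pullback_measurable m1])
  also have "\<dots> = distr \<nu> (shift_space G A) (Phi G \<pi>)"
  proof (rule distr_cong)
    fix \<omega> assume "\<omega> \<in> space \<nu>"
    then have w: "\<omega> \<in> PiE (carrier Q) (\<lambda>_. A)" using space_eq_shift_space[OF s] by simp
    show "(pullback G \<pi> d2 \<circ> pullback Q (\<lambda>x. x) e) \<omega> = Phi G \<pi> \<omega>"
      using w t2.hom_closed assms(7) by (auto simp: pullback_def Phi_def fun_eq_iff)
  qed simp_all
  finally show ?thesis by (simp add: Phi_push_def)
qed

lemma Phi_push_recode_nat:
  fixes A :: "'a set"
  assumes G: "group G" and Q: "group Q" and hom: "\<pi> \<in> hom G Q" and fA: "finite A"
    and \<mu>: "\<mu> \<in> InvProb Q A"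
  obtains A' :: "nat set" and d \<nu> where "finite A'" "d \<in> A' \<rightarrow> A" "\<nu> \<in> InvProb Q A'"
    "Phi_push G A \<pi> \<mu> = pullback_push G A \<pi> d \<nu>"
proof -
  have "\<mu> \<in> Prob_meas Q A" using \<mu> by (simp add: InvProb_def)
  then have "A \<noteq> {}" by (rule Prob_meas_alphabet_nonempty[OF group.is_monoid[OF Q]])
  define e where "e = to_nat_on A"
  define d where "d = from_nat_into A"
  have eA: "e \<in> A \<rightarrow> e ` A" by simp
  have dA: "d \<in> e ` A \<rightarrow> A" using from_nat_into[OF \<open>A \<noteq> {}\<close>] by (auto simp: d_def)
  have de: "d (e a) = a" if "a \<in> A" for a
    unfolding d_def e_def by (rule from_nat_into_to_nat_on[OF countable_finite[OF fA] that])
  interpret recode: pullback_hom Q Q "\<lambda>x. x" e A "e ` A"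
    by (rule pullback_hom.intro[OF Q Q _ eA]) (simp add: hom_def)
  show ?thesis
  proof (rule that)
    show "finite (e ` A)" using fA by simp
    show "pullback_push Q (e ` A) (\<lambda>x. x) e \<mu> \<in> InvProb Q (e ` A)"
      by (rule recode.pullback_push_InvProb[OF \<mu>])
    show "Phi_push G A \<pi> \<mu> = pullback_push G A \<pi> d (pullback_push Q (e ` A) (\<lambda>x. x) e \<mu>)"
      using \<mu> by (intro pullback_push_recode[OF _ Q G hom eA dA de, symmetric]) (simp add: InvProb_def)
  qed (rule dA)
qed

lemma Phi_push_subset_wstar_closure:
  fixes A :: "'a set" and P :: "nat set \<Rightarrow> ('q \<Rightarrow> nat) measure set"
  assumes G: "group G" and Q: "group Q" and hom: "\<pi> \<in> hom G Q"
    and cG: "countable (carrier G)" and fA: "finite A"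
    and approx: "\<And>A'. finite A' \<Longrightarrow> InvProb Q A' \<subseteq> wstar_closure Q A' (P A')"
    and push: "\<And>A' d \<nu>. finite A' \<Longrightarrow> d \<in> A' \<rightarrow> A \<Longrightarrow> \<nu> \<in> P A' \<Longrightarrow> pullback_push G A \<pi> d \<nu> \<in> P'"
  shows "Phi_push G A \<pi> ` InvProb Q A \<subseteq> wstar_closure G A P'"
proof
  fix \<mu> assume "\<mu> \<in> Phi_push G A \<pi> ` InvProb Q A"
  then obtain \<mu>0 where \<mu>0: "\<mu>0 \<in> InvProb Q A" and \<mu>: "\<mu> = Phi_push G A \<pi> \<mu>0" by blast
  obtain A' :: "nat set" and d \<nu> where A': "finite A'" and d: "d \<in> A' \<rightarrow> A" and \<nu>: "\<nu> \<in> InvProb Q A'"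
    and recoded: "Phi_push G A \<pi> \<mu>0 = pullback_push G A \<pi> d \<nu>"
    by (rule Phi_push_recode_nat[OF G Q hom fA \<mu>0])
  interpret pb: pullback_hom G Q \<pi> d A' A by (rule pullback_hom.intro[OF G Q hom d])
  have "\<nu> \<in> wstar_closure Q A' (P A')" using approx[OF A'] \<nu> by blast
  then have "pullback_push G A \<pi> d \<nu> \<in> wstar_closure G A (pullback_push G A \<pi> d ` P A')"
    by (rule pb.pullback_push_wstar_closure[OF cG fA])
  moreover have "wstar_closure G A (pullback_push G A \<pi> d ` P A') \<subseteq> wstar_closure G A P'"
    using push[OF A' d] by (intro wstar_closure_mono) blast
  ultimately show "\<mu> \<in> wstar_closure G A P'" using \<mu> recoded by auto
qed

lemma PA_Phi_push_subset_wstar_closure: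
  fixes A :: "'a set"
  assumes G: "group G" and Q: "group Q" and hom: "\<pi> \<in> hom G Q" and surj: "\<pi> ` carrier G = carrier Q"
    and cG: "countable (carrier G)" and fA: "finite A" and "PA Q"
  shows "Phi_push G A \<pi> ` InvProb Q A \<subseteq> wstar_closure G A (periodic_meas G A)"
proof -
  have cQ: "countable (carrier Q)" using cG surj by (metis countable_image)
  show ?thesis using G Q hom cG fA
  proof (rule Phi_push_subset_wstar_closure)
    show "InvProb Q A' \<subseteq> wstar_closure Q A' (periodic_meas Q A')" if "finite A'" for A' :: "nat set"
      using \<open>PA Q\<close> that unfolding PA_def by blast
    fix A' :: "nat set" and d \<nu> assume "finite A'" "d \<in> A' \<rightarrow> A" "\<nu> \<in> periodic_meas Q A'"
    then show "pullback_push G A \<pi> d \<nu> \<in> periodic_meas G A"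
      by (intro pullback_hom.pullback_push_periodic[OF pullback_hom.intro[OF G Q hom] cQ countable_finite])
  qed
qed

lemma EPA_Phi_push_subset_wstar_closure:
  fixes A :: "'a set"
  assumes G: "group G" and Q: "group Q" and hom: "\<pi> \<in> hom G Q" and surj: "\<pi> ` carrier G = carrier Q"
    and cG: "countable (carrier G)" and fA: "finite A" and "EPA Q"
  shows "Phi_push G A \<pi> ` InvProb Q A \<subseteq> wstar_closure G A (periodic_meas G A \<inter> ergodic_meas G A)"
proof -
  have cQ: "countable (carrier Q)" using cG surj by (metis countable_image)
  show ?thesis using G Q hom cG fA
  proof (rule Phi_push_subset_wstar_closure)
    show "InvProb Q A' \<subseteq> wstar_closure Q A' (periodic_meas Q A' \<inter> ergodic_meas Q A')"
      if "finite A'" for A' :: "nat set"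
      using \<open>EPA Q\<close> that unfolding EPA_def by blast
    fix A' :: "nat set" and d \<nu> assume A': "finite A'" and d: "d \<in> A' \<rightarrow> A"
      and \<nu>: "\<nu> \<in> periodic_meas Q A' \<inter> ergodic_meas Q A'"
    interpret pb: pullback_hom G Q \<pi> d A' A by (rule pullback_hom.intro[OF G Q hom d])
    show "pullback_push G A \<pi> d \<nu> \<in> periodic_meas G A \<inter> ergodic_meas G A"
      using \<nu> pb.pullback_push_periodic[OF cQ countable_finite[OF A']] pb.pullback_push_ergodic[OF surj]
      by blast
  qed
qed

section \<open>Limits of periodic measures descend to \<open>G/R(G)\<close>\<close>

definition support_stabilizer :: "('g,'b) monoid_scheme \<Rightarrow> 'a set \<Rightarrow> ('g \<Rightarrow> 'a) measure \<Rightarrow> 'g set" where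
  "support_stabilizer G A \<nu> = {a \<in> carrier G. \<forall>x\<in>msupport G A \<nu>. shift G a x = x}"

lemma subgroup_support_stabilizer:
  assumes G: "group G"
  shows "subgroup (support_stabilizer G A \<nu>) G"
proof (rule group.subgroupI[OF G])
  let ?S = "msupport G A \<nu>" and ?N = "support_stabilizer G A \<nu>"
  have SX: "?S \<subseteq> PiE (carrier G) (\<lambda>_. A)" by (auto simp: msupport_def)
  show "?N \<subseteq> carrier G" by (auto simp: support_stabilizer_def)
  have "shift G \<one>\<^bsub>G\<^esub> x = x" if "x \<in> ?S" for x using that SX by (intro shift_one[OF G]) blast
  then have "\<one>\<^bsub>G\<^esub> \<in> ?N" using G by (simp add: support_stabilizer_def group.is_monoid monoid.one_closed)
  then show "?N \<noteq> {}" by blast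
next
  fix a assume a: "a \<in> support_stabilizer G A \<nu>"
  then have "shift G (inv\<^bsub>G\<^esub> a) x = x" if x: "x \<in> msupport G A \<nu>" for x
    using shift_inv_left[OF G, of a x A] x by (auto simp: support_stabilizer_def msupport_def)
  then show "inv\<^bsub>G\<^esub> a \<in> support_stabilizer G A \<nu>"
    using a G by (simp add: support_stabilizer_def group.inv_closed)
next
  fix a b assume "a \<in> support_stabilizer G A \<nu>" "b \<in> support_stabilizer G A \<nu>"
  then show "a \<otimes>\<^bsub>G\<^esub> b \<in> support_stabilizer G A \<nu>"
    using G by (simp add: support_stabilizer_def shift_mult[OF G, symmetric] group.is_monoid monoid.m_closed)
qed

lemma normal_support_stabilizer:
  assumes G: "group G" and cG: "countable (carrier G)" and cA: "countable A" and inv: "\<nu> \<in> InvProb G A"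
  shows "support_stabilizer G A \<nu> \<lhd> G"
  unfolding group.normal_inv_iff[OF G]
proof (intro conjI subgroup_support_stabilizer[OF G] ballI)
  fix x h assume x: "x \<in> carrier G" and h: "h \<in> support_stabilizer G A \<nu>"
  have hc: "h \<in> carrier G" using h by (simp add: support_stabilizer_def)
  have ix: "inv\<^bsub>G\<^esub> x \<in> carrier G" using G x by (simp add: group.inv_closed)
  have xh: "x \<otimes>\<^bsub>G\<^esub> h \<in> carrier G" using G x hc by (simp add: group.is_monoid monoid.m_closed)
  have "shift G (x \<otimes>\<^bsub>G\<^esub> h \<otimes>\<^bsub>G\<^esub> inv\<^bsub>G\<^esub> x) y = y" if y: "y \<in> msupport G A \<nu>" for y
  proof -
    have yX: "y \<in> PiE (carrier G) (\<lambda>_. A)" using y by (simp add: msupport_def)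
    have "shift G h (shift G (inv\<^bsub>G\<^esub> x) y) = shift G (inv\<^bsub>G\<^esub> x) y"
      using h shift_in_msupport[OF G cG cA inv y ix] by (simp add: support_stabilizer_def)
    then have "shift G (x \<otimes>\<^bsub>G\<^esub> h \<otimes>\<^bsub>G\<^esub> inv\<^bsub>G\<^esub> x) y = shift G x (shift G (inv\<^bsub>G\<^esub> x) y)"
      by (simp only: shift_mult[OF G x hc, symmetric] shift_mult[OF G xh ix, symmetric])
    also have "\<dots> = y" by (rule shift_inv_right[OF G x yX])
    finally show ?thesis .
  qed
  then show "x \<otimes>\<^bsub>G\<^esub> h \<otimes>\<^bsub>G\<^esub> inv\<^bsub>G\<^esub> x \<in> support_stabilizer G A \<nu>"
    using G xh ix by (simp add: support_stabilizer_def group.is_monoid monoid.m_closed)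
qed

text \<open>The cosets of the stabilizer correspond to the permutations of the finite support
  induced by \<open>G\<close>, so there are only finitely many.\<close>

lemma finite_rcosets_support_stabilizer:
  assumes G: "group G" and cG: "countable (carrier G)" and cA: "countable A"
    and inv: "\<nu> \<in> InvProb G A" and finS: "finite (msupport G A \<nu>)"
  shows "finite (rcosets\<^bsub>G\<^esub> support_stabilizer G A \<nu>)"
proof -
  let ?S = "msupport G A \<nu>" and ?N = "support_stabilizer G A \<nu>"
  define perm where "perm a = restrict (shift G a) ?S" for a
  have same_coset: "?N #>\<^bsub>G\<^esub> a = ?N #>\<^bsub>G\<^esub> b"
    if a: "a \<in> carrier G" and b: "b \<in> carrier G" and ab: "perm a = perm b" for a b
  proof -
    have ia: "inv\<^bsub>G\<^esub> a \<in> carrier G" using G a by (simp add: group.inv_closed)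
    have "shift G (b \<otimes>\<^bsub>G\<^esub> inv\<^bsub>G\<^esub> a) y = y" if y: "y \<in> ?S" for y
    proof -
      have yX: "y \<in> PiE (carrier G) (\<lambda>_. A)" using y by (simp add: msupport_def)
      have "shift G (inv\<^bsub>G\<^esub> a) y \<in> ?S" by (rule shift_in_msupport[OF G cG cA inv y ia])
      then have "shift G b (shift G (inv\<^bsub>G\<^esub> a) y) = shift G a (shift G (inv\<^bsub>G\<^esub> a) y)"
        using ab unfolding perm_def by (metis restrict_apply')
      then show ?thesis using shift_inv_right[OF G a yX] by (simp add: shift_mult[OF G b ia, symmetric])
    qed
    then have "b \<otimes>\<^bsub>G\<^esub> inv\<^bsub>G\<^esub> a \<in> ?N"
      using G b ia by (simp add: support_stabilizer_def group.is_monoid monoid.m_closed)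
    moreover have "b = (b \<otimes>\<^bsub>G\<^esub> inv\<^bsub>G\<^esub> a) \<otimes>\<^bsub>G\<^esub> a"
      using G a b ia by (simp add: group.is_monoid monoid.m_assoc group.l_inv monoid.r_one)
    ultimately have "b \<in> ?N #>\<^bsub>G\<^esub> a" unfolding r_coset_def by blast
    then show ?thesis by (rule group.repr_independence[OF G _ a subgroup_support_stabilizer[OF G]])
  qed
  have "rcosets\<^bsub>G\<^esub> ?N \<subseteq> (\<lambda>p. ?N #>\<^bsub>G\<^esub> inv_into (carrier G) perm p) ` (perm ` carrier G)"
  proof
    fix C assume "C \<in> rcosets\<^bsub>G\<^esub> ?N"
    then obtain a where a: "a \<in> carrier G" "C = ?N #>\<^bsub>G\<^esub> a" unfolding RCOSETS_def by blast
    have pa: "perm a \<in> perm ` carrier G" using a by blast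
    have "?N #>\<^bsub>G\<^esub> inv_into (carrier G) perm (perm a) = ?N #>\<^bsub>G\<^esub> a"
      by (rule same_coset[OF inv_into_into[OF pa] a(1) f_inv_into_f[OF pa]])
    then show "C \<in> (\<lambda>p. ?N #>\<^bsub>G\<^esub> inv_into (carrier G) perm p) ` (perm ` carrier G)"
      using a(2) pa by (metis (no_types, lifting) image_eqI)
  qed
  moreover have "perm ` carrier G \<subseteq> PiE ?S (\<lambda>_. ?S)"
    using shift_in_msupport[OF G cG cA inv] by (auto simp: perm_def)
  then have "finite (perm ` carrier G)" by (rule finite_subset) (simp add: finite_PiE finS)
  ultimately show ?thesis by (meson finite_imageI finite_subset)
qed

lemma msupport_periodic_residual:
  assumes G: "group G" and cG: "countable (carrier G)" and cA: "countable A"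
    and per: "\<nu> \<in> periodic_meas G A" and w: "\<omega> \<in> msupport G A \<nu>"
    and r: "r \<in> residual G" and g: "g \<in> carrier G"
  shows "\<omega> (g \<otimes>\<^bsub>G\<^esub> r) = \<omega> g"
proof -
  have inv: "\<nu> \<in> InvProb G A" and finS: "finite (msupport G A \<nu>)" using per by (auto simp: periodic_meas_def)
  have "r \<in> support_stabilizer G A \<nu>"
    using r normal_support_stabilizer[OF G cG cA inv] finite_rcosets_support_stabilizer[OF G cG cA inv finS]
    unfolding residual_def by blast
  then have "shift G r \<omega> g = \<omega> g" using w by (simp add: support_stabilizer_def)
  then show ?thesis using g by (simp add: shift_def)
qed

definition residual_invariant :: "('g,'b) monoid_scheme \<Rightarrow> ('g \<Rightarrow> 'a) \<Rightarrow> bool" where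
  "residual_invariant G \<omega> \<longleftrightarrow> (\<forall>g\<in>carrier G. \<forall>r\<in>residual G. \<omega> (g \<otimes>\<^bsub>G\<^esub> r) = \<omega> g)"

lemma AE_periodic_residual_invariant:
  assumes G: "group G" and cG: "countable (carrier G)" and cA: "countable A"
    and per: "\<nu> \<in> periodic_meas G A"
  shows "AE \<omega> in \<nu>. residual_invariant G \<omega>"
  unfolding residual_invariant_def
proof -
  have s: "sets \<nu> = sets (shift_space G A)" using per by (simp add: periodic_meas_def InvProb_def Prob_meas_def)
  show "AE \<omega> in \<nu>. \<forall>g\<in>carrier G. \<forall>r\<in>residual G. \<omega> (g \<otimes>\<^bsub>G\<^esub> r) = \<omega> g"
  proof (rule AE_mp[OF AE_in_msupport[OF cG cA s] AE_I2])
    fix x assume "x \<in> space \<nu>"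
    show "x \<in> msupport G A \<nu> \<longrightarrow> (\<forall>g\<in>carrier G. \<forall>r\<in>residual G. x (g \<otimes>\<^bsub>G\<^esub> r) = x g)"
    proof (intro impI ballI)
      fix g r assume a: "x \<in> msupport G A \<nu>" "g \<in> carrier G" "r \<in> residual G"
      show "x (g \<otimes>\<^bsub>G\<^esub> r) = x g" by (rule msupport_periodic_residual[OF G cG cA per a(1) a(3) a(2)])
    qed
  qed
qed

lemma prod_emb_shift_space:
  assumes "J \<subseteq> carrier G"
  shows "prod_emb (carrier G) (\<lambda>_. count_space A) J (PiE J F) = {\<omega> \<in> PiE (carrier G) (\<lambda>_. A). \<forall>j\<in>J. \<omega> j \<in> F j}"
  using assms by (auto simp: prod_emb_def PiE_iff extensional_def)

lemma determined_by_mono: "determined_by G A J E \<Longrightarrow> J \<subseteq> K \<Longrightarrow> determined_by G A K E"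
  unfolding determined_by_def by blast

lemma determined_by_shift_vimage:
  assumes G: "group G" and h: "h \<in> carrier G" and J: "J \<subseteq> carrier G" and E: "determined_by G A J E"
  shows "determined_by G A ((\<lambda>j. j \<otimes>\<^bsub>G\<^esub> h) ` J) (shift G h -` E \<inter> PiE (carrier G) (\<lambda>_. A))"
  unfolding determined_by_def
proof (intro conjI ballI impI)
  fix \<omega> \<omega>' assume w: "\<omega> \<in> shift G h -` E \<inter> PiE (carrier G) (\<lambda>_. A)"
    and w': "\<omega>' \<in> PiE (carrier G) (\<lambda>_. A)" and agree: "\<forall>j\<in>(\<lambda>j. j \<otimes>\<^bsub>G\<^esub> h) ` J. \<omega> j = \<omega>' j"
  have "shift G h \<omega> \<in> E" using w by simp
  moreover have "shift G h \<omega>' \<in> PiE (carrier G) (\<lambda>_. A)" by (rule shift_in_PiE[OF G h w'])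
  moreover have "\<forall>j\<in>J. shift G h \<omega> j = shift G h \<omega>' j" using agree J by (simp add: shift_def subset_iff)
  ultimately have "shift G h \<omega>' \<in> E" using E unfolding determined_by_def by blast
  then show "\<omega>' \<in> shift G h -` E \<inter> PiE (carrier G) (\<lambda>_. A)" using w' by simp
qed auto

lemma wstar_closure_InvProb:
  assumes G: "group G" and cG: "countable (carrier G)" and fA: "finite A"
    and cl: "\<mu> \<in> wstar_closure G A S" and SI: "S \<subseteq> InvProb G A"
  shows "\<mu> \<in> InvProb G A"
proof -
  have mP: "\<mu> \<in> Prob_meas G A" using cl by (simp add: wstar_closure_def)
  have ms: "sets \<mu> = sets (shift_space G A)" and mp: "prob_space \<mu>" using mP by (auto simp: Prob_meas_def)
  have cA: "countable A" using fA by (rule countable_finite)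
  show ?thesis unfolding InvProb_def
  proof (intro CollectI conjI mP ballI)
    fix h assume h: "h \<in> carrier G"
    have mh: "shift G h \<in> measurable \<mu> (shift_space G A)"
      by (rule measurable_from_sets[OF ms shift_measurable[OF G h]])
    show "distr \<mu> (shift_space G A) (shift G h) = \<mu>"
    proof (rule measure_eqI_PiM_infinite[where I="carrier G" and M="\<lambda>_. count_space A"])
      show "sets (distr \<mu> (shift_space G A) (shift G h)) = sets (PiM (carrier G) (\<lambda>_. count_space A))"
        by (simp add: shift_space_def)
      show "sets \<mu> = sets (PiM (carrier G) (\<lambda>_. count_space A))" using ms by (simp add: shift_space_def)
      show "finite_measure (distr \<mu> (shift_space G A) (shift G h))"
        using prob_space.prob_space_distr[OF mp mh] by (simp add: prob_space_def)
    next
      fix F J assume J: "finite J" "J \<subseteq> carrier G"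
      let ?P = "prod_emb (carrier G) (\<lambda>_. count_space A) J (PiE J F)"
      let ?P' = "shift G h -` ?P \<inter> PiE (carrier G) (\<lambda>_. A)"
      let ?K = "J \<union> (\<lambda>j. j \<otimes>\<^bsub>G\<^esub> h) ` J"
      have K: "finite ?K" "?K \<subseteq> carrier G" using J h G by (auto simp: group.is_monoid monoid.m_closed)
      have dP: "determined_by G A J ?P"
        unfolding prod_emb_shift_space[OF J(2)] determined_by_def by auto
      have dP': "determined_by G A ((\<lambda>j. j \<otimes>\<^bsub>G\<^esub> h) ` J) ?P'"
        by (rule determined_by_shift_vimage[OF G h J(2) dP])
      have Ps: "?P \<in> sets (shift_space G A)" by (rule determined_by_sets[OF J dP cG cA])
      have "measure \<mu> ?P = measure \<mu> ?P'"
      proof (rule wstar_closure_measure_eq[OF cl K determined_by_mono[OF dP] determined_by_mono[OF dP']])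
        fix \<nu> assume "\<nu> \<in> S" "\<nu> \<in> Prob_meas G A"
        then have "\<nu> \<in> InvProb G A" using SI by blast
        then show "measure \<nu> ?P = measure \<nu> ?P'"
          using InvProb_emeasure_vimage[OF G _ h Ps] by (simp add: measure_def)
      qed auto
      moreover have "emeasure (distr \<mu> (shift_space G A) (shift G h)) ?P = emeasure \<mu> ?P'"
        using emeasure_distr[OF mh Ps] space_eq_shift_space[OF ms] by simp
      ultimately show "emeasure (distr \<mu> (shift_space G A) (shift G h)) ?P = emeasure \<mu> ?P"
        using finite_measure.emeasure_eq_measure[of \<mu>] mp by (simp add: prob_space_def)
    qed
  qed
qed

text \<open>Each condition \<open>\<omega> (g \<otimes> r) = \<omega> g\<close> only involves two coordinates, so its probability is a
  weak* continuous function of the measure and passes from periodic measures to their limits.\<close>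

lemma AE_wstar_closure_residual_invariant:
  assumes G: "group G" and cG: "countable (carrier G)" and fA: "finite A"
    and cl: "\<mu> \<in> wstar_closure G A (periodic_meas G A)"
  shows "AE \<omega> in \<mu>. residual_invariant G \<omega>"
proof -
  have mP: "\<mu> \<in> Prob_meas G A" using cl by (simp add: wstar_closure_def)
  have ms: "sets \<mu> = sets (shift_space G A)" and mp: "prob_space \<mu>" using mP by (auto simp: Prob_meas_def)
  have cA: "countable A" using fA by (rule countable_finite)
  have resc: "residual G \<subseteq> carrier G" by (simp add: residual_def)
  have cR: "countable (residual G)" using cG resc by (rule countable_subset[rotated])
  have each: "AE \<omega> in \<mu>. \<omega> (g \<otimes>\<^bsub>G\<^esub> r) = \<omega> g" if g: "g \<in> carrier G" and r: "r \<in> residual G" for g r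
  proof -
    define E where "E = {\<omega> \<in> PiE (carrier G) (\<lambda>_. A). \<omega> (g \<otimes>\<^bsub>G\<^esub> r) \<noteq> \<omega> g}"
    have gr: "g \<otimes>\<^bsub>G\<^esub> r \<in> carrier G" using G g r resc by (auto simp: group.is_monoid monoid.m_closed)
    have J: "finite {g, g \<otimes>\<^bsub>G\<^esub> r}" "{g, g \<otimes>\<^bsub>G\<^esub> r} \<subseteq> carrier G" using g gr by auto
    have dE: "determined_by G A {g, g \<otimes>\<^bsub>G\<^esub> r} E" unfolding determined_by_def E_def by auto
    have d0: "determined_by G A {g, g \<otimes>\<^bsub>G\<^esub> r} {}" unfolding determined_by_def by auto
    have Es: "E \<in> sets (shift_space G A)" by (rule determined_by_sets[OF J dE cG cA])
    have "measure \<mu> E = measure \<mu> {}"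
    proof (rule wstar_closure_measure_eq[OF cl J dE d0])
      fix \<nu> assume per: "\<nu> \<in> periodic_meas G A"
      have "AE \<omega> in \<nu>. \<not> \<omega> \<in> E"
        by (rule AE_mp[OF AE_periodic_residual_invariant[OF G cG cA per] AE_I2]) (use g r in \<open>auto simp: E_def residual_invariant_def\<close>)
      then have "emeasure \<nu> {\<omega> \<in> space \<nu>. \<omega> \<in> E} = 0" by (rule emeasure_eq_0_AE)
      moreover have "{\<omega> \<in> space \<nu>. \<omega> \<in> E} = E"
        using per space_eq_shift_space[of \<nu> G A] by (auto simp: periodic_meas_def InvProb_def Prob_meas_def E_def)
      ultimately show "measure \<nu> E = measure \<nu> {}" by (simp add: measure_def)
    qed
    then have "measure \<mu> E = 0" by simp
    then have "emeasure \<mu> E = 0"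
      using finite_measure.emeasure_eq_measure[of \<mu> E] mp by (simp add: prob_space_def)
    then have "E \<in> null_sets \<mu>" using Es ms by (intro null_setsI) auto
    then show ?thesis
    proof (rule AE_I')
      show "{x \<in> space \<mu>. \<not> x (g \<otimes>\<^bsub>G\<^esub> r) = x g} \<subseteq> E" using space_eq_shift_space[OF ms] by (auto simp: E_def)
    qed
  qed
  have "AE \<omega> in \<mu>. \<forall>g\<in>carrier G. \<forall>r\<in>residual G. \<omega> (g \<otimes>\<^bsub>G\<^esub> r) = \<omega> g"
    using cG cR each by (simp add: AE_ball_countable)
  then show ?thesis by (simp add: residual_invariant_def)
qed

lemma residual_invariant_eq:
  assumes G: "group G" and Q: "group Q" and hom: "\<pi> \<in> hom G Q" and ker: "kernel G Q \<pi> = residual G"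
    and gd: "residual_invariant G \<omega>" and a: "a \<in> carrier G" and b: "b \<in> carrier G" and ab: "\<pi> a = \<pi> b"
  shows "\<omega> a = \<omega> b"
proof -
  have gh: "group_hom G Q \<pi>" using G Q hom by (simp add: group_hom_def group_hom_axioms_def)
  define r where "r = inv\<^bsub>G\<^esub> a \<otimes>\<^bsub>G\<^esub> b"
  have ia: "inv\<^bsub>G\<^esub> a \<in> carrier G" using G a by (simp add: group.inv_closed)
  have rc: "r \<in> carrier G" using G ia b by (simp add: r_def group.is_monoid monoid.m_closed)
  have "\<pi> r = inv\<^bsub>Q\<^esub> (\<pi> a) \<otimes>\<^bsub>Q\<^esub> \<pi> b"
    using hom ia b group_hom.hom_inv[OF gh a] by (simp add: r_def hom_mult)
  also have "\<dots> = \<one>\<^bsub>Q\<^esub>" using ab Q hom b by (simp add: group.l_inv hom_in_carrier)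
  finally have "r \<in> kernel G Q \<pi>" using rc by (simp add: kernel_def)
  then have rR: "r \<in> residual G" using ker by simp
  have "a \<otimes>\<^bsub>G\<^esub> r = (a \<otimes>\<^bsub>G\<^esub> inv\<^bsub>G\<^esub> a) \<otimes>\<^bsub>G\<^esub> b"
    using G a ia b by (simp add: r_def group.is_monoid monoid.m_assoc)
  also have "\<dots> = b" using G a b by (simp add: group.r_inv group.is_monoid monoid.l_one)
  finally have "a \<otimes>\<^bsub>G\<^esub> r = b" .
  then show ?thesis using gd a rR unfolding residual_invariant_def by metis
qed

definition descend :: "('g,'b) monoid_scheme \<Rightarrow> ('q,'c) monoid_scheme \<Rightarrow> ('g \<Rightarrow> 'q) \<Rightarrow> ('g \<Rightarrow> 'a) \<Rightarrow> ('q \<Rightarrow> 'a)" where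
  "descend G Q \<pi> \<omega> = (\<lambda>q\<in>carrier Q. \<omega> (inv_into (carrier G) \<pi> q))"

lemma descend_measurable:
  assumes surj: "\<pi> ` carrier G = carrier Q"
  shows "descend G Q \<pi> \<in> measurable (shift_space G A) (shift_space Q A)"
proof -
  have "inv_into (carrier G) \<pi> q \<in> carrier G" if "q \<in> carrier Q" for q
    using surj that by (metis inv_into_into)
  then show ?thesis
    unfolding descend_def[abs_def] shift_space_def
    by (intro measurable_restrict measurable_component_singleton)
qed

lemma Phi_descend:
  assumes G: "group G" and Q: "group Q" and hom: "\<pi> \<in> hom G Q" and surj: "\<pi> ` carrier G = carrier Q"
    and ker: "kernel G Q \<pi> = residual G"
    and \<omega>: "\<omega> \<in> PiE (carrier G) (\<lambda>_. A)" and inv: "residual_invariant G \<omega>"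
  shows "Phi G \<pi> (descend G Q \<pi> \<omega>) = \<omega>"
proof -
  have "\<omega> (inv_into (carrier G) \<pi> (\<pi> g)) = \<omega> g" if g: "g \<in> carrier G" for g
    using g surj by (intro residual_invariant_eq[OF G Q hom ker inv]) (auto intro: inv_into_into f_inv_into_f)
  moreover have "\<pi> g \<in> carrier Q" if "g \<in> carrier G" for g using hom that by (simp add: hom_in_carrier)
  ultimately show ?thesis
    using \<omega> by (auto simp: Phi_def descend_def fun_eq_iff PiE_iff extensional_def)
qed

lemma shift_descend:
  assumes G: "group G" and Q: "group Q" and hom: "\<pi> \<in> hom G Q" and surj: "\<pi> ` carrier G = carrier Q"
    and ker: "kernel G Q \<pi> = residual G" and inv: "residual_invariant G \<omega>"
    and h: "h \<in> carrier G"
  shows "shift Q (\<pi> h) (descend G Q \<pi> \<omega>) = descend G Q \<pi> (shift G h \<omega>)"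
proof -
  let ?s = "inv_into (carrier G) \<pi>"
  have s: "?s q \<in> carrier G" "\<pi> (?s q) = q" if "q \<in> carrier Q" for q
    using surj that by (auto intro: inv_into_into f_inv_into_f)
  have qh: "q \<otimes>\<^bsub>Q\<^esub> \<pi> h \<in> carrier Q" if "q \<in> carrier Q" for q
    using Q hom h that by (simp add: hom_in_carrier group.is_monoid monoid.m_closed)
  have "\<omega> (?s (q \<otimes>\<^bsub>Q\<^esub> \<pi> h)) = \<omega> (?s q \<otimes>\<^bsub>G\<^esub> h)" if q: "q \<in> carrier Q" for q
    using s[OF qh[OF q]] s[OF q] h G hom
    by (intro residual_invariant_eq[OF G Q hom ker inv]) (auto simp: hom_mult group.is_monoid monoid.m_closed)
  then show ?thesis using s qh by (auto simp: descend_def shift_def fun_eq_iff)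
qed

lemma InvProb_distr_descend:
  assumes G: "group G" and Q: "group Q" and hom: "\<pi> \<in> hom G Q" and surj: "\<pi> ` carrier G = carrier Q"
    and ker: "kernel G Q \<pi> = residual G"
    and \<mu>: "\<mu> \<in> InvProb G A" and ae: "AE \<omega> in \<mu>. residual_invariant G \<omega>"
  shows "distr \<mu> (shift_space Q A) (descend G Q \<pi>) \<in> InvProb Q A"
proof -
  have ms: "sets \<mu> = sets (shift_space G A)" and mp: "prob_space \<mu>"
    using \<mu> by (auto simp: InvProb_def Prob_meas_def)
  have dm: "descend G Q \<pi> \<in> measurable \<mu> (shift_space Q A)"
    by (rule measurable_from_sets[OF ms descend_measurable[OF surj]])
  show ?thesis unfolding InvProb_def Prob_meas_def
  proof (intro CollectI conjI ballI)
    show "prob_space (distr \<mu> (shift_space Q A) (descend G Q \<pi>))" by (rule prob_space.prob_space_distr[OF mp dm])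
  next
    fix q assume q: "q \<in> carrier Q"
    then obtain h where h: "h \<in> carrier G" "q = \<pi> h" using surj by blast
    have shm: "shift G h \<in> measurable \<mu> (shift_space G A)"
      by (rule measurable_from_sets[OF ms shift_measurable[OF G h(1)]])
    have "distr (distr \<mu> (shift_space Q A) (descend G Q \<pi>)) (shift_space Q A) (shift Q q)
        = distr \<mu> (shift_space Q A) (shift Q q \<circ> descend G Q \<pi>)"
      by (rule distr_distr[OF shift_measurable[OF Q q] dm])
    also have "\<dots> = distr \<mu> (shift_space Q A) (descend G Q \<pi> \<circ> shift G h)"
      using ae h shift_descend[OF G Q hom surj ker _ h(1)]
      by (intro distr_cong_AE measurable_comp[OF dm shift_measurable[OF Q q]]
          measurable_comp[OF shm descend_measurable[OF surj]]) auto
    also have "\<dots> = distr (distr \<mu> (shift_space G A) (shift G h)) (shift_space Q A) (descend G Q \<pi>)"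
      by (rule distr_distr[OF descend_measurable[OF surj] shm, symmetric])
    also have "distr \<mu> (shift_space G A) (shift G h) = \<mu>" using \<mu> h by (simp add: InvProb_def)
    finally show "distr (distr \<mu> (shift_space Q A) (descend G Q \<pi>)) (shift_space Q A) (shift Q q)
        = distr \<mu> (shift_space Q A) (descend G Q \<pi>)" .
  qed simp
qed

lemma Phi_push_distr_descend:
  assumes G: "group G" and Q: "group Q" and hom: "\<pi> \<in> hom G Q" and surj: "\<pi> ` carrier G = carrier Q"
    and ker: "kernel G Q \<pi> = residual G"
    and ms: "sets \<mu> = sets (shift_space G A)" and ae: "AE \<omega> in \<mu>. residual_invariant G \<omega>"
  shows "Phi_push G A \<pi> (distr \<mu> (shift_space Q A) (descend G Q \<pi>)) = \<mu>"
proof -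
  interpret pb: pullback_hom G Q \<pi> "\<lambda>x. x" A A by (rule pullback_hom.intro[OF G Q hom]) simp
  have Phim: "Phi G \<pi> \<in> measurable (shift_space Q A) (shift_space G A)"
    using pb.pullback_measurable by (simp add: Phi_def[abs_def] pullback_def[abs_def])
  have dm: "descend G Q \<pi> \<in> measurable \<mu> (shift_space Q A)"
    by (rule measurable_from_sets[OF ms descend_measurable[OF surj]])
  have "Phi_push G A \<pi> (distr \<mu> (shift_space Q A) (descend G Q \<pi>))
      = distr \<mu> (shift_space G A) (Phi G \<pi> \<circ> descend G Q \<pi>)"
    unfolding Phi_push_def by (rule distr_distr[OF Phim dm])
  also have "\<dots> = distr \<mu> (shift_space G A) (\<lambda>x. x)"
  proof (rule distr_cong_AE[OF refl refl])
    show "AE x in \<mu>. (Phi G \<pi> \<circ> descend G Q \<pi>) x = x"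
      by (rule AE_mp[OF ae AE_I2]) (simp add: Phi_descend[OF G Q hom surj ker] space_eq_shift_space[OF ms])
  qed (simp_all add: measurable_comp[OF dm Phim] measurable_ident_sets[OF ms])
  also have "\<dots> = \<mu>" by (rule distr_id2[OF ms[symmetric]])
  finally show ?thesis .
qed

lemma wstar_closure_periodic_in_Phi_push:
  assumes G: "group G" and Q: "group Q" and hom: "\<pi> \<in> hom G Q" and surj: "\<pi> ` carrier G = carrier Q"
    and ker: "kernel G Q \<pi> = residual G" and cG: "countable (carrier G)" and fA: "finite A"
    and cl: "\<mu> \<in> wstar_closure G A (periodic_meas G A)"
  shows "\<mu> \<in> Phi_push G A \<pi> ` InvProb Q A"
proof -
  have \<mu>: "\<mu> \<in> InvProb G A"
    by (rule wstar_closure_InvProb[OF G cG fA cl]) (auto simp: periodic_meas_def)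
  then have ms: "sets \<mu> = sets (shift_space G A)" by (simp add: InvProb_def Prob_meas_def)
  have ae: "AE \<omega> in \<mu>. residual_invariant G \<omega>" by (rule AE_wstar_closure_residual_invariant[OF G cG fA cl])
  show ?thesis
    using Phi_push_distr_descend[OF G Q hom surj ker ms ae] InvProb_distr_descend[OF G Q hom surj ker \<mu> ae]
    by (metis image_eqI)
qed

section \<open>Sofic models of a periodic measure\<close>

lemma bij_betw_filter:
  assumes "bij_betw f A B"
  shows "bij_betw f {x \<in> A. P (f x)} {y \<in> B. P y}"
  using assms by (auto simp: bij_betw_def inj_on_def)

lemma emeasure_distr_uniform_count_space:
  assumes V: "finite V" "V \<noteq> {}" and f: "f \<in> V \<rightarrow> space M" and B: "B \<in> sets M"
  shows "emeasure (distr (uniform_measure (count_space V) V) M f) B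
    = ennreal (real (card {n \<in> V. f n \<in> B}) / real (card V))"
proof -
  have "f \<in> measurable (count_space V) M" using f by (simp add: measurable_count_space_eq1)
  then have mf: "f \<in> measurable (uniform_measure (count_space V) V) M"
    by (rule measurable_from_sets[OF sets_uniform_measure])
  have "emeasure (distr (uniform_measure (count_space V) V) M f) B
      = emeasure (uniform_measure (count_space V) V) {n \<in> V. f n \<in> B}"
    using emeasure_distr[OF mf B] by (simp add: vimage_def Int_def conj_commute)
  also have "\<dots> = emeasure (count_space V) (V \<inter> {n \<in> V. f n \<in> B}) / emeasure (count_space V) V"
    by (rule emeasure_uniform_measure) auto
  also have "\<dots> = ennreal (real (card {n \<in> V. f n \<in> B})) / ennreal (real (card V))"
    using V(1) by (simp add: emeasure_count_space_finite Int_absorb1 ennreal_of_nat_eq_real_of_nat)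
  also have "\<dots> = ennreal (real (card {n \<in> V. f n \<in> B}) / real (card V))"
    using V by (intro divide_ennreal) (auto simp: card_gt_0_iff)
  finally show ?thesis .
qed

text \<open>\<open>W = support_perms G A \<nu>\<close> is the finite group of permutations of the support \<open>S\<close> induced
  by \<open>G\<close>; \<open>perm_enum\<close> numbers it by \<open>{0..<|W|}\<close> and \<open>perm_rep i\<close> is a group element inducing the
  \<open>i\<close>-th permutation. \<open>G\<close> acts on \<open>W\<close>, hence on the indices, by left multiplication. The product
  approximation lives on \<open>V' \<times> {0..<|W|}\<close>, coded into \<open>nat\<close> by \<open>prod_encode\<close>, and
  \<open>product_config\<close> writes \<open>\<omega> (perm_rep i)\<close> at the vertex \<open>(v, i)\<close>, so that the configuration seen
  from \<open>(v, i)\<close> is \<open>shift G (perm_rep i) \<omega>\<close>.\<close>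

definition support_perms :: "('g,'b) monoid_scheme \<Rightarrow> 'a set \<Rightarrow> ('g \<Rightarrow> 'a) measure \<Rightarrow> (('g \<Rightarrow> 'a) \<Rightarrow> ('g \<Rightarrow> 'a)) set" where
  "support_perms G A \<nu> = (\<lambda>g. restrict (shift G g) (msupport G A \<nu>)) ` carrier G"

definition perm_enum :: "('g,'b) monoid_scheme \<Rightarrow> 'a set \<Rightarrow> ('g \<Rightarrow> 'a) measure \<Rightarrow> nat \<Rightarrow> (('g \<Rightarrow> 'a) \<Rightarrow> ('g \<Rightarrow> 'a))" where
  "perm_enum G A \<nu> = (SOME \<beta>. bij_betw \<beta> {0..<card (support_perms G A \<nu>)} (support_perms G A \<nu>))"

definition perm_rep :: "('g,'b) monoid_scheme \<Rightarrow> 'a set \<Rightarrow> ('g \<Rightarrow> 'a) measure \<Rightarrow> nat \<Rightarrow> 'g" where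
  "perm_rep G A \<nu> i = (SOME x. x \<in> carrier G \<and> perm_enum G A \<nu> i = restrict (shift G x) (msupport G A \<nu>))"

definition perm_mult :: "('g,'b) monoid_scheme \<Rightarrow> 'a set \<Rightarrow> ('g \<Rightarrow> 'a) measure \<Rightarrow> 'g \<Rightarrow> (('g \<Rightarrow> 'a) \<Rightarrow> ('g \<Rightarrow> 'a)) \<Rightarrow> (('g \<Rightarrow> 'a) \<Rightarrow> ('g \<Rightarrow> 'a))" where
  "perm_mult G A \<nu> g w = restrict (\<lambda>\<omega>. shift G g (w \<omega>)) (msupport G A \<nu>)"

definition index_mult :: "('g,'b) monoid_scheme \<Rightarrow> 'a set \<Rightarrow> ('g \<Rightarrow> 'a) measure \<Rightarrow> 'g \<Rightarrow> nat \<Rightarrow> nat" where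
  "index_mult G A \<nu> g i = inv_into {0..<card (support_perms G A \<nu>)} (perm_enum G A \<nu>) (perm_mult G A \<nu> g (perm_enum G A \<nu> i))"

definition product_vertices :: "('g,'b) monoid_scheme \<Rightarrow> 'a set \<Rightarrow> ('g \<Rightarrow> 'a) measure \<Rightarrow> nat set \<Rightarrow> nat set" where
  "product_vertices G A \<nu> V' = prod_encode ` (V' \<times> {0..<card (support_perms G A \<nu>)})"

definition product_action :: "('g,'b) monoid_scheme \<Rightarrow> 'a set \<Rightarrow> ('g \<Rightarrow> 'a) measure \<Rightarrow> ('g \<Rightarrow> nat \<Rightarrow> nat) \<Rightarrow> 'g \<Rightarrow> nat \<Rightarrow> nat" where
  "product_action G A \<nu> \<sigma>' g n = prod_encode (\<sigma>' g (fst (prod_decode n)), index_mult G A \<nu> g (snd (prod_decode n)))"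

definition product_config :: "('g,'b) monoid_scheme \<Rightarrow> 'a set \<Rightarrow> ('g \<Rightarrow> 'a) measure \<Rightarrow> nat set \<Rightarrow> ('g \<Rightarrow> 'a) \<Rightarrow> (nat \<Rightarrow> 'a)" where
  "product_config G A \<nu> V' \<omega> = (\<lambda>n\<in>product_vertices G A \<nu> V'. \<omega> (perm_rep G A \<nu> (snd (prod_decode n))))"

definition product_model :: "('g,'b) monoid_scheme \<Rightarrow> 'a set \<Rightarrow> ('g \<Rightarrow> 'a) measure \<Rightarrow> nat set \<Rightarrow> (nat \<Rightarrow> 'a) measure" where
  "product_model G A \<nu> V' = distr \<nu> (PiM (product_vertices G A \<nu> V') (\<lambda>_. count_space A)) (product_config G A \<nu> V')"

locale periodic_measure =
  fixes G :: "('g,'b) monoid_scheme" and A :: "'a set" and \<nu> :: "('g \<Rightarrow> 'a) measure"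
  assumes G: "group G" and cG: "countable (carrier G)" and fA: "finite A"
    and per: "\<nu> \<in> periodic_meas G A"
begin

abbreviation "S \<equiv> msupport G A \<nu>"
abbreviation "W \<equiv> support_perms G A \<nu>"
abbreviation "m \<equiv> card (support_perms G A \<nu>)"
abbreviation "\<beta> \<equiv> perm_enum G A \<nu>"
abbreviation "\<Omega> \<equiv> PiE (carrier G) (\<lambda>_. A)"

lemma countable_alphabet: "countable A" using fA by (rule countable_finite)
lemma nu_InvProb: "\<nu> \<in> InvProb G A" using per by (simp add: periodic_meas_def)
lemma finite_support: "finite S" using per by (simp add: periodic_meas_def)
lemma support_subset: "S \<subseteq> \<Omega>" by (auto simp: msupport_def)
lemma sets_nu: "sets \<nu> = sets (shift_space G A)" using nu_InvProb by (simp add: InvProb_def Prob_meas_def)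
lemma prob_space_nu: "prob_space \<nu>" using nu_InvProb by (simp add: InvProb_def Prob_meas_def)
lemma space_nu: "space \<nu> = \<Omega>" by (rule space_eq_shift_space[OF sets_nu])
lemma shift_in_support: "\<omega> \<in> S \<Longrightarrow> g \<in> carrier G \<Longrightarrow> shift G g \<omega> \<in> S"
  by (rule shift_in_msupport[OF G cG countable_alphabet nu_InvProb])
lemma AE_in_support: "AE \<omega> in \<nu>. \<omega> \<in> S" by (rule AE_in_msupport[OF cG countable_alphabet sets_nu])

lemma one_closed: "\<one>\<^bsub>G\<^esub> \<in> carrier G" using G by (simp add: group.is_monoid monoid.one_closed)
lemma mult_closed: "a \<in> carrier G \<Longrightarrow> b \<in> carrier G \<Longrightarrow> a \<otimes>\<^bsub>G\<^esub> b \<in> carrier G"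
  using G by (simp add: group.is_monoid monoid.m_closed)
lemma inv_closed: "a \<in> carrier G \<Longrightarrow> inv\<^bsub>G\<^esub> a \<in> carrier G"
  using G by (simp add: group.inv_closed)

lemma support_perms_subset: "W \<subseteq> PiE S (\<lambda>_. S)"
proof
  fix w assume "w \<in> W"
  then obtain g where g: "g \<in> carrier G" "w = restrict (shift G g) S" by (auto simp: support_perms_def)
  show "w \<in> PiE S (\<lambda>_. S)" unfolding g(2)
  proof (rule PiE_I)
    fix x assume "x \<in> S" then show "restrict (shift G g) S x \<in> S" using shift_in_support[OF _ g(1)] by simp
  qed simp
qed

lemma finite_support_perms: "finite W"
  by (rule finite_subset[OF support_perms_subset]) (simp add: finite_PiE finite_support)

lemma card_support_perms_pos: "m > 0"
proof -
  have "restrict (shift G \<one>\<^bsub>G\<^esub>) S \<in> W" using one_closed by (auto simp: support_perms_def)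
  then have "W \<noteq> {}" by blast
  then show ?thesis using finite_support_perms by (simp add: card_gt_0_iff)
qed

lemma perm_enum_bij: "bij_betw \<beta> {0..<m} W"
proof -
  have "\<exists>\<beta>. bij_betw \<beta> {0..<m} W" using ex_bij_betw_nat_finite[OF finite_support_perms] .
  then show ?thesis unfolding perm_enum_def by (rule someI_ex)
qed

lemma perm_enum_in: "i < m \<Longrightarrow> \<beta> i \<in> W"
  using perm_enum_bij by (auto simp: bij_betw_def)

lemma perm_rep: assumes "i < m"
  shows "perm_rep G A \<nu> i \<in> carrier G" "\<beta> i = restrict (shift G (perm_rep G A \<nu> i)) S"
proof -
  have "\<exists>x. x \<in> carrier G \<and> \<beta> i = restrict (shift G x) S"
    using perm_enum_in[OF assms] by (auto simp: support_perms_def)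
  then have "perm_rep G A \<nu> i \<in> carrier G \<and> \<beta> i = restrict (shift G (perm_rep G A \<nu> i)) S"
    unfolding perm_rep_def by (rule someI_ex)
  then show "perm_rep G A \<nu> i \<in> carrier G" "\<beta> i = restrict (shift G (perm_rep G A \<nu> i)) S" by blast+
qed

lemma perm_mult_restrict:
  assumes "g \<in> carrier G" "x \<in> carrier G"
  shows "perm_mult G A \<nu> g (restrict (shift G x) S) = restrict (shift G (g \<otimes>\<^bsub>G\<^esub> x)) S"
  using assms by (auto simp: perm_mult_def fun_eq_iff shift_mult[OF G])

lemma perm_mult_closed: assumes "g \<in> carrier G" "w \<in> W" shows "perm_mult G A \<nu> g w \<in> W"
proof -
  obtain x where x: "x \<in> carrier G" "w = restrict (shift G x) S" using assms(2) by (auto simp: support_perms_def)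
  show ?thesis unfolding x(2) perm_mult_restrict[OF assms(1) x(1)] using mult_closed[OF assms(1) x(1)]
    by (auto simp: support_perms_def)
qed

lemma perm_mult_mult:
  assumes "g \<in> carrier G" "h \<in> carrier G" "w \<in> W"
  shows "perm_mult G A \<nu> g (perm_mult G A \<nu> h w) = perm_mult G A \<nu> (g \<otimes>\<^bsub>G\<^esub> h) w"
proof -
  obtain x where x: "x \<in> carrier G" "w = restrict (shift G x) S" using assms(3) by (auto simp: support_perms_def)
  show ?thesis unfolding x(2) using assms x
    by (simp add: perm_mult_restrict mult_closed G group.is_monoid monoid.m_assoc)
qed

lemma perm_mult_one:
  assumes "w \<in> W" shows "perm_mult G A \<nu> \<one>\<^bsub>G\<^esub> w = w"
proof -
  obtain x where x: "x \<in> carrier G" "w = restrict (shift G x) S" using assms by (auto simp: support_perms_def)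
  show ?thesis unfolding x(2) using x one_closed
    by (simp add: perm_mult_restrict G group.is_monoid monoid.l_one)
qed

lemma perm_mult_bij: assumes g: "g \<in> carrier G" shows "bij_betw (perm_mult G A \<nu> g) W W"
proof (rule bij_betw_byWitness[where f'="perm_mult G A \<nu> (inv\<^bsub>G\<^esub> g)"])
  show "\<forall>a\<in>W. perm_mult G A \<nu> (inv\<^bsub>G\<^esub> g) (perm_mult G A \<nu> g a) = a"
    using g by (simp add: perm_mult_mult inv_closed G group.l_inv perm_mult_one)
  show "\<forall>a\<in>W. perm_mult G A \<nu> g (perm_mult G A \<nu> (inv\<^bsub>G\<^esub> g) a) = a"
    using g by (simp add: perm_mult_mult inv_closed G group.r_inv perm_mult_one)
  show "perm_mult G A \<nu> g ` W \<subseteq> W" using perm_mult_closed[OF g] by blast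
  show "perm_mult G A \<nu> (inv\<^bsub>G\<^esub> g) ` W \<subseteq> W" using perm_mult_closed[OF inv_closed[OF g]] by blast
qed

lemma index_mult_in: assumes "g \<in> carrier G" "i < m"
  shows "index_mult G A \<nu> g i < m" "\<beta> (index_mult G A \<nu> g i) = perm_mult G A \<nu> g (\<beta> i)"
proof -
  have aw: "perm_mult G A \<nu> g (\<beta> i) \<in> W" by (rule perm_mult_closed[OF assms(1) perm_enum_in[OF assms(2)]])
  have "index_mult G A \<nu> g i \<in> {0..<m}" unfolding index_mult_def
    using bij_betw_inv_into[OF perm_enum_bij] aw by (auto simp: bij_betw_def)
  then show "index_mult G A \<nu> g i < m" by simp
  show "\<beta> (index_mult G A \<nu> g i) = perm_mult G A \<nu> g (\<beta> i)" unfolding index_mult_def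
    by (rule bij_betw_inv_into_right[OF perm_enum_bij aw])
qed

lemma index_mult_mult: assumes "g \<in> carrier G" "h \<in> carrier G" "i < m"
  shows "index_mult G A \<nu> g (index_mult G A \<nu> h i) = index_mult G A \<nu> (g \<otimes>\<^bsub>G\<^esub> h) i"
proof -
  have "index_mult G A \<nu> g (index_mult G A \<nu> h i) = inv_into {0..<m} \<beta> (perm_mult G A \<nu> g (perm_mult G A \<nu> h (\<beta> i)))"
    unfolding index_mult_def[of G A \<nu> g] using index_mult_in(2)[OF assms(2,3)] by simp
  also have "\<dots> = inv_into {0..<m} \<beta> (perm_mult G A \<nu> (g \<otimes>\<^bsub>G\<^esub> h) (\<beta> i))"
    using perm_mult_mult[OF assms(1,2) perm_enum_in[OF assms(3)]] by simp
  finally show ?thesis by (simp add: index_mult_def)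
qed

lemma index_mult_bij: assumes g: "g \<in> carrier G" shows "bij_betw (index_mult G A \<nu> g) {0..<m} {0..<m}"
proof -
  have "bij_betw (inv_into {0..<m} \<beta> \<circ> (perm_mult G A \<nu> g \<circ> \<beta>)) {0..<m} {0..<m}"
    by (intro bij_betw_trans[OF bij_betw_trans[OF perm_enum_bij perm_mult_bij[OF g]] bij_betw_inv_into[OF perm_enum_bij]])
  moreover have "inv_into {0..<m} \<beta> \<circ> (perm_mult G A \<nu> g \<circ> \<beta>) = index_mult G A \<nu> g"
    by (simp add: index_mult_def fun_eq_iff)
  ultimately show ?thesis by simp
qed

lemma emeasure_nu: "emeasure \<nu> B = ennreal (measure \<nu> B)"
  using prob_space_nu by (simp add: prob_space_def finite_measure.emeasure_eq_measure)

lemma singleton_sets_shift_space: assumes "\<omega> \<in> \<Omega>" shows "{\<omega>} \<in> sets (shift_space G A)"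
proof -
  have "cylinder G A (carrier G) \<omega> = {\<omega>}"
    using assms by (auto simp: cylinder_def intro: PiE_ext)
  then show ?thesis using cylinder_sets[OF cG order_refl, of A \<omega>] by simp
qed

lemma singleton_sets_nu: "\<omega> \<in> S \<Longrightarrow> {\<omega>} \<in> sets \<nu>"
  using singleton_sets_shift_space support_subset sets_nu by blast

lemma subset_support_sets: "T \<subseteq> S \<Longrightarrow> T \<in> sets \<nu>"
proof -
  assume T: "T \<subseteq> S"
  then have "finite T" using finite_support finite_subset by blast
  then have "(\<Union>x\<in>T. {x}) \<in> sets \<nu>" using T singleton_sets_nu by (intro sets.finite_UN) auto
  then show ?thesis by simp
qed

lemma emeasure_singleton_support_pos: assumes w: "\<omega> \<in> S" shows "emeasure \<nu> {\<omega>} > 0"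
proof -
  have wX: "\<omega> \<in> \<Omega>" using w support_subset by blast
  obtain K where K: "finite K" "K \<subseteq> carrier G" and sep: "\<And>x. x \<in> S \<Longrightarrow> x \<in> cylinder G A K \<omega> \<Longrightarrow> x = \<omega>"
    using cylinder_separates_finite[OF finite_support support_subset wX] by blast
  have "\<omega> \<in> cylinder G A K \<omega>" using wX by (simp add: cylinder_def)
  then have "0 < emeasure \<nu> (cylinder G A K \<omega>)"
    using w openin_cylinder[OF K] unfolding msupport_def by blast
  also have "emeasure \<nu> (cylinder G A K \<omega>) = emeasure \<nu> {\<omega>}"
  proof (rule emeasure_eq_AE)
    show "AE x in \<nu>. (x \<in> cylinder G A K \<omega>) = (x \<in> {\<omega>})"
      by (rule AE_mp[OF AE_in_support AE_I2]) (use sep wX in \<open>auto simp: cylinder_def\<close>)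
    show "cylinder G A K \<omega> \<in> sets \<nu>" using sets_nu K by (simp add: cylinder_sets countable_finite)
  qed (rule singleton_sets_nu[OF w])
  finally show ?thesis .
qed

lemma shift_inj: assumes "g \<in> carrier G" "x \<in> \<Omega>" "y \<in> \<Omega>" "shift G g x = shift G g y" shows "x = y"
  using shift_inv_left[OF G assms(1) assms(2)] shift_inv_left[OF G assms(1) assms(3)] assms(4) by metis

lemma emeasure_singleton_shift: assumes w: "\<omega> \<in> S" and g: "g \<in> carrier G"
  shows "emeasure \<nu> {shift G g \<omega>} = emeasure \<nu> {\<omega>}"
proof -
  have wX: "\<omega> \<in> \<Omega>" using w support_subset by blast
  have sw: "shift G g \<omega> \<in> \<Omega>" by (rule shift_in_PiE[OF G g wX])
  have "emeasure \<nu> {shift G g \<omega>} = emeasure \<nu> (shift G g -` {shift G g \<omega>} \<inter> \<Omega>)"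
    by (rule InvProb_emeasure_vimage[OF G nu_InvProb g singleton_sets_shift_space[OF sw]])
  also have "shift G g -` {shift G g \<omega>} \<inter> \<Omega> = {\<omega>}"
    using wX shift_inj[OF g] by blast
  finally show ?thesis .
qed

end

locale ergodic_periodic_measure = periodic_measure +
  assumes erg: "\<nu> \<in> ergodic_meas G A"
begin

lemma support_single_orbit: assumes w: "\<omega> \<in> S" and t: "\<tau> \<in> S" shows "\<exists>y\<in>carrier G. \<tau> = shift G y \<omega>"
proof (rule ccontr)
  assume no: "\<not> (\<exists>y\<in>carrier G. \<tau> = shift G y \<omega>)"
  have wX: "\<omega> \<in> \<Omega>" using w support_subset by blast
  define Orb where "Orb = (\<lambda>g. shift G g \<omega>) ` carrier G"
  have Os: "Orb \<in> sets \<nu>" using shift_in_support[OF w] by (intro subset_support_sets) (auto simp: Orb_def)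
  have "\<omega> \<in> Orb" using shift_one[OF G wX] one_closed by (force simp: Orb_def)
  then have "emeasure \<nu> {\<omega>} \<le> emeasure \<nu> Orb" using Os by (intro emeasure_mono) auto
  then have "measure \<nu> Orb \<noteq> 0" using emeasure_singleton_support_pos[OF w] by (simp add: emeasure_nu)
  moreover have "measure \<nu> Orb = 0 \<or> measure \<nu> Orb = 1"
    using erg Os shift_vimage_orbit[OF G wX] space_nu unfolding ergodic_meas_def Orb_def by auto
  ultimately have "measure \<nu> (space \<nu> - Orb) = 0" using prob_space.prob_compl[OF prob_space_nu Os] by simp
  moreover have "{\<tau>} \<subseteq> space \<nu> - Orb" using no t support_subset space_nu by (auto simp: Orb_def)
  ultimately have "measure \<nu> {\<tau>} = 0"
    using finite_measure.finite_measure_mono[of \<nu> "{\<tau>}" "space \<nu> - Orb"] Os prob_space_nu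
    by (simp add: prob_space_def measure_nonneg antisym)
  then show False using emeasure_singleton_support_pos[OF t] by (simp add: emeasure_nu)
qed

lemma support_nonempty: "S \<noteq> {}"
proof
  assume "S = {}"
  then have "AE x in \<nu>. False" using AE_in_support by simp
  then show False using prob_space_nu by (simp add: prob_space.AE_False)
qed

lemma measure_uniform_on_support:
  assumes B: "B \<in> sets \<nu>"
  shows "measure \<nu> B * real (card S) = real (card (B \<inter> S))"
proof -
  obtain \<omega>0 where w0: "\<omega>0 \<in> S" using support_nonempty by blast
  define c where "c = emeasure \<nu> {\<omega>0}"
  have cst: "\<And>\<tau>. \<tau> \<in> S \<Longrightarrow> emeasure \<nu> {\<tau>} = c"
    using support_single_orbit[OF w0] emeasure_singleton_shift[OF w0] by (auto simp: c_def)
  have sumS: "emeasure \<nu> T = of_nat (card T) * c" if T: "T \<subseteq> S" for T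
  proof -
    have fT: "finite T" using T finite_support finite_subset by blast
    have "emeasure \<nu> T = (\<Sum>x\<in>T. emeasure \<nu> {x})"
      using T singleton_sets_nu by (intro emeasure_eq_sum_singleton[OF fT]) auto
    also have "\<dots> = (\<Sum>x\<in>T. c)" using T cst by (intro sum.cong) auto
    finally show ?thesis by simp
  qed
  have "emeasure \<nu> B = emeasure \<nu> (B \<inter> S)"
    by (rule emeasure_eq_AE[OF AE_mp[OF AE_in_support AE_I2] B]) (auto intro: subset_support_sets)
  then have eB: "emeasure \<nu> B = of_nat (card (B \<inter> S)) * c" using sumS[of "B \<inter> S"] by simp
  have "emeasure \<nu> (space \<nu>) = emeasure \<nu> S"
    by (rule emeasure_eq_AE[OF AE_mp[OF AE_in_support AE_I2] sets.top subset_support_sets[OF order_refl]]) (use support_subset space_nu in auto)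
  then have one: "1 = of_nat (card S) * c" using sumS[of S] prob_space_nu by (simp add: prob_space.emeasure_space_1)
  have "emeasure \<nu> B * of_nat (card S) = (of_nat (card S) * c) * of_nat (card (B \<inter> S))"
    unfolding eB by (metis mult.assoc mult.commute)
  then have "emeasure \<nu> B * of_nat (card S) = of_nat (card (B \<inter> S))"
    unfolding one[symmetric] by simp
  then have "ennreal (measure \<nu> B * real (card S)) = ennreal (real (card (B \<inter> S)))"
    by (simp add: emeasure_nu ennreal_of_nat_eq_real_of_nat ennreal_mult)
  then show ?thesis by (simp add: measure_nonneg)
qed

lemma support_perms_bij: assumes w: "w \<in> W" shows "bij_betw w S S"
proof -
  obtain g where g: "g \<in> carrier G" "w = restrict (shift G g) S" using w by (auto simp: support_perms_def)
  show ?thesis unfolding g(2)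
  proof (rule bij_betw_byWitness[where f'="restrict (shift G (inv\<^bsub>G\<^esub> g)) S"])
    show "\<forall>a\<in>S. restrict (shift G (inv\<^bsub>G\<^esub> g)) S (restrict (shift G g) S a) = a"
    proof
      fix a assume a: "a \<in> S"
      then have aX: "a \<in> \<Omega>" using support_subset by blast
      show "restrict (shift G (inv\<^bsub>G\<^esub> g)) S (restrict (shift G g) S a) = a"
        using a shift_in_support[OF a g(1)] shift_inv_left[OF G g(1) aX] by simp
    qed
    show "\<forall>a\<in>S. restrict (shift G g) S (restrict (shift G (inv\<^bsub>G\<^esub> g)) S a) = a"
    proof
      fix a assume a: "a \<in> S"
      then have aX: "a \<in> \<Omega>" using support_subset by blast
      show "restrict (shift G g) S (restrict (shift G (inv\<^bsub>G\<^esub> g)) S a) = a"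
        using a shift_in_support[OF a inv_closed[OF g(1)]] shift_inv_right[OF G g(1) aX] by simp
    qed
    show "restrict (shift G g) S ` S \<subseteq> S" using shift_in_support[OF _ g(1)] by auto
    show "restrict (shift G (inv\<^bsub>G\<^esub> g)) S ` S \<subseteq> S" using shift_in_support[OF _ inv_closed[OF g(1)]] by auto
  qed
qed

lemma perm_comp_shift:
  assumes g: "g \<in> carrier G" and y: "y \<in> carrier G"
  shows "restrict (restrict (shift G g) S \<circ> shift G y) S = restrict (shift G (g \<otimes>\<^bsub>G\<^esub> y)) S"
proof
  fix x
  show "restrict (restrict (shift G g) S \<circ> shift G y) S x = restrict (shift G (g \<otimes>\<^bsub>G\<^esub> y)) S x"
    using shift_in_support[of x y] y shift_mult[OF G g y, of x] by simp
qed

lemma support_perms_right_mult_bij: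
  assumes y: "y \<in> carrier G"
  shows "bij_betw (\<lambda>u. restrict (u \<circ> shift G y) S) W W"
proof -
  have iy: "inv\<^bsub>G\<^esub> y \<in> carrier G" by (rule inv_closed[OF y])
  have mult_image: "restrict (u \<circ> shift G z) S \<in> W" if "u \<in> W" "z \<in> carrier G" for u z
  proof -
    obtain g where g: "g \<in> carrier G" "u = restrict (shift G g) S" using \<open>u \<in> W\<close> by (auto simp: support_perms_def)
    show ?thesis using perm_comp_shift[OF g(1) \<open>z \<in> carrier G\<close>] mult_closed[OF g(1) \<open>z \<in> carrier G\<close>] g(2)
      by (auto simp: support_perms_def)
  qed
  have cancel: "restrict (restrict (u \<circ> shift G a) S \<circ> shift G b) S = u"
    if "u \<in> W" "a \<in> carrier G" "b \<in> carrier G" "a \<otimes>\<^bsub>G\<^esub> b = \<one>\<^bsub>G\<^esub>" for u a b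
  proof -
    obtain g where g: "g \<in> carrier G" "u = restrict (shift G g) S" using \<open>u \<in> W\<close> by (auto simp: support_perms_def)
    have "g \<otimes>\<^bsub>G\<^esub> a \<otimes>\<^bsub>G\<^esub> b = g"
      using that g(1) G by (simp add: group.is_monoid monoid.m_assoc monoid.r_one)
    then show ?thesis
      using g perm_comp_shift[OF g(1) \<open>a \<in> carrier G\<close>] perm_comp_shift[OF mult_closed[OF g(1) \<open>a \<in> carrier G\<close>] \<open>b \<in> carrier G\<close>]
      by simp
  qed
  show ?thesis
  proof (rule bij_betw_byWitness[where f'="\<lambda>u. restrict (u \<circ> shift G (inv\<^bsub>G\<^esub> y)) S"])
    show "\<forall>u\<in>W. restrict (restrict (u \<circ> shift G y) S \<circ> shift G (inv\<^bsub>G\<^esub> y)) S = u"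
      using cancel y iy G by (simp add: group.r_inv)
    show "\<forall>u\<in>W. restrict (restrict (u \<circ> shift G (inv\<^bsub>G\<^esub> y)) S \<circ> shift G y) S = u"
      using cancel y iy G by (simp add: group.l_inv)
  qed (use mult_image y iy in auto)
qed

lemma card_perms_hitting_invariant:
  assumes w: "\<omega> \<in> S" and t: "\<tau> \<in> S"
  shows "card {u \<in> W. u \<tau> \<in> B} = card {u \<in> W. u \<omega> \<in> B}"
proof -
  obtain y where y: "y \<in> carrier G" "\<tau> = shift G y \<omega>" using support_single_orbit[OF w t] by blast
  have "card {u \<in> W. u \<tau> \<in> B} = card {u \<in> W. restrict (u \<circ> shift G y) S \<omega> \<in> B}"
    using w y by simp
  also have "\<dots> = card {u \<in> W. u \<omega> \<in> B}"
    by (rule bij_betw_same_card[OF bij_betw_filter[OF support_perms_right_mult_bij[OF y(1)]]])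
  finally show ?thesis .
qed

text \<open>Double counting of the pairs \<open>(u, \<tau>) \<in> W \<times> S\<close> with \<open>u \<tau> \<in> B\<close>.\<close>

lemma card_perms_hitting:
  assumes w: "\<omega> \<in> S"
  shows "card {u \<in> W. u \<omega> \<in> B} * card S = m * card (B \<inter> S)"
proof -
  have ind: "card {x \<in> T. P x} = (\<Sum>x\<in>T. if P x then 1 else 0)" if "finite T" for T and P :: "_ \<Rightarrow> bool"
    using sum.inter_filter[OF that, of "\<lambda>_. 1::nat" P] by simp
  have "card {u \<in> W. u \<omega> \<in> B} * card S = (\<Sum>\<tau>\<in>S. card {u \<in> W. u \<tau> \<in> B})"
    using card_perms_hitting_invariant[OF w] by simp
  also have "\<dots> = (\<Sum>\<tau>\<in>S. \<Sum>u\<in>W. if u \<tau> \<in> B then 1 else 0)"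
    using ind[OF finite_support_perms] by simp
  also have "\<dots> = (\<Sum>u\<in>W. \<Sum>\<tau>\<in>S. if u \<tau> \<in> B then 1 else 0)"
    by (rule sum.swap)
  also have "\<dots> = (\<Sum>u\<in>W. card (B \<inter> S))"
  proof (rule sum.cong[OF refl])
    fix u assume u: "u \<in> W"
    have "card {\<tau> \<in> S. u \<tau> \<in> B} = card {x \<in> S. x \<in> B}"
      by (rule bij_betw_same_card[OF bij_betw_filter[OF support_perms_bij[OF u]]])
    moreover have "{x \<in> S. x \<in> B} = B \<inter> S" by blast
    ultimately show "(\<Sum>\<tau>\<in>S. if u \<tau> \<in> B then 1 else 0) = card (B \<inter> S)"
      using ind[OF finite_support, of "\<lambda>\<tau>. u \<tau> \<in> B"] by simp
  qed
  finally show ?thesis by simp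
qed

lemma card_perms_hitting_ratio:
  assumes w: "\<omega> \<in> S" and B: "B \<in> sets \<nu>"
  shows "real (card {u \<in> W. u \<omega> \<in> B}) / real m = measure \<nu> B"
proof -
  let ?k = "card {u \<in> W. u \<omega> \<in> B}"
  have "?k * card S = card (B \<inter> S) * m" using card_perms_hitting[OF w, of B] by (simp add: mult.commute)
  then have k: "real ?k * real (card S) = real (card (B \<inter> S)) * real m"
    by (simp only: of_nat_mult[symmetric])
  have S0: "real (card S) \<noteq> 0" using support_nonempty finite_support by simp
  have m0: "real m \<noteq> 0" using card_support_perms_pos by simp
  have "real ?k / real m = real (card (B \<inter> S)) / real (card S)"
    using k S0 m0 by (simp add: frac_eq_eq)
  also have "\<dots> = measure \<nu> B"
    using measure_uniform_on_support[OF B] S0 by (simp add: divide_eq_eq)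
  finally show ?thesis .
qed

end

locale periodic_product = periodic_measure G A \<nu> for G :: "('g,'b) monoid_scheme" and A :: "'a set" and \<nu> +
  fixes V' :: "nat set" and \<sigma>' :: "'g \<Rightarrow> nat \<Rightarrow> nat"
  assumes finV: "finite V'" and bijV: "\<And>g. g \<in> carrier G \<Longrightarrow> bij_betw (\<sigma>' g) V' V'"
begin

abbreviation "V \<equiv> product_vertices G A \<nu> V'"
abbreviation "\<sigma> \<equiv> product_action G A \<nu> \<sigma>'"

lemma sofic_perm_closed: "g \<in> carrier G \<Longrightarrow> v \<in> V' \<Longrightarrow> \<sigma>' g v \<in> V'"
  using bijV by (auto simp: bij_betw_def)

lemma product_vertices_encode: "prod_encode (v, i) \<in> V \<longleftrightarrow> v \<in> V' \<and> i < m"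
  using inj_prod_encode[of UNIV] by (auto simp: product_vertices_def inj_on_def)

lemma product_vertices_decode: "n \<in> V \<Longrightarrow> fst (prod_decode n) \<in> V' \<and> snd (prod_decode n) < m"
  by (auto simp: product_vertices_def prod_encode_inverse)

lemma finite_product_vertices: "finite V" using finV by (simp add: product_vertices_def)

lemma card_prod_encode: "card (prod_encode ` (B \<times> C)) = card B * card C"
  using inj_prod_encode[of "B \<times> C"] by (simp add: card_image card_cartesian_product)

lemma card_product_vertices: "card V = card V' * m"
  unfolding product_vertices_def by (simp add: card_prod_encode)

lemma card_product_vertices_pos: "V' \<noteq> {} \<Longrightarrow> card V > 0"
  using card_product_vertices card_support_perms_pos finV by (simp add: card_gt_0_iff)

lemma product_action_encode: "\<sigma> g (prod_encode (v, i)) = prod_encode (\<sigma>' g v, index_mult G A \<nu> g i)"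
  by (simp add: product_action_def prod_encode_inverse)

lemma product_action_closed: "g \<in> carrier G \<Longrightarrow> n \<in> V \<Longrightarrow> \<sigma> g n \<in> V"
  using product_vertices_decode[of n] sofic_perm_closed index_mult_in(1) by (auto simp: product_action_def product_vertices_encode)

lemma product_action_bij: assumes g: "g \<in> carrier G" shows "bij_betw (\<sigma> g) V V"
proof (rule bij_betw_byWitness[where f'="\<lambda>n. prod_encode (inv_into V' (\<sigma>' g) (fst (prod_decode n)),
           inv_into {0..<m} (index_mult G A \<nu> g) (snd (prod_decode n)))"])
  have b1: "bij_betw (\<sigma>' g) V' V'" by (rule bijV[OF g])
  have b2: "bij_betw (index_mult G A \<nu> g) {0..<m} {0..<m}" by (rule index_mult_bij[OF g])
  show "\<forall>a\<in>V. prod_encode (inv_into V' (\<sigma>' g) (fst (prod_decode (\<sigma> g a))),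
           inv_into {0..<m} (index_mult G A \<nu> g) (snd (prod_decode (\<sigma> g a)))) = a"
  proof
    fix a assume a: "a \<in> V"
    have d: "fst (prod_decode a) \<in> V'" "snd (prod_decode a) \<in> {0..<m}" using product_vertices_decode[OF a] by auto
    show "prod_encode (inv_into V' (\<sigma>' g) (fst (prod_decode (\<sigma> g a))),
           inv_into {0..<m} (index_mult G A \<nu> g) (snd (prod_decode (\<sigma> g a)))) = a"
      using bij_betw_inv_into_left[OF b1 d(1)] bij_betw_inv_into_left[OF b2 d(2)]
      by (simp add: product_action_def prod_encode_inverse prod_decode_inverse)
  qed
  show "\<forall>a\<in>V. \<sigma> g (prod_encode (inv_into V' (\<sigma>' g) (fst (prod_decode a)),
           inv_into {0..<m} (index_mult G A \<nu> g) (snd (prod_decode a)))) = a"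
  proof
    fix a assume a: "a \<in> V"
    have d: "fst (prod_decode a) \<in> V'" "snd (prod_decode a) \<in> {0..<m}" using product_vertices_decode[OF a] by auto
    show "\<sigma> g (prod_encode (inv_into V' (\<sigma>' g) (fst (prod_decode a)),
           inv_into {0..<m} (index_mult G A \<nu> g) (snd (prod_decode a)))) = a"
      using bij_betw_inv_into_right[OF b1 d(1)] bij_betw_inv_into_right[OF b2 d(2)]
      by (simp add: product_action_def prod_encode_inverse prod_decode_inverse)
  qed
  show "\<sigma> g ` V \<subseteq> V" using product_action_closed[OF g] by blast
  show "(\<lambda>n. prod_encode (inv_into V' (\<sigma>' g) (fst (prod_decode n)),
           inv_into {0..<m} (index_mult G A \<nu> g) (snd (prod_decode n)))) ` V \<subseteq> V"
  proof
    fix b assume "b \<in> (\<lambda>n. prod_encode (inv_into V' (\<sigma>' g) (fst (prod_decode n)),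
           inv_into {0..<m} (index_mult G A \<nu> g) (snd (prod_decode n)))) ` V"
    then obtain a where a: "a \<in> V" and b: "b = prod_encode (inv_into V' (\<sigma>' g) (fst (prod_decode a)),
           inv_into {0..<m} (index_mult G A \<nu> g) (snd (prod_decode a)))" by blast
    have d: "fst (prod_decode a) \<in> V'" "snd (prod_decode a) \<in> {0..<m}" using product_vertices_decode[OF a] by auto
    have "inv_into V' (\<sigma>' g) (fst (prod_decode a)) \<in> V'"
      using bij_betw_inv_into[OF b1] d(1) by (auto simp: bij_betw_def)
    moreover have "inv_into {0..<m} (index_mult G A \<nu> g) (snd (prod_decode a)) \<in> {0..<m}"
      using bij_betw_inv_into[OF b2] d(2) by (auto simp: bij_betw_def)
    ultimately show "b \<in> V" unfolding b by (simp add: product_vertices_encode)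
  qed
qed

lemma product_composition_set:
  assumes g: "g \<in> carrier G" and h: "h \<in> carrier G"
  shows "{n \<in> V. \<sigma> g (\<sigma> h n) = \<sigma> (g \<otimes>\<^bsub>G\<^esub> h) n}
       = prod_encode ` ({v \<in> V'. \<sigma>' g (\<sigma>' h v) = \<sigma>' (g \<otimes>\<^bsub>G\<^esub> h) v} \<times> {0..<m})"
proof -
  have "\<sigma> g (\<sigma> h (prod_encode (v, i))) = \<sigma> (g \<otimes>\<^bsub>G\<^esub> h) (prod_encode (v, i)) \<longleftrightarrow>
        \<sigma>' g (\<sigma>' h v) = \<sigma>' (g \<otimes>\<^bsub>G\<^esub> h) v" if i: "i < m" for v i
    using index_mult_mult[OF g h i] by (simp add: product_action_encode prod_encode_eq)
  then show ?thesis unfolding product_vertices_def by (auto simp: prod_encode_eq)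
qed

lemma product_free_set:
  assumes g: "g \<in> carrier G"
  shows "prod_encode ` ({v \<in> V'. \<sigma>' g v \<noteq> v} \<times> {0..<m}) \<subseteq> {n \<in> V. \<sigma> g n \<noteq> n}"
  by (auto simp: product_action_encode prod_encode_eq product_vertices_encode)

lemma product_composition_ratio:
  assumes g: "g \<in> carrier G" and h: "h \<in> carrier G"
  shows "real (card {n \<in> V. \<sigma> g (\<sigma> h n) = \<sigma> (g \<otimes>\<^bsub>G\<^esub> h) n}) / real (card V)
       = real (card {v \<in> V'. \<sigma>' g (\<sigma>' h v) = \<sigma>' (g \<otimes>\<^bsub>G\<^esub> h) v}) / real (card V')"
  using card_support_perms_pos by (simp add: product_composition_set[OF g h] card_prod_encode card_product_vertices)

lemma product_free_ratio:
  assumes g: "g \<in> carrier G"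
  shows "real (card {v \<in> V'. \<sigma>' g v \<noteq> v}) / real (card V') \<le> real (card {n \<in> V. \<sigma> g n \<noteq> n}) / real (card V)"
    "real (card {n \<in> V. \<sigma> g n \<noteq> n}) / real (card V) \<le> 1"
proof -
  have "card (prod_encode ` ({v \<in> V'. \<sigma>' g v \<noteq> v} \<times> {0..<m})) \<le> card {n \<in> V. \<sigma> g n \<noteq> n}"
    by (rule card_mono[OF _ product_free_set[OF g]]) (simp add: finite_product_vertices)
  then have le: "card {v \<in> V'. \<sigma>' g v \<noteq> v} * m \<le> card {n \<in> V. \<sigma> g n \<noteq> n}" by (simp add: card_prod_encode)
  show "real (card {v \<in> V'. \<sigma>' g v \<noteq> v}) / real (card V') \<le> real (card {n \<in> V. \<sigma> g n \<noteq> n}) / real (card V)"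
  proof (cases "card V' = 0")
    case True then show ?thesis by simp
  next
    case False
    have "real (card {v \<in> V'. \<sigma>' g v \<noteq> v}) / real (card V') = real (card {v \<in> V'. \<sigma>' g v \<noteq> v} * m) / real (card V)"
      using card_support_perms_pos False by (simp add: card_product_vertices)
    also have "\<dots> \<le> real (card {n \<in> V. \<sigma> g n \<noteq> n}) / real (card V)"
    proof (rule divide_right_mono)
      show "real (card {v \<in> V'. \<sigma>' g v \<noteq> v} * m) \<le> real (card {n \<in> V. \<sigma> g n \<noteq> n})"
        using le by (simp only: of_nat_le_iff)
    qed simp
    finally show ?thesis .
  qed
  have "card {n \<in> V. \<sigma> g n \<noteq> n} \<le> card V" by (rule card_mono[OF finite_product_vertices]) auto
  then show "real (card {n \<in> V. \<sigma> g n \<noteq> n}) / real (card V) \<le> 1"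
    by (cases "card V = 0") simp_all
qed

lemma product_config_measurable: "product_config G A \<nu> V' \<in> measurable (shift_space G A) (PiM V (\<lambda>_. count_space A))"
  unfolding product_config_def shift_space_def
proof (rule measurable_restrict)
  fix n assume n: "n \<in> V"
  have "perm_rep G A \<nu> (snd (prod_decode n)) \<in> carrier G" using perm_rep(1) product_vertices_decode[OF n] by blast
  then show "(\<lambda>\<omega>. \<omega> (perm_rep G A \<nu> (snd (prod_decode n)))) \<in> measurable (PiM (carrier G) (\<lambda>_. count_space A)) (count_space A)"
    by (rule measurable_component_singleton)
qed

lemma product_config_measurable_nu: "product_config G A \<nu> V' \<in> measurable \<nu> (PiM V (\<lambda>_. count_space A))"
  by (rule measurable_from_sets[OF sets_nu product_config_measurable])

lemma product_model_prob: "prob_space (product_model G A \<nu> V')" "sets (product_model G A \<nu> V') = sets (PiM V (\<lambda>_. count_space A))"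
  unfolding product_model_def using prob_space.prob_space_distr[OF prob_space_nu product_config_measurable_nu] by simp_all

lemma Pi_at_measurable: assumes n: "n \<in> V"
  shows "Pi_at G \<sigma> n \<in> measurable (PiM V (\<lambda>_. count_space A)) (shift_space G A)"
  unfolding Pi_at_def[abs_def] shift_space_def
proof (rule measurable_restrict)
  fix g assume g: "g \<in> carrier G"
  show "(\<lambda>\<rho>. \<rho> (\<sigma> g n)) \<in> measurable (PiM V (\<lambda>_. count_space A)) (count_space A)"
    by (rule measurable_component_singleton[OF product_action_closed[OF g n]])
qed

lemma Pi_at_product_config:
  assumes n: "n \<in> V" and w: "\<omega> \<in> S"
  shows "Pi_at G \<sigma> n (product_config G A \<nu> V' \<omega>) = shift G (perm_rep G A \<nu> (snd (prod_decode n))) \<omega>"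
proof -
  let ?i = "snd (prod_decode n)"
  have i: "?i < m" using product_vertices_decode[OF n] by blast
  have xi: "perm_rep G A \<nu> ?i \<in> carrier G" by (rule perm_rep(1)[OF i])
  have "\<omega> (perm_rep G A \<nu> (index_mult G A \<nu> g ?i)) = \<omega> (g \<otimes>\<^bsub>G\<^esub> perm_rep G A \<nu> ?i)" if g: "g \<in> carrier G" for g
  proof -
    let ?j = "index_mult G A \<nu> g ?i"
    have j: "?j < m" by (rule index_mult_in(1)[OF g i])
    have xj: "perm_rep G A \<nu> ?j \<in> carrier G" by (rule perm_rep(1)[OF j])
    have "restrict (shift G (perm_rep G A \<nu> ?j)) S = restrict (shift G (g \<otimes>\<^bsub>G\<^esub> perm_rep G A \<nu> ?i)) S"
      using perm_rep(2)[OF j] index_mult_in(2)[OF g i] perm_rep(2)[OF i] perm_mult_restrict[OF g xi] by simp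
    then have "shift G (perm_rep G A \<nu> ?j) \<omega> = shift G (g \<otimes>\<^bsub>G\<^esub> perm_rep G A \<nu> ?i) \<omega>"
      using w by (metis restrict_apply')
    then have "shift G (perm_rep G A \<nu> ?j) \<omega> \<one>\<^bsub>G\<^esub> = shift G (g \<otimes>\<^bsub>G\<^esub> perm_rep G A \<nu> ?i) \<omega> \<one>\<^bsub>G\<^esub>" by simp
    then show ?thesis using one_closed xj mult_closed[OF g xi] G
      by (simp add: shift_def group.is_monoid monoid.l_one)
  qed
  moreover have "\<And>g. g \<in> carrier G \<Longrightarrow> \<sigma> g n \<in> V" using product_action_closed n by blast
  moreover have "\<And>g. g \<in> carrier G \<Longrightarrow> snd (prod_decode (\<sigma> g n)) = index_mult G A \<nu> g ?i"
    by (simp add: product_action_def prod_encode_inverse)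
  ultimately show ?thesis by (auto simp: Pi_at_def product_config_def shift_def fun_eq_iff)
qed

lemma local_law_product_model:
  assumes n: "n \<in> V"
  shows "distr (product_model G A \<nu> V') (shift_space G A) (Pi_at G \<sigma> n) = \<nu>"
proof -
  let ?x = "perm_rep G A \<nu> (snd (prod_decode n))"
  have xc: "?x \<in> carrier G" using perm_rep(1) product_vertices_decode[OF n] by blast
  have "distr (product_model G A \<nu> V') (shift_space G A) (Pi_at G \<sigma> n) = distr \<nu> (shift_space G A) (Pi_at G \<sigma> n \<circ> product_config G A \<nu> V')"
    unfolding product_model_def by (rule distr_distr[OF Pi_at_measurable[OF n] product_config_measurable_nu])
  also have "\<dots> = distr \<nu> (shift_space G A) (shift G ?x)"
  proof (rule distr_cong_AE[OF refl refl])
    show "AE x in \<nu>. (Pi_at G \<sigma> n \<circ> product_config G A \<nu> V') x = shift G ?x x"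
      by (rule AE_mp[OF AE_in_support AE_I2]) (simp add: Pi_at_product_config[OF n])
    show "Pi_at G \<sigma> n \<circ> product_config G A \<nu> V' \<in> measurable \<nu> (shift_space G A)"
      by (rule measurable_comp[OF product_config_measurable_nu Pi_at_measurable[OF n]])
    show "shift G ?x \<in> measurable \<nu> (shift_space G A)"
      by (rule measurable_from_sets[OF sets_nu shift_measurable[OF G xc]])
  qed
  also have "\<dots> = \<nu>" using nu_InvProb xc by (simp add: InvProb_def)
  finally show ?thesis .
qed

lemma local_law_ratio:
  assumes "V' \<noteq> {}" and "\<nu> \<in> U"
  shows "real (card {n \<in> V. distr (product_model G A \<nu> V') (shift_space G A) (Pi_at G \<sigma> n) \<in> U})
      / real (card V) = 1"
proof -
  have "{n \<in> V. distr (product_model G A \<nu> V') (shift_space G A) (Pi_at G \<sigma> n) \<in> U} = V"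
    using local_law_product_model assms(2) by auto
  then show ?thesis using card_product_vertices_pos[OF assms(1)] by simp
qed

end

locale ergodic_periodic_product = periodic_product G A \<nu> V' \<sigma>' + ergodic_periodic_measure G A \<nu>
  for G :: "('g,'b) monoid_scheme" and A :: "'a set" and \<nu> V' \<sigma>'
begin

lemma product_vertices_filter: "{n \<in> V. P (snd (prod_decode n))} = prod_encode ` (V' \<times> {i \<in> {0..<m}. P i})"
proof
  show "{n \<in> V. P (snd (prod_decode n))} \<subseteq> prod_encode ` (V' \<times> {i \<in> {0..<m}. P i})"
  proof
    fix n assume n: "n \<in> {n \<in> V. P (snd (prod_decode n))}"
    then have "prod_decode n \<in> V' \<times> {i \<in> {0..<m}. P i}"
      using product_vertices_decode[of n] by (simp add: mem_Times_iff)
    then show "n \<in> prod_encode ` (V' \<times> {i \<in> {0..<m}. P i})"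
      by (rule image_eqI[rotated]) (simp add: prod_decode_inverse)
  qed
  show "prod_encode ` (V' \<times> {i \<in> {0..<m}. P i}) \<subseteq> {n \<in> V. P (snd (prod_decode n))}"
  proof
    fix n assume "n \<in> prod_encode ` (V' \<times> {i \<in> {0..<m}. P i})"
    then obtain v i where "v \<in> V'" "i < m" "P i" "n = prod_encode (v, i)" by auto
    then show "n \<in> {n \<in> V. P (snd (prod_decode n))}" by (simp add: product_vertices_encode prod_encode_inverse)
  qed
qed

lemma card_vertices_hitting:
  assumes w: "\<omega> \<in> S"
  shows "card {n \<in> V. Pi_at G \<sigma> n (product_config G A \<nu> V' \<omega>) \<in> B} = card V' * card {u \<in> W. u \<omega> \<in> B}"
proof -
  have "Pi_at G \<sigma> n (product_config G A \<nu> V' \<omega>) = perm_enum G A \<nu> (snd (prod_decode n)) \<omega>" if "n \<in> V" for n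
    using Pi_at_product_config[OF that w] perm_rep(2) product_vertices_decode[OF that] w by simp
  then have "{n \<in> V. Pi_at G \<sigma> n (product_config G A \<nu> V' \<omega>) \<in> B}
      = {n \<in> V. perm_enum G A \<nu> (snd (prod_decode n)) \<omega> \<in> B}"
    by auto
  also have "\<dots> = prod_encode ` (V' \<times> {i \<in> {0..<m}. perm_enum G A \<nu> i \<omega> \<in> B})"
    by (rule product_vertices_filter)
  finally have "card {n \<in> V. Pi_at G \<sigma> n (product_config G A \<nu> V' \<omega>) \<in> B}
      = card V' * card {i \<in> {0..<m}. perm_enum G A \<nu> i \<omega> \<in> B}"
    by (simp add: card_prod_encode)
  also have "card {i \<in> {0..<m}. perm_enum G A \<nu> i \<omega> \<in> B} = card {u \<in> W. u \<omega> \<in> B}"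
    by (rule bij_betw_same_card[OF bij_betw_filter[OF perm_enum_bij]])
  finally show ?thesis .
qed

lemma empirical_product_config:
  assumes w: "\<omega> \<in> S" and V'ne: "V' \<noteq> {}"
  shows "empirical G A V \<sigma> (product_config G A \<nu> V' \<omega>) = \<nu>"
  unfolding empirical_def
proof (rule measure_eqI)
  let ?f = "\<lambda>n. Pi_at G \<sigma> n (product_config G A \<nu> V' \<omega>)"
  show "sets (distr (uniform_measure (count_space V) V) (shift_space G A) ?f) = sets \<nu>"
    using sets_nu by simp
  fix B assume "B \<in> sets (distr (uniform_measure (count_space V) V) (shift_space G A) ?f)"
  then have Bs: "B \<in> sets (shift_space G A)" by simp
  have f: "?f \<in> V \<rightarrow> space (shift_space G A)"
  proof
    fix n assume n: "n \<in> V"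
    have "snd (prod_decode n) < m" using product_vertices_decode[OF n] by simp
    moreover have "\<omega> \<in> \<Omega>" using w support_subset by blast
    ultimately show "?f n \<in> space (shift_space G A)"
      using Pi_at_product_config[OF n w] shift_in_PiE[OF G perm_rep(1)] by simp
  qed
  have Vne: "V \<noteq> {}" using card_product_vertices_pos[OF V'ne] by auto
  have V'0: "real (card V') \<noteq> 0" using V'ne finV by simp
  have "emeasure (distr (uniform_measure (count_space V) V) (shift_space G A) ?f) B
      = ennreal (real (card {n \<in> V. ?f n \<in> B}) / real (card V))"
    by (rule emeasure_distr_uniform_count_space[OF finite_product_vertices Vne f Bs])
  also have "\<dots> = ennreal (real (card {u \<in> W. u \<omega> \<in> B}) / real m)"
    using V'0 card_vertices_hitting[OF w] card_product_vertices by simp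
  also have "\<dots> = emeasure \<nu> B"
    using card_perms_hitting_ratio[OF w] Bs sets_nu by (simp add: emeasure_nu)
  finally show "emeasure (distr (uniform_measure (count_space V) V) (shift_space G A) ?f) B = emeasure \<nu> B" .
qed

lemma sets_PiM_finite_all:
  assumes T: "T \<subseteq> PiE V (\<lambda>_. A)"
  shows "T \<in> sets (PiM V (\<lambda>_. count_space A))"
proof -
  have fT: "finite T" using T finite_subset finite_PiE[OF finite_product_vertices, of "\<lambda>_. A"] fA by blast
  have single: "{\<rho>} \<in> sets (PiM V (\<lambda>_. count_space A))" if r: "\<rho> \<in> PiE V (\<lambda>_. A)" for \<rho>
  proof -
    have "PiE V (\<lambda>n. {\<rho> n}) = {\<rho>}"
    proof
      show "PiE V (\<lambda>n. {\<rho> n}) \<subseteq> {\<rho>}"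
      proof
        fix x assume x: "x \<in> PiE V (\<lambda>n. {\<rho> n})"
        have "x = \<rho>"
        proof (rule extensionalityI[of _ V])
          show "x \<in> extensional V" using x by (simp add: PiE_iff)
          show "\<rho> \<in> extensional V" using r by (simp add: PiE_iff)
          fix n assume "n \<in> V" then show "x n = \<rho> n" using x by (auto simp: PiE_iff)
        qed
        then show "x \<in> {\<rho>}" by simp
      qed
      show "{\<rho>} \<subseteq> PiE V (\<lambda>n. {\<rho> n})" using r by (auto simp: PiE_iff)
    qed
    moreover have "PiE V (\<lambda>n. {\<rho> n}) \<in> sets (PiM V (\<lambda>_. count_space A))"
      using r by (intro sets_PiM_I_finite[OF finite_product_vertices]) auto
    ultimately show ?thesis by simp
  qed
  have "(\<Union>\<rho>\<in>T. {\<rho>}) \<in> sets (PiM V (\<lambda>_. count_space A))"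
    using T single by (intro sets.finite_UN[OF fT]) auto
  then show ?thesis by simp
qed

lemma measure_empirical_in:
  assumes V'ne: "V' \<noteq> {}" and U: "\<nu> \<in> U"
  shows "measure (product_model G A \<nu> V') {\<rho> \<in> space (product_model G A \<nu> V'). empirical G A V \<sigma> \<rho> \<in> U} = 1"
proof -
  let ?M = "product_model G A \<nu> V'"
  let ?B = "{\<rho> \<in> space ?M. empirical G A V \<sigma> \<rho> \<in> U}"
  have spM: "space ?M = PiE V (\<lambda>_. A)" by (simp add: product_model_def space_PiM)
  have Bs: "?B \<in> sets (PiM V (\<lambda>_. count_space A))" by (rule sets_PiM_finite_all) (use spM in auto)
  have "measure ?M ?B = measure (distr \<nu> (PiM V (\<lambda>_. count_space A)) (product_config G A \<nu> V')) ?B"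
    by (simp add: product_model_def)
  also have "\<dots> = measure \<nu> (product_config G A \<nu> V' -` ?B \<inter> space \<nu>)"
    by (rule measure_distr[OF product_config_measurable_nu Bs])
  finally have "measure ?M ?B = measure \<nu> (product_config G A \<nu> V' -` ?B \<inter> space \<nu>)" .
  moreover have "S \<subseteq> product_config G A \<nu> V' -` ?B \<inter> space \<nu>"
  proof
    fix \<omega> assume w: "\<omega> \<in> S"
    then have wn: "\<omega> \<in> space \<nu>" using support_subset space_nu by blast
    have "product_config G A \<nu> V' \<omega> \<in> space (PiM V (\<lambda>_. count_space A))"
      using measurable_space[OF product_config_measurable_nu wn] .
    then have "product_config G A \<nu> V' \<omega> \<in> space ?M" by (simp add: product_model_def)
    moreover have "empirical G A V \<sigma> (product_config G A \<nu> V' \<omega>) \<in> U" using empirical_product_config[OF w V'ne] U by simp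
    ultimately show "\<omega> \<in> product_config G A \<nu> V' -` ?B \<inter> space \<nu>" using wn by simp
  qed
  moreover have "measure \<nu> S = 1"
  proof -
    have "emeasure \<nu> S = emeasure \<nu> (space \<nu>)"
      by (rule emeasure_eq_AE[OF AE_mp[OF AE_in_support AE_I2] subset_support_sets[OF order_refl] sets.top]) (use support_subset space_nu in auto)
    then have "emeasure \<nu> S = 1" using prob_space_nu by (simp add: prob_space.emeasure_space_1)
    then show ?thesis by (simp add: emeasure_nu)
  qed
  moreover have "product_config G A \<nu> V' -` ?B \<inter> space \<nu> \<in> sets \<nu>"
    by (rule measurable_sets[OF product_config_measurable_nu Bs])
  ultimately show ?thesis
    using finite_measure.finite_measure_mono[of \<nu> S "product_config G A \<nu> V' -` ?B \<inter> space \<nu>"] prob_space_nu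
      prob_space.prob_le_1[OF prob_space_nu, of "product_config G A \<nu> V' -` ?B \<inter> space \<nu>"]
    by (simp add: prob_space_def)
qed

end

section \<open>Sofic models of limits of periodic measures\<close>

lemma countable_finite_exhaustion:
  assumes "countable C"
  obtains J :: "nat \<Rightarrow> 'a set" where "\<And>k. finite (J k)" "\<And>k. J k \<subseteq> C"
    "\<And>F. finite F \<Longrightarrow> F \<subseteq> C \<Longrightarrow> \<forall>\<^sub>F k in sequentially. F \<subseteq> J k"
proof -
  define J where "J k = C \<inter> from_nat_into C ` {..<k}" for k
  show ?thesis
  proof (rule that[of J])
    show "finite (J k)" "J k \<subseteq> C" for k by (auto simp: J_def)
    fix F assume F: "finite F" "F \<subseteq> C"
    show "\<forall>\<^sub>F k in sequentially. F \<subseteq> J k"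
    proof (rule eventually_sequentiallyI)
      fix k assume k: "Suc (Max (insert 0 (to_nat_on C ` F))) \<le> k"
      show "F \<subseteq> J k"
      proof
        fix x assume x: "x \<in> F"
        have "to_nat_on C x \<le> Max (insert 0 (to_nat_on C ` F))" using x F(1) by (intro Max_ge) auto
        then have "to_nat_on C x \<in> {..<k}" using k by simp
        moreover have "from_nat_into C (to_nat_on C x) = x"
          using x F(2) assms by (intro from_nat_into_to_nat_on) auto
        ultimately show "x \<in> J k" using x F(2) unfolding J_def by (metis IntI image_eqI subsetD)
      qed
    qed
  qed
qed

text \<open>The weak* topology on \<open>Prob(A^G)\<close> is first countable, witnessed by the countably many
  indicators of cylinders; so a point of a weak* closure is the limit of a sequence.\<close>

lemma wstar_closure_cylinder_sequence:
  fixes G :: "('g,'b) monoid_scheme" and A :: "'a set"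
  assumes cG: "countable (carrier G)" and fA: "finite A" and cl: "\<mu> \<in> wstar_closure G A S"
  obtains \<nu> where "\<And>k. \<nu> k \<in> S" "\<And>k. \<nu> k \<in> Prob_meas G A"
    "\<And>J y. finite J \<Longrightarrow> J \<subseteq> carrier G \<Longrightarrow> y \<in> PiE J (\<lambda>_. A) \<Longrightarrow>
      (\<lambda>k. measure (\<nu> k) (cylinder G A J y)) \<longlonglongrightarrow> measure \<mu> (cylinder G A J y)"
proof -
  have ms: "sets \<mu> = sets (shift_space G A)" using cl by (simp add: wstar_closure_def Prob_meas_def)
  obtain Jk where Jk: "\<And>k. finite (Jk k)" "\<And>k. Jk k \<subseteq> carrier G"
    and exhaust: "\<And>F. finite F \<Longrightarrow> F \<subseteq> carrier G \<Longrightarrow> \<forall>\<^sub>F k in sequentially. F \<subseteq> Jk k"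
    using countable_finite_exhaustion[OF cG] by blast
  define Fk where "Fk k = (\<lambda>(J, y). indicator (cylinder G A J y) :: ('g \<Rightarrow> 'a) \<Rightarrow> real)
    ` (SIGMA J:Pow (Jk k). PiE J (\<lambda>_. A))" for k
  have "\<exists>\<nu>\<in>S. \<nu> \<in> Prob_meas G A \<and>
      (\<forall>f\<in>Fk k. \<bar>integral\<^sup>L \<nu> f - integral\<^sup>L \<mu> f\<bar> < inverse (real (Suc k)))" for k
  proof (rule wstar_closure_approx[OF cl])
    have "finite (PiE J (\<lambda>_. A))" if "J \<in> Pow (Jk k)" for J
      using that Jk(1) fA by (auto intro: finite_PiE finite_subset)
    then show "finite (Fk k)" unfolding Fk_def using Jk(1) by (intro finite_imageI finite_SigmaI) auto
    show "\<forall>f\<in>Fk k. continuous_map (shift_top G A) euclideanreal f"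
    proof
      fix f assume "f \<in> Fk k"
      then obtain J y where J: "J \<subseteq> Jk k" and f: "f = indicator (cylinder G A J y)" unfolding Fk_def by auto
      have "finite J" "J \<subseteq> carrier G" using J Jk finite_subset by blast+
      then show "continuous_map (shift_top G A) euclideanreal f"
        unfolding f by (rule continuous_map_indicator_determined_by[OF _ _ cylinder_determined_by])
    qed
  qed simp
  then obtain \<nu> where \<nu>: "\<And>k. \<nu> k \<in> S" "\<And>k. \<nu> k \<in> Prob_meas G A"
    "\<And>k. \<forall>f\<in>Fk k. \<bar>integral\<^sup>L (\<nu> k) f - integral\<^sup>L \<mu> f\<bar> < inverse (real (Suc k))"
    by metis
  have conv: "(\<lambda>k. measure (\<nu> k) (cylinder G A J y)) \<longlonglongrightarrow> measure \<mu> (cylinder G A J y)"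
    if J: "finite J" "J \<subseteq> carrier G" and y: "y \<in> PiE J (\<lambda>_. A)" for J y
  proof -
    have "\<forall>\<^sub>F k in sequentially.
        norm (measure (\<nu> k) (cylinder G A J y) - measure \<mu> (cylinder G A J y)) \<le> inverse (real (Suc k))"
      using exhaust[OF J]
    proof (rule eventually_mono)
      fix k assume "J \<subseteq> Jk k"
      then have "indicator (cylinder G A J y) \<in> Fk k" unfolding Fk_def using y by force
      then have "\<bar>integral\<^sup>L (\<nu> k) (indicator (cylinder G A J y)) - integral\<^sup>L \<mu> (indicator (cylinder G A J y))\<bar>
          < inverse (real (Suc k))"
        using \<nu>(3) by blast
      moreover have "sets (\<nu> k) = sets (shift_space G A)" using \<nu>(2) by (simp add: Prob_meas_def)
      then have "integral\<^sup>L (\<nu> k) (indicator (cylinder G A J y)) = measure (\<nu> k) (cylinder G A J y)"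
        by (rule integral_indicator_shift_space[OF _ cylinder_subset])
      moreover have "integral\<^sup>L \<mu> (indicator (cylinder G A J y)) = measure \<mu> (cylinder G A J y)"
        using ms by (rule integral_indicator_shift_space[OF _ cylinder_subset])
      ultimately show "norm (measure (\<nu> k) (cylinder G A J y) - measure \<mu> (cylinder G A J y))
          \<le> inverse (real (Suc k))"
        by (metis less_imp_le real_norm_def)
    qed
    then have "(\<lambda>k. measure (\<nu> k) (cylinder G A J y) - measure \<mu> (cylinder G A J y)) \<longlonglongrightarrow> 0"
      by (rule Lim_null_comparison[OF _ LIMSEQ_inverse_real_of_nat])
    then show ?thesis by (rule LIM_zero_cancel)
  qed
  show ?thesis
  proof (rule that)
    show "\<nu> k \<in> S" "\<nu> k \<in> Prob_meas G A" for k by (rule \<nu>(1), rule \<nu>(2))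
  qed (rule conv)
qed

lemma wstar_closure_sequence:
  fixes G :: "('g,'b) monoid_scheme" and A :: "'a set"
  assumes G: "monoid G" and cG: "countable (carrier G)" and fA: "finite A"
    and cl: "\<mu> \<in> wstar_closure G A S"
  obtains \<nu> where "\<And>k. \<nu> k \<in> S" "\<And>U. wstar_nbhd G A \<mu> U \<Longrightarrow> \<forall>\<^sub>F k in sequentially. \<nu> k \<in> U"
proof -
  have mP: "\<mu> \<in> Prob_meas G A" using cl by (simp add: wstar_closure_def)
  have ms: "sets \<mu> = sets (shift_space G A)" and mp: "prob_space \<mu>" using mP by (auto simp: Prob_meas_def)
  have "A \<noteq> {}" by (rule Prob_meas_alphabet_nonempty[OF G mP])
  obtain \<nu> where \<nu>: "\<And>k. \<nu> k \<in> S" "\<And>k. \<nu> k \<in> Prob_meas G A"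
    and conv: "\<And>J y. finite J \<Longrightarrow> J \<subseteq> carrier G \<Longrightarrow> y \<in> PiE J (\<lambda>_. A) \<Longrightarrow>
      (\<lambda>k. measure (\<nu> k) (cylinder G A J y)) \<longlonglongrightarrow> measure \<mu> (cylinder G A J y)"
    using wstar_closure_cylinder_sequence[OF cG fA cl] by blast
  show ?thesis
  proof (rule that)
    show "\<nu> k \<in> S" for k by (rule \<nu>(1))
    fix U assume U: "wstar_nbhd G A \<mu> U"
    show "\<forall>\<^sub>F k in sequentially. \<nu> k \<in> U"
      by (rule eventually_wstar_nbhd_if_cylinders_tendsto[OF mp ms \<nu>(2) fA \<open>A \<noteq> {}\<close> cG conv U])
  qed
qed

lemma sofic_approx_eventually_nonempty:
  assumes "monoid G" and "sofic_approx G V \<sigma>"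
  shows "\<forall>\<^sub>F n in sequentially. V n \<noteq> {}"
proof -
  let ?one = "\<one>\<^bsub>G\<^esub>"
  have "(\<lambda>n. real (card {v \<in> V n. \<sigma> n ?one (\<sigma> n ?one v) = \<sigma> n (?one \<otimes>\<^bsub>G\<^esub> ?one) v}) / real (card (V n)))
      \<longlonglongrightarrow> 1"
    using assms monoid.one_closed[OF assms(1)] unfolding sofic_approx_def by blast
  then have "\<forall>\<^sub>F n in sequentially.
      0 < real (card {v \<in> V n. \<sigma> n ?one (\<sigma> n ?one v) = \<sigma> n (?one \<otimes>\<^bsub>G\<^esub> ?one) v}) / real (card (V n))"
    by (rule order_tendstoD(1)) simp
  then show ?thesis by (rule eventually_mono) auto
qed

lemma sofic_approx_product:
  assumes G: "group G" and cG: "countable (carrier G)" and fA: "finite A"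
    and per: "\<And>k. \<nu> k \<in> periodic_meas G A" and sa: "sofic_approx G V' \<sigma>'"
  shows "sofic_approx G (\<lambda>k. product_vertices G A (\<nu> k) (V' k)) (\<lambda>k. product_action G A (\<nu> k) (\<sigma>' k))"
    (is "sofic_approx G ?V ?\<sigma>")
proof -
  have pp: "periodic_product G A (\<nu> k) (V' k) (\<sigma>' k)" for k
    using sa by (intro periodic_product.intro periodic_measure.intro periodic_product_axioms.intro G cG fA per)
      (auto simp: sofic_approx_def)
  show ?thesis
    unfolding sofic_approx_def
  proof (intro conjI allI ballI impI)
    show "finite (?V n)" for n by (rule periodic_product.finite_product_vertices[OF pp])
  next
    fix n g assume "g \<in> carrier G"
    then show "bij_betw (?\<sigma> n g) (?V n) (?V n)" by (rule periodic_product.product_action_bij[OF pp])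
  next
    fix g h assume g: "g \<in> carrier G" and h: "h \<in> carrier G"
    then show "(\<lambda>n. real (card {v \<in> ?V n. ?\<sigma> n g (?\<sigma> n h v) = ?\<sigma> n (g \<otimes>\<^bsub>G\<^esub> h) v}) / real (card (?V n)))
        \<longlonglongrightarrow> 1"
      using sa unfolding sofic_approx_def periodic_product.product_composition_ratio[OF pp g h] by blast
  next
    fix g assume g: "g \<in> carrier G" and g1: "g \<noteq> \<one>\<^bsub>G\<^esub>"
    have "(\<lambda>n. real (card {v \<in> V' n. \<sigma>' n g v \<noteq> v}) / real (card (V' n))) \<longlonglongrightarrow> 1"
      using sa g g1 unfolding sofic_approx_def by blast
    then show "(\<lambda>n. real (card {v \<in> ?V n. ?\<sigma> n g v \<noteq> v}) / real (card (?V n))) \<longlonglongrightarrow> 1"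
      by (rule tendsto_sandwich[rotated 2, OF _ tendsto_const])
        (use periodic_product.product_free_ratio[OF pp g] in \<open>auto intro: always_eventually\<close>)
  qed
qed

lemma sofic_model_product:
  assumes G: "group G" and cG: "countable (carrier G)" and fA: "finite A"
    and per: "\<And>k. \<nu> k \<in> periodic_meas G A" and sa: "sofic_approx G V' \<sigma>'"
    and lim: "\<And>U. wstar_nbhd G A \<mu> U \<Longrightarrow> \<forall>\<^sub>F k in sequentially. \<nu> k \<in> U"
  shows "sofic_model G A (\<lambda>k. product_vertices G A (\<nu> k) (V' k)) (\<lambda>k. product_action G A (\<nu> k) (\<sigma>' k))
    (\<lambda>k. product_model G A (\<nu> k) (V' k)) \<mu>"
proof -
  have pp: "periodic_product G A (\<nu> k) (V' k) (\<sigma>' k)" for k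
    using sa by (intro periodic_product.intro periodic_measure.intro periodic_product_axioms.intro G cG fA per)
      (auto simp: sofic_approx_def)
  have ne: "\<forall>\<^sub>F k in sequentially. V' k \<noteq> {}"
    using sofic_approx_eventually_nonempty[OF group.is_monoid[OF G] sa] .
  show ?thesis
    unfolding sofic_model_def
  proof (intro conjI allI impI sofic_approx_product[OF G cG fA per sa])
    show "prob_space (product_model G A (\<nu> k) (V' k))"
      "sets (product_model G A (\<nu> k) (V' k)) = sets (PiM (product_vertices G A (\<nu> k) (V' k)) (\<lambda>_. count_space A))"
      for k using periodic_product.product_model_prob[OF pp] by auto
    fix U assume "wstar_nbhd G A \<mu> U"
    with ne have "\<forall>\<^sub>F k in sequentially. V' k \<noteq> {} \<and> \<nu> k \<in> U"
      using lim eventually_conj by blast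
    then show "(\<lambda>k. real (card {v \<in> product_vertices G A (\<nu> k) (V' k).
        distr (product_model G A (\<nu> k) (V' k)) (shift_space G A) (Pi_at G (product_action G A (\<nu> k) (\<sigma>' k)) v) \<in> U})
        / real (card (product_vertices G A (\<nu> k) (V' k)))) \<longlonglongrightarrow> 1"
      by (rule tendsto_eventually[OF eventually_mono]) (use periodic_product.local_law_ratio[OF pp] in blast)
  qed
qed

lemma ergodic_sofic_model_product:
  assumes G: "group G" and cG: "countable (carrier G)" and fA: "finite A"
    and per: "\<And>k. \<nu> k \<in> periodic_meas G A" and erg: "\<And>k. \<nu> k \<in> ergodic_meas G A"
    and sa: "sofic_approx G V' \<sigma>'"
    and lim: "\<And>U. wstar_nbhd G A \<mu> U \<Longrightarrow> \<forall>\<^sub>F k in sequentially. \<nu> k \<in> U"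
  shows "ergodic_sofic_model G A (\<lambda>k. product_vertices G A (\<nu> k) (V' k))
    (\<lambda>k. product_action G A (\<nu> k) (\<sigma>' k)) (\<lambda>k. product_model G A (\<nu> k) (V' k)) \<mu>"
proof -
  have epp: "ergodic_periodic_product G A (\<nu> k) (V' k) (\<sigma>' k)" for k
    using sa by (intro ergodic_periodic_product.intro periodic_product.intro periodic_measure.intro
        periodic_product_axioms.intro ergodic_periodic_measure.intro ergodic_periodic_measure_axioms.intro
        G cG fA per erg) (auto simp: sofic_approx_def)
  have ne: "\<forall>\<^sub>F k in sequentially. V' k \<noteq> {}"
    using sofic_approx_eventually_nonempty[OF group.is_monoid[OF G] sa] .
  show ?thesis
    unfolding ergodic_sofic_model_def
  proof (intro conjI allI impI sofic_model_product[OF G cG fA per sa lim])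
    fix U assume "wstar_nbhd G A \<mu> U"
    with ne have "\<forall>\<^sub>F k in sequentially. V' k \<noteq> {} \<and> \<nu> k \<in> U"
      using lim eventually_conj by blast
    then show "(\<lambda>k. measure (product_model G A (\<nu> k) (V' k)) {\<rho> \<in> space (product_model G A (\<nu> k) (V' k)).
        empirical G A (product_vertices G A (\<nu> k) (V' k)) (product_action G A (\<nu> k) (\<sigma>' k)) \<rho> \<in> U}) \<longlonglongrightarrow> 1"
      by (rule tendsto_eventually[OF eventually_mono])
        (use ergodic_periodic_product.measure_empirical_in[OF epp] in blast)
  qed
qed

lemma has_sofic_model_if_wstar_closure_periodic:
  assumes G: "group G" and cG: "countable (carrier G)" and fA: "finite A" and "sofic G"
    and cl: "\<mu> \<in> wstar_closure G A (periodic_meas G A)"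
  shows "has_sofic_model G A \<mu>"
proof -
  obtain V' \<sigma>' where sa: "sofic_approx G V' \<sigma>'" using \<open>sofic G\<close> by (auto simp: sofic_def)
  obtain \<nu> where "\<And>k. \<nu> k \<in> periodic_meas G A" "\<And>U. wstar_nbhd G A \<mu> U \<Longrightarrow> \<forall>\<^sub>F k in sequentially. \<nu> k \<in> U"
    using wstar_closure_sequence[OF group.is_monoid[OF G] cG fA cl] by blast
  then show ?thesis
    unfolding has_sofic_model_def using sofic_model_product[OF G cG fA _ sa] by blast
qed

lemma has_ergodic_sofic_model_if_wstar_closure_periodic_ergodic:
  assumes G: "group G" and cG: "countable (carrier G)" and fA: "finite A" and "sofic G"
    and cl: "\<mu> \<in> wstar_closure G A (periodic_meas G A \<inter> ergodic_meas G A)"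
  shows "has_ergodic_sofic_model G A \<mu>"
proof -
  obtain V' \<sigma>' where sa: "sofic_approx G V' \<sigma>'" using \<open>sofic G\<close> by (auto simp: sofic_def)
  obtain \<nu> where "\<And>k. \<nu> k \<in> periodic_meas G A \<inter> ergodic_meas G A"
    "\<And>U. wstar_nbhd G A \<mu> U \<Longrightarrow> \<forall>\<^sub>F k in sequentially. \<nu> k \<in> U"
    using wstar_closure_sequence[OF group.is_monoid[OF G] cG fA cl] by blast
  then show ?thesis
    unfolding has_ergodic_sofic_model_def using ergodic_sofic_model_product[OF G cG fA _ _ sa] by blast
qed

theorem mainTheorem9:
  fixes G :: "'g monoid" and Q :: "'q monoid" and A :: "'a set" and \<pi> :: "'g \<Rightarrow> 'q"
  assumes "group G" and "group Q" and "fin_gen G" and "sofic G" and "finite A"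
    and "\<pi> \<in> hom G Q" and "\<pi> ` carrier G = carrier Q"
  shows
    "(PA Q \<longrightarrow>
        Phi_push G A \<pi> ` InvProb Q A \<subseteq> wstar_closure G A (periodic_meas G A) \<and>
        (\<forall>\<mu> \<in> Phi_push G A \<pi> ` InvProb Q A. has_sofic_model G A \<mu>)) \<and>
     (EPA Q \<longrightarrow>
        Phi_push G A \<pi> ` InvProb Q A
          \<subseteq> wstar_closure G A (periodic_meas G A \<inter> ergodic_meas G A) \<and>
        (\<forall>\<mu> \<in> Phi_push G A \<pi> ` InvProb Q A. has_ergodic_sofic_model G A \<mu>)) \<and>
     (kernel G Q \<pi> = residual G \<longrightarrow>
        (PA Q \<longrightarrow> Phi_push G A \<pi> ` InvProb Q A = wstar_closure G A (periodic_meas G A)) \<and>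
        (EPA Q \<longrightarrow> Phi_push G A \<pi> ` InvProb Q A
                     = wstar_closure G A (periodic_meas G A \<inter> ergodic_meas G A)))"
proof -
  note G = assms(1) and Q = assms(2) and sof = assms(4) and fA = assms(5)
    and hom = assms(6) and surj = assms(7)
  have cG: "countable (carrier G)" using G assms(3) by (rule countable_carrier_fin_gen)
  let ?push = "Phi_push G A \<pi> ` InvProb Q A"
  let ?per = "periodic_meas G A" and ?erg = "periodic_meas G A \<inter> ergodic_meas G A"
  have "?push \<subseteq> wstar_closure G A ?per" if "PA Q"
    using G Q hom surj cG fA that by (rule PA_Phi_push_subset_wstar_closure)
  moreover have "?push \<subseteq> wstar_closure G A ?erg" if "EPA Q"
    using G Q hom surj cG fA that by (rule EPA_Phi_push_subset_wstar_closure)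
  moreover have "wstar_closure G A ?per \<subseteq> ?push" if "kernel G Q \<pi> = residual G"
    using wstar_closure_periodic_in_Phi_push[OF G Q hom surj that cG fA] by blast
  moreover have "wstar_closure G A ?erg \<subseteq> wstar_closure G A ?per"
    by (rule wstar_closure_mono) blast
  moreover have "has_sofic_model G A \<mu>" if "\<mu> \<in> wstar_closure G A ?per" for \<mu>
    using G cG fA sof that by (rule has_sofic_model_if_wstar_closure_periodic)
  moreover have "has_ergodic_sofic_model G A \<mu>" if "\<mu> \<in> wstar_closure G A ?erg" for \<mu>
    using G cG fA sof that by (rule has_ergodic_sofic_model_if_wstar_closure_periodic_ergodic)
  ultimately show ?thesis by blast
qed

end
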